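(* In the setting of the construction below, if $a_{ii}\not\equiv0\pmod n$ for some $i$, then the associator $\Phi$ of $A$ is nontrivial, and the quasi-Hopf algebra $A$ (with coproduct $\Delta_{\mathbb J}$ and associator $\Phi$) is not twist equivalent to a Hopf algebra.
   Context: Setting: $n\ge2$, $q$ a primitive root of unity of order $n^2$, $m\ge1$; $H$ a finite dimensional Hopf algebra over $\mathbb{C}$ generated by grouplike $g_1,\dots,g_m$ and $e_1,\dots,e_m$ with $g_i^{n^2}=1$, $g_ig_j=g_jg_i$, $g_ie_jg_i^{-1}=q^{\delta_{ij}}e_j$, $\Delta(e_i)=e_i\otimes K_i+1\otimes e_i$, $K_i=\prod_jg_j^{a_{ij}}$, $a_{ij}\in\mathbb{Z}_{n^2}$; $H$ admits a Hopf algebra projection onto $\mathbb{C}[(\mathbb{Z}_{n^2})^m]$ via $g_i\mapsto g_i$, $e_i\mapsto0$. $A\subset H$ is the subalgebra generated by the $g_i^n$ and $e_i$. With $1_\beta$ the primitive idempotents of $\mathbb{C}[g_1,\dots,g_m]$ ($1_\beta g_i=q^{\beta_i}1_\beta$), $c(z,y)=q^{-z(y-y')}$ ($z,y\in\{0,\dots,n^2-1\}$, $y'$ = remainder of $y$ mod $n$), $\mathbb J=\sum_{\beta,\gamma}\prod_{i,j}c(\beta_i,\gamma_j)^{a_{ij}}1_\beta\otimes1_\gamma$, $\Delta_{\mathbb J}(z)=\mathbb J\Delta(z)\mathbb J^{-1}$, and $\Phi=(1\otimes\mathbb J)(\mathrm{id}\otimes\Delta)(\mathbb J)(\Delta\otimes\mathrm{id})(\mathbb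 J^{-1})(\mathbb J^{-1}\otimes1)$. It is known (and may be assumed) that $A$ with $\Delta_{\mathbb J}$ and $\Phi$ is a quasi-Hopf algebra. Twist equivalence means isomorphism after twisting by an invertible element of $A\otimes A$. *)

theory Defs
  imports Complex_Main "HOL-Library.FuncSet"
begin

text \<open>Finite-dimensional algebras, coalgebras and Hopf algebras over the complex numbers
are presented in coordinates with respect to a basis b_0, ..., b_(d-1).
Elements of H, H (x) H, H (x) H (x) H are functions with support in the index ranges.\<close>

type_synonym v1 = "nat \<Rightarrow> complex"
type_synonym v2 = "nat \<Rightarrow> nat \<Rightarrow> complex"
type_synonym v3 = "nat \<Rightarrow> nat \<Rightarrow> nat \<Rightarrow> complex"

record hopf_data =
  dim :: nat
  mu  :: "nat \<Rightarrow> nat \<Rightarrow> nat \<Rightarrow> complex"   \<comment> \<open>b_i b_j = sum_k mu i j k b_k\<close>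
  unt :: v1
  dlt :: "nat \<Rightarrow> nat \<Rightarrow> nat \<Rightarrow> complex"   \<comment> \<open>Delta b_i = sum_(j,k) dlt i j k b_j (x) b_k\<close>
  eps :: "nat \<Rightarrow> complex"
  ant :: "nat \<Rightarrow> nat \<Rightarrow> complex"          \<comment> \<open>S b_i = sum_k ant i k b_k\<close>

definition V1 :: "nat \<Rightarrow> v1 set" where "V1 d = {x. \<forall>i\<ge>d. x i = 0}"

definition bv :: "nat \<Rightarrow> v1" where "bv j = (\<lambda>i. if i = j then 1 else 0)"

definition scal :: "complex \<Rightarrow> v1 \<Rightarrow> v1" where "scal c x = (\<lambda>k. c * x k)"

definition mul :: "hopf_data \<Rightarrow> v1 \<Rightarrow> v1 \<Rightarrow> v1" where
  "mul H x y = (\<lambda>k. if k < dim H then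
     (\<Sum>i<dim H. \<Sum>j<dim H. x i * y j * mu H i j k) else 0)"

definition mul2 :: "hopf_data \<Rightarrow> v2 \<Rightarrow> v2 \<Rightarrow> v2" where
  "mul2 H X Y = (\<lambda>k l. if k < dim H \<and> l < dim H then
     (\<Sum>i<dim H. \<Sum>j<dim H. \<Sum>i'<dim H. \<Sum>j'<dim H.
        X i j * Y i' j' * mu H i i' k * mu H j j' l) else 0)"

definition mul3 :: "hopf_data \<Rightarrow> v3 \<Rightarrow> v3 \<Rightarrow> v3" where
  "mul3 H X Y = (\<lambda>k l r. if k < dim H \<and> l < dim H \<and> r < dim H then
     (\<Sum>i<dim H. \<Sum>j<dim H. \<Sum>t<dim H. \<Sum>i'<dim H. \<Sum>j'<dim H. \<Sum>t'<dim H.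
        X i j t * Y i' j' t' * mu H i i' k * mu H j j' l * mu H t t' r) else 0)"

definition tens :: "v1 \<Rightarrow> v1 \<Rightarrow> v2" where "tens x y = (\<lambda>i j. x i * y j)"

definition one2 :: "hopf_data \<Rightarrow> v2" where "one2 H = (\<lambda>i j. unt H i * unt H j)"
definition one3 :: "hopf_data \<Rightarrow> v3" where "one3 H = (\<lambda>i j k. unt H i * unt H j * unt H k)"

definition lone :: "hopf_data \<Rightarrow> v2 \<Rightarrow> v3" where "lone H X = (\<lambda>a b c. unt H a * X b c)"
definition rone :: "hopf_data \<Rightarrow> v2 \<Rightarrow> v3" where "rone H X = (\<lambda>a b c. X a b * unt H c)"

definition cop :: "hopf_data \<Rightarrow> v1 \<Rightarrow> v2" where
  "cop H x = (\<lambda>j k. if j < dim H \<and> k < dim H then (\<Sum>i<dim H. x i * dlt H i j k) else 0)"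

definition cop_l :: "hopf_data \<Rightarrow> v2 \<Rightarrow> v3" where
  "cop_l H X = (\<lambda>a b c. if a < dim H \<and> b < dim H \<and> c < dim H then
      (\<Sum>i<dim H. X i c * dlt H i a b) else 0)"

definition cop_r :: "hopf_data \<Rightarrow> v2 \<Rightarrow> v3" where
  "cop_r H X = (\<lambda>a b c. if a < dim H \<and> b < dim H \<and> c < dim H then
      (\<Sum>i<dim H. X a i * dlt H i b c) else 0)"

definition cnt :: "hopf_data \<Rightarrow> v1 \<Rightarrow> complex" where
  "cnt H x = (\<Sum>i<dim H. eps H i * x i)"

definition cnt_l :: "hopf_data \<Rightarrow> v2 \<Rightarrow> v1" where
  "cnt_l H X = (\<lambda>k. if k < dim H then (\<Sum>i<dim H. eps H i * X i k) else 0)"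
definition cnt_r :: "hopf_data \<Rightarrow> v2 \<Rightarrow> v1" where
  "cnt_r H X = (\<lambda>k. if k < dim H then (\<Sum>i<dim H. X k i * eps H i) else 0)"

definition antip :: "hopf_data \<Rightarrow> v1 \<Rightarrow> v1" where
  "antip H x = (\<lambda>k. if k < dim H then (\<Sum>i<dim H. x i * ant H i k) else 0)"

definition mSl :: "hopf_data \<Rightarrow> v2 \<Rightarrow> v1" where
  "mSl H X = (\<lambda>k. \<Sum>j<dim H. \<Sum>l<dim H. X j l * mul H (antip H (bv j)) (bv l) k)"
definition mSr :: "hopf_data \<Rightarrow> v2 \<Rightarrow> v1" where
  "mSr H X = (\<lambda>k. \<Sum>j<dim H. \<Sum>l<dim H. X j l * mul H (bv j) (antip H (bv l)) k)"

definition is_hopf :: "hopf_data \<Rightarrow> bool" where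
  "is_hopf H \<longleftrightarrow>
     unt H \<in> V1 (dim H) \<and>
     (\<forall>x\<in>V1 (dim H). \<forall>y\<in>V1 (dim H). \<forall>z\<in>V1 (dim H). mul H (mul H x y) z = mul H x (mul H y z)) \<and>
     (\<forall>x\<in>V1 (dim H). mul H (unt H) x = x \<and> mul H x (unt H) = x) \<and>
     (\<forall>x\<in>V1 (dim H). cop_l H (cop H x) = cop_r H (cop H x)) \<and>
     (\<forall>x\<in>V1 (dim H). cnt_l H (cop H x) = x \<and> cnt_r H (cop H x) = x) \<and>
     (\<forall>x\<in>V1 (dim H). \<forall>y\<in>V1 (dim H). cop H (mul H x y) = mul2 H (cop H x) (cop H y)) \<and>
     cop H (unt H) = one2 H \<and>
     (\<forall>x\<in>V1 (dim H). \<forall>y\<in>V1 (dim H). cnt H (mul H x y) = cnt H x * cnt H y) \<and>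
     cnt H (unt H) = 1 \<and>
     (\<forall>x\<in>V1 (dim H). mSl H (cop H x) = scal (cnt H x) (unt H) \<and>
                       mSr H (cop H x) = scal (cnt H x) (unt H))"

definition lmap :: "nat \<Rightarrow> nat \<Rightarrow> (nat \<Rightarrow> nat \<Rightarrow> complex) \<Rightarrow> v1 \<Rightarrow> v1" where
  "lmap d1 d2 f x = (\<lambda>k. if k < d2 then (\<Sum>i<d1. f k i * x i) else 0)"
definition lmap2 :: "nat \<Rightarrow> nat \<Rightarrow> (nat \<Rightarrow> nat \<Rightarrow> complex) \<Rightarrow> v2 \<Rightarrow> v2" where
  "lmap2 d1 d2 f X = (\<lambda>k l. if k < d2 \<and> l < d2 then
      (\<Sum>i<d1. \<Sum>j<d1. f k i * f l j * X i j) else 0)"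
definition lmap3 :: "nat \<Rightarrow> nat \<Rightarrow> (nat \<Rightarrow> nat \<Rightarrow> complex) \<Rightarrow> v3 \<Rightarrow> v3" where
  "lmap3 d1 d2 f X = (\<lambda>k l r. if k < d2 \<and> l < d2 \<and> r < d2 then
      (\<Sum>i<d1. \<Sum>j<d1. \<Sum>t<d1. f k i * f l j * f r t * X i j t) else 0)"

definition hopf_hom :: "hopf_data \<Rightarrow> hopf_data \<Rightarrow> (nat \<Rightarrow> nat \<Rightarrow> complex) \<Rightarrow> bool" where
  "hopf_hom H B p \<longleftrightarrow>
     (\<forall>x\<in>V1 (dim H). \<forall>y\<in>V1 (dim H).
        lmap (dim H) (dim B) p (mul H x y) = mul B (lmap (dim H) (dim B) p x) (lmap (dim H) (dim B) p y)) \<and>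
     lmap (dim H) (dim B) p (unt H) = unt B \<and>
     (\<forall>x\<in>V1 (dim H). cop B (lmap (dim H) (dim B) p x) = lmap2 (dim H) (dim B) p (cop H x)) \<and>
     (\<forall>x\<in>V1 (dim H). cnt B (lmap (dim H) (dim B) p x) = cnt H x)"

definition grouplike :: "hopf_data \<Rightarrow> v1 \<Rightarrow> bool" where
  "grouplike H x \<longleftrightarrow> cop H x = tens x x \<and> cnt H x = 1"

definition pw :: "hopf_data \<Rightarrow> v1 \<Rightarrow> nat \<Rightarrow> v1" where
  "pw H x k = (mul H x ^^ k) (unt H)"

primrec mprod :: "hopf_data \<Rightarrow> (nat \<Rightarrow> v1) \<Rightarrow> nat \<Rightarrow> v1" where
  "mprod H f 0 = unt H"
| "mprod H f (Suc k) = mul H (mprod H f k) (f k)"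

inductive_set alg_gen :: "hopf_data \<Rightarrow> v1 set \<Rightarrow> v1 set" for H S where
  unit: "unt H \<in> alg_gen H S"
| gen: "x \<in> S \<Longrightarrow> x \<in> alg_gen H S"
| add: "x \<in> alg_gen H S \<Longrightarrow> y \<in> alg_gen H S \<Longrightarrow> (\<lambda>k. x k + y k) \<in> alg_gen H S"
| smul: "x \<in> alg_gen H S \<Longrightarrow> scal c x \<in> alg_gen H S"
| mult: "x \<in> alg_gen H S \<Longrightarrow> y \<in> alg_gen H S \<Longrightarrow> mul H x y \<in> alg_gen H S"

definition tens2 :: "v1 set \<Rightarrow> v2 set" where
  "tens2 A = {X. \<exists>xs. set xs \<subseteq> A \<times> A \<and>
       X = (\<lambda>i j. sum_list (map (\<lambda>(x,y). x i * y j) xs))}"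

definition Gm :: "nat \<Rightarrow> nat \<Rightarrow> (nat \<Rightarrow> nat) set" where
  "Gm n m = PiE {..<m} (\<lambda>_. {..<n^2})"

definition gmon :: "hopf_data \<Rightarrow> (nat \<Rightarrow> v1) \<Rightarrow> nat \<Rightarrow> (nat \<Rightarrow> nat) \<Rightarrow> v1" where
  "gmon H g m \<alpha> = mprod H (\<lambda>i. pw H (g i) (\<alpha> i)) m"

definition Kel :: "hopf_data \<Rightarrow> (nat \<Rightarrow> v1) \<Rightarrow> nat \<Rightarrow> (nat \<Rightarrow> nat \<Rightarrow> nat) \<Rightarrow> nat \<Rightarrow> v1" where
  "Kel H g m a i = mprod H (\<lambda>j. pw H (g j) (a i j)) m"

text \<open>primitive idempotents 1_beta of C[g_1..g_m], 1_beta g_i = q^(beta_i) 1_beta\<close>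
definition idem :: "hopf_data \<Rightarrow> complex \<Rightarrow> nat \<Rightarrow> nat \<Rightarrow> (nat \<Rightarrow> v1) \<Rightarrow> (nat \<Rightarrow> nat) \<Rightarrow> v1" where
  "idem H q n m g \<beta> = (\<lambda>k. (1 / of_nat (n^2)) ^ m *
      (\<Sum>\<alpha>\<in>Gm n m. (\<Prod>i<m. inverse q ^ (\<beta> i * \<alpha> i)) * gmon H g m \<alpha> k))"

definition cpow :: "complex \<Rightarrow> nat \<Rightarrow> nat \<Rightarrow> nat \<Rightarrow> nat \<Rightarrow> complex" where
  "cpow q n z y a = inverse q ^ (a * (z * (y - y mod n)))"

definition Jel :: "hopf_data \<Rightarrow> complex \<Rightarrow> nat \<Rightarrow> nat \<Rightarrow> (nat \<Rightarrow> nat \<Rightarrow> nat) \<Rightarrow> (nat \<Rightarrow> v1) \<Rightarrow> v2" where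
  "Jel H q n m a g = (\<lambda>k l. \<Sum>\<beta>\<in>Gm n m. \<Sum>\<gamma>\<in>Gm n m.
      (\<Prod>i<m. \<Prod>j<m. cpow q n (\<beta> i) (\<gamma> j) (a i j)) * idem H q n m g \<beta> k * idem H q n m g \<gamma> l)"

definition inv2 :: "hopf_data \<Rightarrow> v2 \<Rightarrow> v2" where
  "inv2 H X = (THE Y. (\<forall>i j. (i \<ge> dim H \<or> j \<ge> dim H) \<longrightarrow> Y i j = 0) \<and>
                       mul2 H X Y = one2 H \<and> mul2 H Y X = one2 H)"

definition copJ :: "hopf_data \<Rightarrow> v2 \<Rightarrow> v1 \<Rightarrow> v2" where
  "copJ H J x = mul2 H (mul2 H J (cop H x)) (inv2 H J)"
definition copJ_l :: "hopf_data \<Rightarrow> v2 \<Rightarrow> v2 \<Rightarrow> v3" where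
  "copJ_l H J X = mul3 H (mul3 H (rone H J) (cop_l H X)) (rone H (inv2 H J))"
definition copJ_r :: "hopf_data \<Rightarrow> v2 \<Rightarrow> v2 \<Rightarrow> v3" where
  "copJ_r H J X = mul3 H (mul3 H (lone H J) (cop_r H X)) (lone H (inv2 H J))"

definition PhiJ :: "hopf_data \<Rightarrow> v2 \<Rightarrow> v3" where
  "PhiJ H J = mul3 H (mul3 H (mul3 H (lone H J) (cop_r H J)) (cop_l H (inv2 H J))) (rone H (inv2 H J))"

text \<open>(A, Delta_J, Phi) is twist equivalent to a Hopf algebra: there is an invertible
F in A (x) A (inverse G in A (x) A) such that the twisted quasi-bialgebra
(A, F Delta_J(-) F^-1, (1 (x) F)(id (x) Delta_J)(F) Phi (Delta_J (x) id)(F^-1)(F^-1 (x) 1))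
is isomorphic to some Hopf algebra B (whose associator is 1 (x) 1 (x) 1).\<close>
definition twist_equiv_hopf :: "hopf_data \<Rightarrow> v1 set \<Rightarrow> v2 \<Rightarrow> v3 \<Rightarrow> bool" where
  "twist_equiv_hopf H A J \<Phi> \<longleftrightarrow>
    (\<exists>F G. F \<in> tens2 A \<and> G \<in> tens2 A \<and> mul2 H F G = one2 H \<and> mul2 H G F = one2 H \<and>
      (\<exists>B f. is_hopf B \<and>
         bij_betw (lmap (dim H) (dim B) f) A (V1 (dim B)) \<and>
         (\<forall>x\<in>A. \<forall>y\<in>A. lmap (dim H) (dim B) f (mul H x y) =
                        mul B (lmap (dim H) (dim B) f x) (lmap (dim H) (dim B) f y)) \<and>
         lmap (dim H) (dim B) f (unt H) = unt B \<and>
         (\<forall>x\<in>A. lmap2 (dim H) (dim B) f (mul2 H (mul2 H F (copJ H J x)) G)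
                   = cop B (lmap (dim H) (dim B) f x)) \<and>
         lmap3 (dim H) (dim B) f
           (mul3 H (mul3 H (mul3 H (mul3 H (lone H F) (copJ_r H J F)) \<Phi>) (copJ_l H J G)) (rone H G))
           = one3 B))"

end

theory Submission
  imports Defs "HOL-Library.Function_Algebras"
begin

(* Everything is computed in the basis of primitive idempotents 1_b, b in (Z_(n^2))^m, of the
   group algebra C[g].  The twist J and its associator are diagonal in this basis:
   J = sum c(b,c) 1_b (x) 1_c and Phi = sum W(b,c,d) 1_b (x) 1_c (x) 1_d with
   W(b,c,d) = c(b,c+d) / (c(b,c) c(b,d)).  As c(z,y) only sees y - (y mod n), this is
   W(b,c,d) = q^(-n sum_ij a_ij b_i k_j) with k_j the carry of c_j + d_j modulo n.  At
   b = d = eps_i (the i-th unit vector) and c = (n-1) eps_i it is q^(-n a_ii), which is not 1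
   when n does not divide a_ii.

   For the second claim, a twist F in A (x) A making the associator trivial up to an isomorphism
   with a Hopf algebra gives Phi_F = 1 already in H (x) H (x) H, because Delta_J maps A into
   A (x) A and the isomorphism is injective on A (x) A (x) A.  Apply the Hopf projection
   H -> C[g] killing the e_i: the image of A consists of diagonal elements whose coefficients
   only depend on the indices modulo n, so F becomes diagonal with n-periodic coefficients f, and
   Phi_F = 1 reads f(c,d) f(b,c+d) W(b,c,d) = f(b+c,d) f(b,c).  Along the path c = k eps_i,
   k = 0, ..., n, between b = d = eps_i these identities telescope, and periodicity of f forces
   q^(-n a_ii) = 1. *)

section \<open>Coordinates on tensor powers\<close>

definition V2 :: "nat \<Rightarrow> v2 set" where "V2 d = {X. \<forall>i j. (d \<le> i \<or> d \<le> j) \<longrightarrow> X i j = 0}"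
definition V3 :: "nat \<Rightarrow> v3 set" where "V3 d = {X. \<forall>i j k. (d \<le> i \<or> d \<le> j \<or> d \<le> k) \<longrightarrow> X i j k = 0}"
definition tens3 :: "v1 \<Rightarrow> v1 \<Rightarrow> v1 \<Rightarrow> v3" where "tens3 x y z = (\<lambda>i j k. x i * y j * z k)"
definition scal2 :: "complex \<Rightarrow> v2 \<Rightarrow> v2" where "scal2 c X = (\<lambda>i j. c * X i j)"
definition scal3 :: "complex \<Rightarrow> v3 \<Rightarrow> v3" where "scal3 c X = (\<lambda>i j k. c * X i j k)"
definition ltens :: "v1 \<Rightarrow> v2 \<Rightarrow> v3" where "ltens x Y = (\<lambda>a b c. x a * Y b c)"
definition rtens :: "v2 \<Rightarrow> v1 \<Rightarrow> v3" where "rtens Y x = (\<lambda>a b c. Y a b * x c)"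

lemma sum_fun_apply: "sum f K x = (\<Sum>k\<in>K. f k x)"
  by (induction K rule: infinite_finite_induct) auto

lemma additive_sum:
  fixes f :: "'a::comm_monoid_add \<Rightarrow> 'b::comm_monoid_add"
  assumes "\<And>x y. f (x + y) = f x + f y" "f 0 = 0"
  shows "f (sum g K) = (\<Sum>k\<in>K. f (g k))"
  by (induction K rule: infinite_finite_induct) (auto simp: assms)

lemma additive_zero:
  fixes f :: "'a::monoid_add \<Rightarrow> 'b::cancel_comm_monoid_add"
  assumes "\<And>x y. f (x + y) = f x + f y" shows "f 0 = 0"
proof -
  have "f 0 = f 0 + f 0" using assms[of 0 0] by simp
  then show ?thesis by (metis add_cancel_right_right)
qed

lemma sum_product3: "(\<Sum>i\<in>A. \<Sum>j\<in>B. \<Sum>t\<in>C. f i * g j * (h t::complex)) = sum f A * sum g B * sum h C"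
proof -
  have "(\<Sum>i\<in>A. \<Sum>j\<in>B. \<Sum>t\<in>C. f i * g j * h t) = (\<Sum>i\<in>A. f i * (\<Sum>j\<in>B. g j * (\<Sum>t\<in>C. h t)))"
    by (simp add: sum_distrib_left mult.assoc)
  also have "\<dots> = sum f A * (sum g B * sum h C)"
    by (simp only: sum_distrib_right[symmetric])
  finally show ?thesis by (simp add: mult.assoc)
qed

lemma sum_product4: "(\<Sum>i\<in>A. \<Sum>j\<in>B. \<Sum>i'\<in>A'. \<Sum>j'\<in>B'. f i i' * (g j j' :: complex)) =
   (\<Sum>i\<in>A. \<Sum>i'\<in>A'. f i i') * (\<Sum>j\<in>B. \<Sum>j'\<in>B'. g j j')"
  by (simp only: sum_product)

lemma sum_product6: "(\<Sum>i\<in>A. \<Sum>j\<in>B. \<Sum>t\<in>C. \<Sum>i'\<in>A'. \<Sum>j'\<in>B'. \<Sum>t'\<in>C'. f i i' * g j j' * (h t t' :: complex)) =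
   (\<Sum>i\<in>A. \<Sum>i'\<in>A'. f i i') * (\<Sum>j\<in>B. \<Sum>j'\<in>B'. g j j') * (\<Sum>t\<in>C. \<Sum>t'\<in>C'. h t t')"
proof -
  have "(\<Sum>i\<in>A. \<Sum>j\<in>B. \<Sum>t\<in>C. \<Sum>i'\<in>A'. \<Sum>j'\<in>B'. \<Sum>t'\<in>C'. f i i' * g j j' * h t t') =
        (\<Sum>i\<in>A. \<Sum>j\<in>B. \<Sum>i'\<in>A'. \<Sum>j'\<in>B'. \<Sum>t\<in>C. \<Sum>t'\<in>C'. f i i' * g j j' * h t t')"
  proof (intro sum.cong refl)
    fix i j
    have "(\<Sum>t\<in>C. \<Sum>i'\<in>A'. \<Sum>j'\<in>B'. \<Sum>t'\<in>C'. f i i' * g j j' * h t t') =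
          (\<Sum>i'\<in>A'. \<Sum>t\<in>C. \<Sum>j'\<in>B'. \<Sum>t'\<in>C'. f i i' * g j j' * h t t')" by (rule sum.swap)
    also have "\<dots> = (\<Sum>i'\<in>A'. \<Sum>j'\<in>B'. \<Sum>t\<in>C. \<Sum>t'\<in>C'. f i i' * g j j' * h t t')"
      by (intro sum.cong refl sum.swap)
    finally show "(\<Sum>t\<in>C. \<Sum>i'\<in>A'. \<Sum>j'\<in>B'. \<Sum>t'\<in>C'. f i i' * g j j' * h t t') =
          (\<Sum>i'\<in>A'. \<Sum>j'\<in>B'. \<Sum>t\<in>C. \<Sum>t'\<in>C'. f i i' * g j j' * h t t')" .
  qed
  also have "\<dots> = (\<Sum>i\<in>A. \<Sum>j\<in>B. \<Sum>i'\<in>A'. \<Sum>j'\<in>B'. (f i i' * g j j') * (\<Sum>t\<in>C. \<Sum>t'\<in>C'. h t t'))"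
    by (simp add: sum_distrib_left)
  also have "\<dots> = (\<Sum>i\<in>A. \<Sum>j\<in>B. \<Sum>i'\<in>A'. \<Sum>j'\<in>B'. f i i' * g j j') * (\<Sum>t\<in>C. \<Sum>t'\<in>C'. h t t')"
    by (simp add: sum_distrib_right)
  finally show ?thesis by (simp only: sum_product4)
qed

lemma prod_single: "finite A \<Longrightarrow> i \<in> A \<Longrightarrow> (\<And>x. x \<in> A \<Longrightarrow> x \<noteq> i \<Longrightarrow> F x = 1) \<Longrightarrow> prod F A = F i"
  by (metis (mono_tags, lifting) prod.remove prod.neutral DiffE insertCI mult.right_neutral)
lemma prod_inv: "(\<Prod>i\<in>A. inverse (f i :: complex)) = inverse (prod f A)"
  using prod_inversef[of f A] by (simp add: o_def)

lemma prod_telescope: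
  fixes w r :: "nat \<Rightarrow> 'a::comm_monoid_mult"
  assumes "\<And>k. k < n \<Longrightarrow> w (Suc k) * r k = w k"
  shows "w n * (\<Prod>k<n. r k) = w 0"
  using assms
proof (induction n)
  case (Suc n)
  have "w (Suc n) * (\<Prod>k<Suc n. r k) = (w (Suc n) * r n) * (\<Prod>k<n. r k)" by (simp add: ac_simps)
  also have "\<dots> = w 0" using Suc by simp
  finally show ?case .
qed simp

lemma sum_bv: "(\<Sum>i<d. F i * bv i k) = (if k < d then F k else (0::complex))"
proof -
  have "(\<Sum>i<d. F i * bv i k) = (\<Sum>i<d. if k = i then F i else 0)"
    by (intro sum.cong) (auto simp: bv_def)
  then show ?thesis by (simp add: sum.delta')
qed

lemma V1_expansion: "x \<in> V1 d \<Longrightarrow> x = (\<Sum>i<d. scal (x i) (bv i))"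
  by (auto simp: fun_eq_iff sum_fun_apply scal_def sum_bv V1_def)

lemma V2_expansion: "X \<in> V2 d \<Longrightarrow> X = (\<Sum>i<d. \<Sum>j<d. scal2 (X i j) (tens (bv i) (bv j)))"
proof (rule ext, rule ext)
  fix k l assume X: "X \<in> V2 d"
  have "(\<Sum>i<d. \<Sum>j<d. scal2 (X i j) (tens (bv i) (bv j))) k l = (\<Sum>i<d. (\<Sum>j<d. (X i j * bv i k) * bv j l))"
    by (simp add: sum_fun_apply scal2_def tens_def mult.assoc)
  also have "\<dots> = (\<Sum>i<d. (if l < d then X i l * bv i k else 0))"
    by (simp only: sum_bv)
  also have "\<dots> = (if l < d then (\<Sum>i<d. X i l * bv i k) else 0)" by simp
  also have "\<dots> = X k l" using X by (simp add: sum_bv V2_def)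
  finally show "X k l = (\<Sum>i<d. \<Sum>j<d. scal2 (X i j) (tens (bv i) (bv j))) k l" by simp
qed

lemma V3_expansion: "X \<in> V3 d \<Longrightarrow> X = (\<Sum>i<d. \<Sum>j<d. \<Sum>k<d. scal3 (X i j k) (tens3 (bv i) (bv j) (bv k)))"
proof (rule ext, rule ext, rule ext)
  fix a b c assume X: "X \<in> V3 d"
  have "(\<Sum>i<d. \<Sum>j<d. \<Sum>k<d. scal3 (X i j k) (tens3 (bv i) (bv j) (bv k))) a b c =
     (\<Sum>i<d. (\<Sum>j<d. (\<Sum>k<d. (X i j k * bv i a * bv j b) * bv k c)))"
    by (simp add: sum_fun_apply scal3_def tens3_def mult.assoc)
  also have "\<dots> = (\<Sum>i<d. (\<Sum>j<d. (if c < d then (X i j c * bv i a) * bv j b else 0)))"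
    by (simp only: sum_bv)
  also have "\<dots> = (if c < d then (\<Sum>i<d. (\<Sum>j<d. (X i j c * bv i a) * bv j b)) else 0)" by simp
  also have "\<dots> = (if c < d then (\<Sum>i<d. (if b < d then X i b c * bv i a else 0)) else 0)"
    by (simp only: sum_bv)
  also have "\<dots> = (if c < d then (if b < d then (\<Sum>i<d. X i b c * bv i a) else 0) else 0)" by simp
  also have "\<dots> = X a b c" using X by (simp add: sum_bv V3_def)
  finally show "X a b c = (\<Sum>i<d. \<Sum>j<d. \<Sum>k<d. scal3 (X i j k) (tens3 (bv i) (bv j) (bv k))) a b c" by simp
qed

lemma linear_ext_eq2:
  fixes f f' :: "v2 \<Rightarrow> 'b::ab_group_add"
  assumes X: "X \<in> V2 d"
    and fa: "\<And>X Y. f (X + Y) = f X + f Y" and fs: "\<And>c X. f (scal2 c X) = s c (f X)"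
    and fa': "\<And>X Y. f' (X + Y) = f' X + f' Y" and fs': "\<And>c X. f' (scal2 c X) = s c (f' X)"
    and basis: "\<And>i j. i < d \<Longrightarrow> j < d \<Longrightarrow> f (tens (bv i) (bv j)) = f' (tens (bv i) (bv j))"
  shows "f X = f' X"
proof -
  have z: "f 0 = 0" "f' 0 = 0" using additive_zero[of f, OF fa] additive_zero[of f', OF fa'] by auto
  have "f X = f (\<Sum>i<d. \<Sum>j<d. scal2 (X i j) (tens (bv i) (bv j)))" using V2_expansion[OF X] by simp
  also have "\<dots> = (\<Sum>i<d. \<Sum>j<d. s (X i j) (f (tens (bv i) (bv j))))"
    by (simp add: additive_sum[of f, OF fa z(1)] fs)
  also have "\<dots> = (\<Sum>i<d. \<Sum>j<d. s (X i j) (f' (tens (bv i) (bv j))))" by (simp add: basis)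
  also have "\<dots> = f' (\<Sum>i<d. \<Sum>j<d. scal2 (X i j) (tens (bv i) (bv j)))"
    by (simp add: additive_sum[of f', OF fa' z(2)] fs')
  also have "\<dots> = f' X" using V2_expansion[OF X] by simp
  finally show ?thesis .
qed

lemma linear_ext_eq3:
  fixes f f' :: "v3 \<Rightarrow> 'b::ab_group_add"
  assumes X: "X \<in> V3 d"
    and fa: "\<And>X Y. f (X + Y) = f X + f Y" and fs: "\<And>c X. f (scal3 c X) = s c (f X)"
    and fa': "\<And>X Y. f' (X + Y) = f' X + f' Y" and fs': "\<And>c X. f' (scal3 c X) = s c (f' X)"
    and basis: "\<And>i j k. i < d \<Longrightarrow> j < d \<Longrightarrow> k < d \<Longrightarrow>
       f (tens3 (bv i) (bv j) (bv k)) = f' (tens3 (bv i) (bv j) (bv k))"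
  shows "f X = f' X"
proof -
  have z: "f 0 = 0" "f' 0 = 0" using additive_zero[of f, OF fa] additive_zero[of f', OF fa'] by auto
  have "f X = f (\<Sum>i<d. \<Sum>j<d. \<Sum>k<d. scal3 (X i j k) (tens3 (bv i) (bv j) (bv k)))" using V3_expansion[OF X] by simp
  also have "\<dots> = (\<Sum>i<d. \<Sum>j<d. \<Sum>k<d. s (X i j k) (f (tens3 (bv i) (bv j) (bv k))))"
    by (simp add: additive_sum[of f, OF fa z(1)] fs)
  also have "\<dots> = (\<Sum>i<d. \<Sum>j<d. \<Sum>k<d. s (X i j k) (f' (tens3 (bv i) (bv j) (bv k))))" by (simp add: basis)
  also have "\<dots> = f' (\<Sum>i<d. \<Sum>j<d. \<Sum>k<d. scal3 (X i j k) (tens3 (bv i) (bv j) (bv k)))"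
    by (simp add: additive_sum[of f', OF fa' z(2)] fs')
  also have "\<dots> = f' X" using V3_expansion[OF X] by simp
  finally show ?thesis .
qed

lemma bv_V1: "i < d \<Longrightarrow> bv i \<in> V1 d" by (simp add: V1_def bv_def)
lemma V1_add: "x \<in> V1 d \<Longrightarrow> y \<in> V1 d \<Longrightarrow> x + y \<in> V1 d" by (simp add: V1_def)
lemma V1_scal: "x \<in> V1 d \<Longrightarrow> scal c x \<in> V1 d" by (simp add: V1_def scal_def)
lemma V1_zero: "0 \<in> V1 d" by (simp add: V1_def)
lemma V1_sum: "(\<And>k. k \<in> K \<Longrightarrow> f k \<in> V1 d) \<Longrightarrow> sum f K \<in> V1 d"
  by (induction K rule: infinite_finite_induct) (auto simp: V1_zero V1_add)
lemma V2_add: "x \<in> V2 d \<Longrightarrow> y \<in> V2 d \<Longrightarrow> x + y \<in> V2 d" by (simp add: V2_def)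
lemma V2_scal2: "x \<in> V2 d \<Longrightarrow> scal2 c x \<in> V2 d" by (simp add: V2_def scal2_def)
lemma V2_zero: "0 \<in> V2 d" by (simp add: V2_def)
lemma V2_sum: "(\<And>k. k \<in> K \<Longrightarrow> f k \<in> V2 d) \<Longrightarrow> sum f K \<in> V2 d"
  by (induction K rule: infinite_finite_induct) (auto simp: V2_zero V2_add)
lemma V3_add: "x \<in> V3 d \<Longrightarrow> y \<in> V3 d \<Longrightarrow> x + y \<in> V3 d" by (simp add: V3_def)
lemma V3_scal3: "x \<in> V3 d \<Longrightarrow> scal3 c x \<in> V3 d" by (simp add: V3_def scal3_def)
lemma V3_zero: "0 \<in> V3 d" by (simp add: V3_def)
lemma V3_sum: "(\<And>k. k \<in> K \<Longrightarrow> f k \<in> V3 d) \<Longrightarrow> sum f K \<in> V3 d"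
  by (induction K rule: infinite_finite_induct) (auto simp: V3_zero V3_add)
lemma tens_V2: "x \<in> V1 d \<Longrightarrow> y \<in> V1 d \<Longrightarrow> tens x y \<in> V2 d" by (auto simp: V1_def V2_def tens_def)
lemma tens3_V3: "x \<in> V1 d \<Longrightarrow> y \<in> V1 d \<Longrightarrow> z \<in> V1 d \<Longrightarrow> tens3 x y z \<in> V3 d"
  by (auto simp: V1_def V3_def tens3_def)
lemma ltens_V3: "x \<in> V1 d \<Longrightarrow> Y \<in> V2 d \<Longrightarrow> ltens x Y \<in> V3 d" by (auto simp: V1_def V2_def V3_def ltens_def)
lemma rtens_V3: "Y \<in> V2 d \<Longrightarrow> x \<in> V1 d \<Longrightarrow> rtens Y x \<in> V3 d" by (auto simp: V1_def V2_def V3_def rtens_def)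

lemma scal_add: "scal c (x + y) = scal c x + scal c y" by (simp add: scal_def fun_eq_iff algebra_simps)
lemma scal_add2: "scal (c + c') x = scal c x + scal c' x" by (simp add: scal_def fun_eq_iff algebra_simps)
lemma scal_scal: "scal c (scal c' x) = scal (c * c') x" by (simp add: scal_def fun_eq_iff)
lemma scal_one[simp]: "scal 1 x = x" by (simp add: scal_def)
lemma scal_zero[simp]: "scal 0 x = 0" "scal c 0 = 0" by (simp_all add: scal_def fun_eq_iff)
lemma scal_sum: "scal c (sum f K) = (\<Sum>k\<in>K. scal c (f k))"
  by (rule additive_sum[of "scal c"]) (simp_all add: scal_add)
lemma scal_sum2: "scal (sum f K) x = (\<Sum>k\<in>K. scal (f k) x)"
  by (induction K rule: infinite_finite_induct) (simp_all add: scal_add2)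
lemma sum_scal_same: "(\<Sum>k\<in>K. scal (f k) X) = scal (sum f K) X" by (simp add: scal_sum2)
lemma scal2_add: "scal2 c (x + y) = scal2 c x + scal2 c y" by (simp add: scal2_def fun_eq_iff algebra_simps)
lemma scal2_add2: "scal2 (c + c') x = scal2 c x + scal2 c' x" by (simp add: scal2_def fun_eq_iff algebra_simps)
lemma scal2_scal2: "scal2 c (scal2 c' x) = scal2 (c * c') x" by (simp add: scal2_def fun_eq_iff)
lemma scal2_one[simp]: "scal2 1 x = x" by (simp add: scal2_def)
lemma scal2_zero[simp]: "scal2 0 x = 0" "scal2 c 0 = 0" by (simp_all add: scal2_def fun_eq_iff)
lemma scal2_sum: "scal2 c (sum f K) = (\<Sum>k\<in>K. scal2 c (f k))"
  by (rule additive_sum[of "scal2 c"]) (simp_all add: scal2_add)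
lemma scal3_add: "scal3 c (x + y) = scal3 c x + scal3 c y" by (simp add: scal3_def fun_eq_iff algebra_simps)
lemma scal3_scal3: "scal3 c (scal3 c' x) = scal3 (c * c') x" by (simp add: scal3_def fun_eq_iff)
lemma scal3_one[simp]: "scal3 1 x = x" by (simp add: scal3_def)
lemma scal3_zero[simp]: "scal3 0 x = 0" "scal3 c 0 = 0" by (simp_all add: scal3_def fun_eq_iff)

lemma tens_add_l: "tens (x + y) z = tens x z + tens y z" by (simp add: tens_def fun_eq_iff algebra_simps)
lemma tens_add_r: "tens x (y + z) = tens x y + tens x z" by (simp add: tens_def fun_eq_iff algebra_simps)
lemma tens_scal_l: "tens (scal c x) y = scal2 c (tens x y)" by (simp add: tens_def scal2_def scal_def fun_eq_iff)
lemma tens_scal_r: "tens x (scal c y) = scal2 c (tens x y)" by (simp add: tens_def scal2_def scal_def fun_eq_iff)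
lemma tens_zero[simp]: "tens 0 y = 0" "tens x 0 = 0" by (simp_all add: tens_def fun_eq_iff)
lemma tens_sum_l: "tens (sum f K) y = (\<Sum>k\<in>K. tens (f k) y)"
  by (rule additive_sum[of "\<lambda>x. tens x y"]) (simp_all add: tens_add_l)
lemma tens_sum_r: "tens x (sum f K) = (\<Sum>k\<in>K. tens x (f k))"
  by (rule additive_sum[of "\<lambda>y. tens x y"]) (simp_all add: tens_add_r)
lemma tens3_add_1: "tens3 (x + x') y z = tens3 x y z + tens3 x' y z" by (simp add: tens3_def fun_eq_iff algebra_simps)
lemma tens3_add_2: "tens3 x (y + y') z = tens3 x y z + tens3 x y' z" by (simp add: tens3_def fun_eq_iff algebra_simps)
lemma tens3_add_3: "tens3 x y (z + z') = tens3 x y z + tens3 x y z'" by (simp add: tens3_def fun_eq_iff algebra_simps)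
lemma tens3_scal_1: "tens3 (scal c x) y z = scal3 c (tens3 x y z)" by (simp add: tens3_def scal3_def scal_def fun_eq_iff)
lemma tens3_scal_2: "tens3 x (scal c y) z = scal3 c (tens3 x y z)" by (simp add: tens3_def scal3_def scal_def fun_eq_iff)
lemma tens3_scal_3: "tens3 x y (scal c z) = scal3 c (tens3 x y z)" by (simp add: tens3_def scal3_def scal_def fun_eq_iff)
lemma tens3_zero[simp]: "tens3 0 y z = 0" "tens3 x 0 z = 0" "tens3 x y 0 = 0" by (simp_all add: tens3_def fun_eq_iff)
lemma tens3_sum_1: "tens3 (sum f K) y z = (\<Sum>k\<in>K. tens3 (f k) y z)"
  by (rule additive_sum[of "\<lambda>x. tens3 x y z"]) (simp_all add: tens3_add_1)
lemma tens3_sum_2: "tens3 x (sum f K) z = (\<Sum>k\<in>K. tens3 x (f k) z)"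
  by (rule additive_sum[of "\<lambda>y. tens3 x y z"]) (simp_all add: tens3_add_2)
lemma tens3_sum_3: "tens3 x y (sum f K) = (\<Sum>k\<in>K. tens3 x y (f k))"
  by (rule additive_sum[of "\<lambda>z. tens3 x y z"]) (simp_all add: tens3_add_3)
lemma ltens_tens: "ltens x (tens y z) = tens3 x y z" by (simp add: ltens_def tens_def tens3_def fun_eq_iff mult.assoc)
lemma rtens_tens: "rtens (tens x y) z = tens3 x y z" by (simp add: rtens_def tens_def tens3_def fun_eq_iff)
lemma ltens_add_r: "ltens x (Y + Z) = ltens x Y + ltens x Z" by (simp add: ltens_def fun_eq_iff algebra_simps)
lemma ltens_scal2_r: "ltens x (scal2 c Y) = scal3 c (ltens x Y)" by (simp add: ltens_def scal2_def scal3_def fun_eq_iff)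
lemma rtens_add_l: "rtens (Y + Z) x = rtens Y x + rtens Z x" by (simp add: rtens_def fun_eq_iff algebra_simps)
lemma rtens_scal2_l: "rtens (scal2 c Y) x = scal3 c (rtens Y x)" by (simp add: rtens_def scal2_def scal3_def fun_eq_iff)
lemma ltens_zero[simp]: "ltens x 0 = 0" "ltens 0 Y = 0" by (simp_all add: ltens_def fun_eq_iff)
lemma rtens_zero[simp]: "rtens 0 x = 0" "rtens Y 0 = 0" by (simp_all add: rtens_def fun_eq_iff)

lemma tens_nonzero: "x \<noteq> 0 \<Longrightarrow> y \<noteq> 0 \<Longrightarrow> tens x y \<noteq> 0"
proof -
  assume "x \<noteq> 0" "y \<noteq> 0"
  then obtain k l where "x k \<noteq> 0" "y l \<noteq> 0" by (auto simp: fun_eq_iff)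
  then have "tens x y k l \<noteq> 0" by (simp add: tens_def)
  then show ?thesis by auto
qed

lemma tens3_nonzero: "x \<noteq> 0 \<Longrightarrow> y \<noteq> 0 \<Longrightarrow> z \<noteq> 0 \<Longrightarrow> tens3 x y z \<noteq> 0"
proof -
  assume "x \<noteq> 0" "y \<noteq> 0" "z \<noteq> 0"
  then obtain k l r where "x k \<noteq> 0" "y l \<noteq> 0" "z r \<noteq> 0" by (auto simp: fun_eq_iff)
  then have "tens3 x y z k l r \<noteq> 0" by (simp add: tens3_def)
  then show ?thesis by auto
qed

lemma scal2_cancel: "scal2 c X = scal2 c' X \<Longrightarrow> X \<noteq> 0 \<Longrightarrow> c = c'"
proof -
  assume e: "scal2 c X = scal2 c' X" and "X \<noteq> 0"
  then obtain k l where "X k l \<noteq> 0" by (auto simp: fun_eq_iff)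
  moreover have "c * X k l = c' * X k l" using e by (auto simp: scal2_def fun_eq_iff)
  ultimately show ?thesis by simp
qed

lemma scal3_cancel: "scal3 c X = scal3 c' X \<Longrightarrow> X \<noteq> 0 \<Longrightarrow> c = c'"
proof -
  assume e: "scal3 c X = scal3 c' X" and "X \<noteq> 0"
  then obtain k l r where "X k l r \<noteq> 0" by (auto simp: fun_eq_iff)
  moreover have "c * X k l r = c' * X k l r" using e by (auto simp: scal3_def fun_eq_iff)
  ultimately show ?thesis by simp
qed

lemma lone_eq: "lone H X = ltens (unt H) X" by (simp add: lone_def ltens_def)
lemma rone_eq: "rone H X = rtens X (unt H)" by (simp add: rone_def rtens_def)
lemma one2_eq: "one2 H = tens (unt H) (unt H)" by (simp add: one2_def tens_def)
lemma one3_eq: "one3 H = tens3 (unt H) (unt H) (unt H)" by (simp add: one3_def tens3_def)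

lemma mul_V1: "mul H x y \<in> V1 (dim H)" by (simp add: mul_def V1_def)
lemma mul_add_l: "mul H (x + y) z = mul H x z + mul H y z"
  by (simp add: mul_def fun_eq_iff algebra_simps sum.distrib)
lemma mul_add_r: "mul H x (y + z) = mul H x y + mul H x z"
  by (simp add: mul_def fun_eq_iff algebra_simps sum.distrib)
lemma mul_scal_l: "mul H (scal c x) y = scal c (mul H x y)"
  by (simp add: mul_def scal_def fun_eq_iff algebra_simps sum_distrib_left)
lemma mul_scal_r: "mul H x (scal c y) = scal c (mul H x y)"
  by (simp add: mul_def scal_def fun_eq_iff algebra_simps sum_distrib_left)
lemma mul_zero[simp]: "mul H 0 y = 0" "mul H x 0 = 0" by (simp_all add: mul_def fun_eq_iff)
lemma mul_sum_l: "mul H (sum f K) y = (\<Sum>k\<in>K. mul H (f k) y)"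
  by (rule additive_sum[of "\<lambda>x. mul H x y"]) (simp_all add: mul_add_l)
lemma mul_sum_r: "mul H x (sum f K) = (\<Sum>k\<in>K. mul H x (f k))"
  by (rule additive_sum[of "\<lambda>y. mul H x y"]) (simp_all add: mul_add_r)
lemma mul2_V2: "mul2 H X Y \<in> V2 (dim H)" by (simp add: mul2_def V2_def)
lemma mul2_add_l: "mul2 H (X + Y) Z = mul2 H X Z + mul2 H Y Z"
  by (simp add: mul2_def fun_eq_iff algebra_simps sum.distrib)
lemma mul2_add_r: "mul2 H X (Y + Z) = mul2 H X Y + mul2 H X Z"
  by (simp add: mul2_def fun_eq_iff algebra_simps sum.distrib)
lemma mul2_scal2_l: "mul2 H (scal2 c X) Y = scal2 c (mul2 H X Y)"
  by (simp add: mul2_def scal2_def fun_eq_iff algebra_simps sum_distrib_left)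
lemma mul2_scal2_r: "mul2 H X (scal2 c Y) = scal2 c (mul2 H X Y)"
  by (simp add: mul2_def scal2_def fun_eq_iff algebra_simps sum_distrib_left)
lemma mul2_zero[simp]: "mul2 H 0 Y = 0" "mul2 H X 0 = 0" by (simp_all add: mul2_def fun_eq_iff)
lemma mul2_sum_l: "mul2 H (sum f K) y = (\<Sum>k\<in>K. mul2 H (f k) y)"
  by (rule additive_sum[of "\<lambda>x. mul2 H x y"]) (simp_all add: mul2_add_l)
lemma mul2_sum_r: "mul2 H x (sum f K) = (\<Sum>k\<in>K. mul2 H x (f k))"
  by (rule additive_sum[of "\<lambda>y. mul2 H x y"]) (simp_all add: mul2_add_r)

lemma mul2_tens: "mul2 H (tens x y) (tens x' y') = tens (mul H x x') (mul H y y')"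
proof (rule ext, rule ext)
  fix k l
  let ?d = "dim H"
  have "(\<Sum>i<?d. \<Sum>j<?d. \<Sum>i'<?d. \<Sum>j'<?d. x i * y j * (x' i' * y' j') * mu H i i' k * mu H j j' l)
     = (\<Sum>i<?d. \<Sum>j<?d. \<Sum>i'<?d. \<Sum>j'<?d. (x i * x' i' * mu H i i' k) * (y j * y' j' * mu H j j' l))"
    by (simp add: mult_ac)
  also have "\<dots> = (\<Sum>i<?d. \<Sum>i'<?d. x i * x' i' * mu H i i' k) * (\<Sum>j<?d. \<Sum>j'<?d. y j * y' j' * mu H j j' l)"
    by (rule sum_product4)
  finally show "mul2 H (tens x y) (tens x' y') k l = tens (mul H x x') (mul H y y') k l"
    by (simp add: mul2_def tens_def mul_def sum_distrib_left sum_distrib_right mult_ac)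
qed

lemma mul3_V3: "mul3 H X Y \<in> V3 (dim H)" by (simp add: mul3_def V3_def)
lemma mul3_add_l: "mul3 H (X + Y) Z = mul3 H X Z + mul3 H Y Z"
  by (simp add: mul3_def fun_eq_iff algebra_simps sum.distrib)
lemma mul3_add_r: "mul3 H X (Y + Z) = mul3 H X Y + mul3 H X Z"
  by (simp add: mul3_def fun_eq_iff algebra_simps sum.distrib)
lemma mul3_scal3_l: "mul3 H (scal3 c X) Y = scal3 c (mul3 H X Y)"
  by (simp add: mul3_def scal3_def fun_eq_iff algebra_simps sum_distrib_left)
lemma mul3_scal3_r: "mul3 H X (scal3 c Y) = scal3 c (mul3 H X Y)"
  by (simp add: mul3_def scal3_def fun_eq_iff algebra_simps sum_distrib_left)
lemma mul3_zero[simp]: "mul3 H 0 Y = 0" "mul3 H X 0 = 0" by (simp_all add: mul3_def fun_eq_iff)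
lemma mul3_sum_l: "mul3 H (sum f K) y = (\<Sum>k\<in>K. mul3 H (f k) y)"
  by (rule additive_sum[of "\<lambda>x. mul3 H x y"]) (simp_all add: mul3_add_l)
lemma mul3_sum_r: "mul3 H x (sum f K) = (\<Sum>k\<in>K. mul3 H x (f k))"
  by (rule additive_sum[of "\<lambda>y. mul3 H x y"]) (simp_all add: mul3_add_r)

lemma mul3_tens3: "mul3 H (tens3 x y z) (tens3 x' y' z') = tens3 (mul H x x') (mul H y y') (mul H z z')"
proof (rule ext, rule ext, rule ext)
  fix k l r
  let ?d = "dim H"
  have "(\<Sum>i<?d. \<Sum>j<?d. \<Sum>t<?d. \<Sum>i'<?d. \<Sum>j'<?d. \<Sum>t'<?d.
          x i * y j * z t * (x' i' * y' j' * z' t') * mu H i i' k * mu H j j' l * mu H t t' r)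
     = (\<Sum>i<?d. \<Sum>j<?d. \<Sum>t<?d. \<Sum>i'<?d. \<Sum>j'<?d. \<Sum>t'<?d.
          (x i * x' i' * mu H i i' k) * (y j * y' j' * mu H j j' l) * (z t * z' t' * mu H t t' r))"
    by (simp add: mult_ac)
  also have "\<dots> = (\<Sum>i<?d. \<Sum>i'<?d. x i * x' i' * mu H i i' k) * (\<Sum>j<?d. \<Sum>j'<?d. y j * y' j' * mu H j j' l)
       * (\<Sum>t<?d. \<Sum>t'<?d. z t * z' t' * mu H t t' r)"
    by (rule sum_product6)
  finally have "(\<Sum>i<?d. \<Sum>j<?d. \<Sum>t<?d. \<Sum>i'<?d. \<Sum>j'<?d. \<Sum>t'<?d.
          x i * y j * z t * (x' i' * y' j' * z' t') * mu H i i' k * mu H j j' l * mu H t t' r) =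
      (\<Sum>i<?d. \<Sum>i'<?d. x i * x' i' * mu H i i' k) * (\<Sum>j<?d. \<Sum>j'<?d. y j * y' j' * mu H j j' l)
       * (\<Sum>t<?d. \<Sum>t'<?d. z t * z' t' * mu H t t' r)" .
  then show "mul3 H (tens3 x y z) (tens3 x' y' z') k l r = tens3 (mul H x x') (mul H y y') (mul H z z') k l r"
    by (simp add: mul3_def tens3_def mul_def)
qed

lemma cop_V2: "cop H x \<in> V2 (dim H)" by (simp add: cop_def V2_def)
lemma cop_add: "cop H (x + y) = cop H x + cop H y"
  by (simp add: cop_def fun_eq_iff algebra_simps sum.distrib)
lemma cop_scal: "cop H (scal c x) = scal2 c (cop H x)"
  by (simp add: cop_def scal_def scal2_def fun_eq_iff algebra_simps sum_distrib_left)
lemma cop_zero[simp]: "cop H 0 = 0" by (simp add: cop_def fun_eq_iff)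
lemma cop_sum: "cop H (sum f K) = (\<Sum>k\<in>K. cop H (f k))"
  by (rule additive_sum[of "cop H"]) (simp_all add: cop_add)
lemma cop_r_add: "cop_r H (X + Y) = cop_r H X + cop_r H Y"
  by (simp add: cop_r_def fun_eq_iff algebra_simps sum.distrib)
lemma cop_r_scal2: "cop_r H (scal2 c X) = scal3 c (cop_r H X)"
  by (simp add: cop_r_def scal2_def scal3_def fun_eq_iff algebra_simps sum_distrib_left)
lemma cop_l_add: "cop_l H (X + Y) = cop_l H X + cop_l H Y"
  by (simp add: cop_l_def fun_eq_iff algebra_simps sum.distrib)
lemma cop_l_scal2: "cop_l H (scal2 c X) = scal3 c (cop_l H X)"
  by (simp add: cop_l_def scal2_def scal3_def fun_eq_iff algebra_simps sum_distrib_left)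
lemma cop_r_sum: "cop_r H (sum f K) = (\<Sum>k\<in>K. cop_r H (f k))"
  by (rule additive_sum[of "cop_r H"]) (simp_all add: cop_r_add, simp add: cop_r_def fun_eq_iff)
lemma cop_l_sum: "cop_l H (sum f K) = (\<Sum>k\<in>K. cop_l H (f k))"
  by (rule additive_sum[of "cop_l H"]) (simp_all add: cop_l_add, simp add: cop_l_def fun_eq_iff)
lemma cop_r_V3: "cop_r H X \<in> V3 (dim H)" by (simp add: cop_r_def V3_def)
lemma cop_l_V3: "cop_l H X \<in> V3 (dim H)" by (simp add: cop_l_def V3_def)
lemma cop_r_tens: "x \<in> V1 (dim H) \<Longrightarrow> cop_r H (tens x y) = ltens x (cop H y)"
  by (auto simp: cop_r_def ltens_def tens_def cop_def fun_eq_iff V1_def sum_distrib_left mult_ac)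
lemma cop_l_tens: "y \<in> V1 (dim H) \<Longrightarrow> cop_l H (tens x y) = rtens (cop H x) y"
  by (auto simp: cop_l_def rtens_def tens_def cop_def fun_eq_iff V1_def sum_distrib_left sum_distrib_right mult_ac)
lemma copJ_r_add: "copJ_r H J (X + Y) = copJ_r H J X + copJ_r H J Y"
  by (simp add: copJ_r_def cop_r_add mul3_add_r mul3_add_l)
lemma copJ_l_add: "copJ_l H J (X + Y) = copJ_l H J X + copJ_l H J Y"
  by (simp add: copJ_l_def cop_l_add mul3_add_r mul3_add_l)

lemma copJ_r_zero: "copJ_r H J 0 = 0"
proof -
  have "cop_r H 0 = 0" by (simp add: cop_r_def fun_eq_iff)
  then show ?thesis by (simp add: copJ_r_def)
qed

lemma copJ_l_zero: "copJ_l H J 0 = 0"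
proof -
  have "cop_l H 0 = 0" by (simp add: cop_l_def fun_eq_iff)
  then show ?thesis by (simp add: copJ_l_def)
qed

lemma copJ_r_V3: "copJ_r H J X \<in> V3 (dim H)" by (simp add: copJ_r_def mul3_V3)
lemma copJ_l_V3: "copJ_l H J X \<in> V3 (dim H)" by (simp add: copJ_l_def mul3_V3)
lemma cnt_add: "cnt H (x + y) = cnt H x + cnt H y" by (simp add: cnt_def distrib_left sum.distrib)
lemma cnt_zero: "cnt H 0 = 0" by (simp add: cnt_def)
lemma cnt_scal: "cnt H (scal c x) = c * cnt H x" by (simp add: cnt_def scal_def sum_distrib_left algebra_simps)
lemma cnt_sum: "cnt H (sum f K) = (\<Sum>k\<in>K. cnt H (f k))"
  by (rule additive_sum[of "cnt H"]) (simp_all add: cnt_add cnt_zero)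

lemma lmap_V1: "lmap d1 d2 f x \<in> V1 d2" by (simp add: lmap_def V1_def)
lemma lmap_add: "lmap d1 d2 f (x + y) = lmap d1 d2 f x + lmap d1 d2 f y"
  by (simp add: lmap_def fun_eq_iff algebra_simps sum.distrib)
lemma lmap_scal: "lmap d1 d2 f (scal c x) = scal c (lmap d1 d2 f x)"
  by (simp add: lmap_def scal_def fun_eq_iff algebra_simps sum_distrib_left)
lemma lmap_zero[simp]: "lmap d1 d2 f 0 = 0" by (simp add: lmap_def fun_eq_iff)
lemma lmap_sum: "lmap d1 d2 f (sum g K) = (\<Sum>k\<in>K. lmap d1 d2 f (g k))"
  by (rule additive_sum[of "lmap d1 d2 f"]) (simp_all add: lmap_add)
lemma lmap2_add: "lmap2 d1 d2 f (x + y) = lmap2 d1 d2 f x + lmap2 d1 d2 f y"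
  by (simp add: lmap2_def fun_eq_iff algebra_simps sum.distrib)
lemma lmap2_scal2: "lmap2 d1 d2 f (scal2 c x) = scal2 c (lmap2 d1 d2 f x)"
  by (simp add: lmap2_def scal2_def fun_eq_iff algebra_simps sum_distrib_left)
lemma lmap2_zero[simp]: "lmap2 d1 d2 f 0 = 0" by (simp add: lmap2_def fun_eq_iff)
lemma lmap2_sum: "lmap2 d1 d2 f (sum g K) = (\<Sum>k\<in>K. lmap2 d1 d2 f (g k))"
  by (rule additive_sum[of "lmap2 d1 d2 f"]) (simp_all add: lmap2_add)
lemma lmap3_add: "lmap3 d1 d2 f (x + y) = lmap3 d1 d2 f x + lmap3 d1 d2 f y"
  by (simp add: lmap3_def fun_eq_iff algebra_simps sum.distrib)
lemma lmap3_scal3: "lmap3 d1 d2 f (scal3 c x) = scal3 c (lmap3 d1 d2 f x)"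
  by (simp add: lmap3_def scal3_def fun_eq_iff algebra_simps sum_distrib_left)
lemma lmap3_zero[simp]: "lmap3 d1 d2 f 0 = 0" by (simp add: lmap3_def fun_eq_iff)
lemma lmap3_sum: "lmap3 d1 d2 f (sum g K) = (\<Sum>k\<in>K. lmap3 d1 d2 f (g k))"
  by (rule additive_sum[of "lmap3 d1 d2 f"]) (simp_all add: lmap3_add)
lemma lmap2_tens: "lmap2 d1 d2 f (tens x y) = tens (lmap d1 d2 f x) (lmap d1 d2 f y)"
  by (simp add: lmap2_def lmap_def tens_def fun_eq_iff sum_product mult_ac)

lemma lmap3_tens3: "lmap3 d1 d2 f (tens3 x y z) = tens3 (lmap d1 d2 f x) (lmap d1 d2 f y) (lmap d1 d2 f z)"
proof (rule ext, rule ext, rule ext)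
  fix a b c
  have "(\<Sum>i<d1. \<Sum>j<d1. \<Sum>t<d1. f a i * f b j * f c t * (x i * y j * z t)) =
        (\<Sum>i<d1. \<Sum>j<d1. \<Sum>t<d1. (f a i * x i) * (f b j * y j) * (f c t * z t))"
    by (simp add: mult_ac)
  also have "\<dots> = (\<Sum>i<d1. f a i * x i) * (\<Sum>j<d1. f b j * y j) * (\<Sum>t<d1. f c t * z t)"
    by (rule sum_product3)
  finally show "lmap3 d1 d2 f (tens3 x y z) a b c = tens3 (lmap d1 d2 f x) (lmap d1 d2 f y) (lmap d1 d2 f z) a b c"
    by (simp add: lmap3_def lmap_def tens3_def)
qed

inductive_set span2 :: "v1 set \<Rightarrow> v2 set" for S where
  zero: "0 \<in> span2 S"
| tens: "x \<in> S \<Longrightarrow> y \<in> S \<Longrightarrow> tens x y \<in> span2 S"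
| add: "X \<in> span2 S \<Longrightarrow> Y \<in> span2 S \<Longrightarrow> X + Y \<in> span2 S"

inductive_set span3 :: "v1 set \<Rightarrow> v3 set" for S where
  zero: "0 \<in> span3 S"
| tens: "x \<in> S \<Longrightarrow> y \<in> S \<Longrightarrow> z \<in> S \<Longrightarrow> tens3 x y z \<in> span3 S"
| add: "X \<in> span3 S \<Longrightarrow> Y \<in> span3 S \<Longrightarrow> X + Y \<in> span3 S"

lemma span2_sum: "(\<And>k. k \<in> K \<Longrightarrow> f k \<in> span2 S) \<Longrightarrow> sum f K \<in> span2 S"
  by (induction K rule: infinite_finite_induct) (auto intro: span2.intros)
lemma span3_sum: "(\<And>k. k \<in> K \<Longrightarrow> f k \<in> span3 S) \<Longrightarrow> sum f K \<in> span3 S"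
  by (induction K rule: infinite_finite_induct) (auto intro: span3.intros)
(* Rule induction over span2 and span3 presents 0 and + eta-expanded; these fold them back. *)
lemma v2_zero_eta: "(\<lambda>a b. 0::complex) = (0::v2)" by (simp add: fun_eq_iff)
lemma v3_zero_eta: "(\<lambda>a b c. 0::complex) = (0::v3)" by (simp add: fun_eq_iff)
lemma v2_plus_eta: "(\<lambda>a b. X a b + Y a b) = (X + Y :: v2)" by (simp add: fun_eq_iff)
lemma v3_plus_eta: "(\<lambda>a b c. X a b c + Y a b c) = (X + Y :: v3)" by (simp add: fun_eq_iff)

lemma ltens_span3: assumes x: "x \<in> S" and Y: "Y \<in> span2 S" shows "ltens x Y \<in> span3 S"
  using Y
proof (induction rule: span2.induct)
  case zero then show ?case by (simp only: ltens_zero) (rule span3.zero)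
next
  case (tens y z) then show ?case using x by (simp only: ltens_tens) (rule span3.tens)
next
  case (add X Y) then show ?case by (simp only: ltens_add_r) (rule span3.add)
qed

lemma rtens_span3: assumes x: "x \<in> S" and Y: "Y \<in> span2 S" shows "rtens Y x \<in> span3 S"
  using Y
proof (induction rule: span2.induct)
  case zero then show ?case by (simp only: rtens_zero) (rule span3.zero)
next
  case (tens y z) then show ?case using x by (simp only: rtens_tens) (rule span3.tens)
next
  case (add X Y) then show ?case by (simp only: rtens_add_l) (rule span3.add)
qed

lemma tens2_span2: "X \<in> tens2 S \<Longrightarrow> X \<in> span2 S"
proof -
  assume "X \<in> tens2 S"
  then obtain xs where xs: "set xs \<subseteq> S \<times> S" and X: "X = (\<lambda>i j. sum_list (map (\<lambda>(x, y). x i * y j) xs))"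
    by (auto simp: tens2_def)
  have "set xs \<subseteq> S \<times> S \<Longrightarrow> (\<lambda>i j. sum_list (map (\<lambda>(x, y). x i * y j) xs)) \<in> span2 S"
  proof (induction xs)
    case Nil
    have e: "(\<lambda>i j. sum_list (map (\<lambda>(x, y). x i * y j) ([]::(v1 \<times> v1) list))) = (0::v2)" by (simp add: fun_eq_iff)
    show ?case by (subst e) (rule span2.zero)
  next
    case (Cons p xs)
    obtain x y where p: "p = (x, y)" by (cases p)
    have eq: "(\<lambda>i j. sum_list (map (\<lambda>(x, y). x i * y j) (p # xs))) =
          tens x y + (\<lambda>i j. sum_list (map (\<lambda>(x, y). x i * y j) xs))"
      by (simp add: p tens_def fun_eq_iff)
    have hx: "x \<in> S" "y \<in> S" using Cons.prems p by auto
    have ih: "(\<lambda>i j. sum_list (map (\<lambda>(x, y). x i * y j) xs)) \<in> span2 S" using Cons by auto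
    show ?case by (subst eq) (rule span2.add[OF span2.tens[OF hx] ih])
  qed
  then show ?thesis using xs X by simp
qed

lemma linear_sum_bv:
  assumes add: "\<And>u v. u \<in> V1 d \<Longrightarrow> v \<in> V1 d \<Longrightarrow> \<phi> (u + v) = \<phi> u + \<phi> v"
    and scal: "\<And>c u. u \<in> V1 d \<Longrightarrow> \<phi> (scal c u) = scal c (\<phi> u)"
    and J: "J \<subseteq> {..<d}"
  shows "\<phi> (\<Sum>j\<in>J. scal (y j) (bv j)) = (\<Sum>j\<in>J. scal (y j) (\<phi> (bv j)))"
proof -
  have zero: "\<phi> 0 = 0" using scal[OF V1_zero, of 0] by (simp only: scal_zero)
  have "finite J" using J finite_subset by blast
  then show ?thesis using J
  proof (induction J rule: finite_induct)
    case empty then show ?case by (simp only: sum.empty zero)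
  next
    case (insert j J)
    have bj: "bv j \<in> V1 d" using insert by (simp add: bv_V1)
    have S: "(\<Sum>j\<in>J. scal (y j) (bv j)) \<in> V1 d" using insert by (intro V1_sum V1_scal bv_V1) auto
    have "J \<subseteq> {..<d}" using insert.prems by simp
    note IH = insert.IH[OF this]
    show ?case unfolding sum.insert[OF insert.hyps(1,2)]
      by (simp only: add[OF V1_scal[OF bj] S] scal[OF bj] IH)
  qed
qed

lemma linear_is_lmap:
  assumes add: "\<And>u v. u \<in> V1 d1 \<Longrightarrow> v \<in> V1 d1 \<Longrightarrow> \<phi> (u + v) = \<phi> u + \<phi> v"
    and scal: "\<And>c u. u \<in> V1 d1 \<Longrightarrow> \<phi> (scal c u) = scal c (\<phi> u)"
    and into: "\<And>u. u \<in> V1 d1 \<Longrightarrow> \<phi> u \<in> V1 d2" and u: "u \<in> V1 d1"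
  shows "lmap d1 d2 (\<lambda>k j. \<phi> (bv j) k) u = \<phi> u"
proof (rule ext)
  fix k
  have "\<phi> u = (\<Sum>j<d1. scal (u j) (\<phi> (bv j)))"
    using linear_sum_bv[of d1 \<phi> "{..<d1}" u, OF add scal subset_refl] V1_expansion[OF u] by simp
  moreover have "\<phi> u k = 0" if "\<not> k < d2" using into[OF u] that by (simp add: V1_def)
  ultimately show "lmap d1 d2 (\<lambda>k j. \<phi> (bv j) k) u k = \<phi> u k"
    by (auto simp: lmap_def sum_fun_apply scal_def mult.commute)
qed

text \<open>An isomorphism onto the coordinate space is linear, hence so is its inverse, which is
  therefore given by a matrix.\<close>

lemma lmap_left_inverse:
  assumes bij: "bij_betw (lmap d1 d2 f) A (V1 d2)" and A: "A \<subseteq> V1 d1"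
    and A_add: "\<And>x y. x \<in> A \<Longrightarrow> y \<in> A \<Longrightarrow> x + y \<in> A"
    and A_scal: "\<And>c x. x \<in> A \<Longrightarrow> scal c x \<in> A"
  obtains M where "\<And>x. x \<in> A \<Longrightarrow> lmap d2 d1 M (lmap d1 d2 f x) = x"
proof -
  let ?L = "lmap d1 d2 f"
  define \<phi> where "\<phi> = the_inv_into A ?L"
  have inj: "inj_on ?L A" and img: "?L ` A = V1 d2" using bij by (auto simp: bij_betw_def)
  have \<phi>_in: "\<phi> y \<in> A" and L_\<phi>: "?L (\<phi> y) = y" if "y \<in> V1 d2" for y
    using the_inv_into_into[OF inj, of y A] f_the_inv_into_f[OF inj, of y] that img
    by (auto simp: \<phi>_def)
  have \<phi>_L: "\<phi> (?L x) = x" if "x \<in> A" for x using inj that by (simp add: \<phi>_def the_inv_into_f_f)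
  have add: "\<phi> (u + v) = \<phi> u + \<phi> v" if "u \<in> V1 d2" "v \<in> V1 d2" for u v
    using \<phi>_L[OF A_add[OF \<phi>_in \<phi>_in]] that by (simp add: lmap_add L_\<phi>)
  have scal: "\<phi> (scal c u) = scal c (\<phi> u)" if "u \<in> V1 d2" for c u
    using \<phi>_L[OF A_scal[OF \<phi>_in]] that by (simp add: lmap_scal L_\<phi>)
  have into: "\<phi> u \<in> V1 d1" if "u \<in> V1 d2" for u using \<phi>_in[OF that] A by blast
  show ?thesis
    by (rule that[of "\<lambda>k j. \<phi> (bv j) k"])
       (simp add: linear_is_lmap[OF add scal into lmap_V1] \<phi>_L)
qed

lemma lmap3_left_inverse_span3:
  assumes "\<And>x. x \<in> A \<Longrightarrow> lmap d2 d1 M (lmap d1 d2 f x) = x" and "X \<in> span3 A"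
  shows "lmap3 d2 d1 M (lmap3 d1 d2 f X) = X"
  using assms(2)
proof (induction rule: span3.induct)
  case zero then show ?case by (simp only: v3_zero_eta lmap3_zero)
next
  case (tens x y z) then show ?case by (simp add: lmap3_tens3 assms(1))
next
  case (add X Y) then show ?case by (simp only: v3_plus_eta lmap3_add)
qed

lemma lmap3_inj_on_span3:
  assumes "bij_betw (lmap d1 d2 f) A (V1 d2)" and "A \<subseteq> V1 d1"
    and "\<And>x y. x \<in> A \<Longrightarrow> y \<in> A \<Longrightarrow> x + y \<in> A" and "\<And>c x. x \<in> A \<Longrightarrow> scal c x \<in> A"
    and X: "X \<in> span3 A" and Y: "Y \<in> span3 A" and eq: "lmap3 d1 d2 f X = lmap3 d1 d2 f Y"
  shows "X = Y"
proof -
  obtain M where "\<And>x. x \<in> A \<Longrightarrow> lmap d2 d1 M (lmap d1 d2 f x) = x"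
    using lmap_left_inverse[OF assms(1-4)] by blast
  then show ?thesis using lmap3_left_inverse_span3[OF _ X] lmap3_left_inverse_span3[OF _ Y] eq by metis
qed

section \<open>Tensor powers of a Hopf algebra\<close>

locale hopf_algebra =
  fixes H :: hopf_data
  assumes hopf: "is_hopf H"
begin

abbreviation "dH \<equiv> dim H"

lemma unt_V1: "unt H \<in> V1 dH" using hopf by (simp add: is_hopf_def)
lemma mul_assoc: "x \<in> V1 dH \<Longrightarrow> y \<in> V1 dH \<Longrightarrow> z \<in> V1 dH \<Longrightarrow> mul H (mul H x y) z = mul H x (mul H y z)"
  using hopf by (simp add: is_hopf_def)
lemma mul_unt_l: "x \<in> V1 dH \<Longrightarrow> mul H (unt H) x = x" using hopf by (simp add: is_hopf_def)
lemma mul_unt_r: "x \<in> V1 dH \<Longrightarrow> mul H x (unt H) = x" using hopf by (simp add: is_hopf_def)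
lemma cop_mul: "x \<in> V1 dH \<Longrightarrow> y \<in> V1 dH \<Longrightarrow> cop H (mul H x y) = mul2 H (cop H x) (cop H y)"
  using hopf by (simp add: is_hopf_def)
lemma cop_unt: "cop H (unt H) = one2 H" using hopf by (simp add: is_hopf_def)
lemma cnt_mul: "x \<in> V1 dH \<Longrightarrow> y \<in> V1 dH \<Longrightarrow> cnt H (mul H x y) = cnt H x * cnt H y"
  using hopf by (simp add: is_hopf_def)
lemma cnt_unt: "cnt H (unt H) = 1" using hopf by (simp add: is_hopf_def)

lemmas tensor_simps = mul2_add_r mul2_scal2_r mul2_add_l mul2_scal2_l mul2_tens mul3_add_r mul3_scal3_r mul3_add_l mul3_scal3_l
  mul3_tens3 ltens_add_r ltens_scal2_r rtens_add_l rtens_scal2_l ltens_tens rtens_tens cop_r_add cop_r_scal2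
  cop_l_add cop_l_scal2 bv_V1 mul_V1 unt_V1

lemma mul2_assoc:
  assumes X: "X \<in> V2 dH" and Y: "Y \<in> V2 dH" and Z: "Z \<in> V2 dH"
  shows "mul2 H (mul2 H X Y) Z = mul2 H X (mul2 H Y Z)"
proof -
  have s1: "mul2 H (tens (mul H x x') (mul H y y')) Z = mul2 H (tens x y) (mul2 H (tens x' y') Z)"
    if "x \<in> V1 dH" "y \<in> V1 dH" "x' \<in> V1 dH" "y' \<in> V1 dH" "Z \<in> V2 dH" for x y x' y' Z
    by (rule linear_ext_eq2[of Z dH "\<lambda>Z. mul2 H (tens (mul H x x') (mul H y y')) Z" scal2
          "\<lambda>Z. mul2 H (tens x y) (mul2 H (tens x' y') Z)"])
       (simp_all add: that tensor_simps mul_assoc)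
  have s2: "mul2 H (mul2 H (tens x y) Y) Z = mul2 H (tens x y) (mul2 H Y Z)"
    if "x \<in> V1 dH" "y \<in> V1 dH" "Y \<in> V2 dH" "Z \<in> V2 dH" for x y Y Z
    by (rule linear_ext_eq2[of Y dH "\<lambda>Y. mul2 H (mul2 H (tens x y) Y) Z" scal2
          "\<lambda>Y. mul2 H (tens x y) (mul2 H Y Z)"])
       (simp_all add: that tensor_simps s1)
  show ?thesis
    by (rule linear_ext_eq2[of X dH "\<lambda>X. mul2 H (mul2 H X Y) Z" scal2 "\<lambda>X. mul2 H X (mul2 H Y Z)"])
       (simp_all add: X Y Z tensor_simps s2)
qed

lemma mul2_one_l: "X \<in> V2 dH \<Longrightarrow> mul2 H (one2 H) X = X"
  by (rule linear_ext_eq2[of X dH "\<lambda>X. mul2 H (one2 H) X" scal2 "\<lambda>X. X"])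
     (simp_all add: one2_eq tensor_simps mul_unt_l)

lemma mul2_one_r: "X \<in> V2 dH \<Longrightarrow> mul2 H X (one2 H) = X"
  by (rule linear_ext_eq2[of X dH "\<lambda>X. mul2 H X (one2 H)" scal2 "\<lambda>X. X"])
     (simp_all add: one2_eq tensor_simps mul_unt_r)

lemma mul3_assoc:
  assumes X: "X \<in> V3 dH" and Y: "Y \<in> V3 dH" and Z: "Z \<in> V3 dH"
  shows "mul3 H (mul3 H X Y) Z = mul3 H X (mul3 H Y Z)"
proof -
  have s1: "mul3 H (tens3 (mul H x x') (mul H y y') (mul H z z')) Z = mul3 H (tens3 x y z) (mul3 H (tens3 x' y' z') Z)"
    if "x \<in> V1 dH" "y \<in> V1 dH" "z \<in> V1 dH" "x' \<in> V1 dH" "y' \<in> V1 dH" "z' \<in> V1 dH" "Z \<in> V3 dH"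
    for x y z x' y' z' Z
    by (rule linear_ext_eq3[of Z dH "\<lambda>Z. mul3 H (tens3 (mul H x x') (mul H y y') (mul H z z')) Z" scal3
          "\<lambda>Z. mul3 H (tens3 x y z) (mul3 H (tens3 x' y' z') Z)"])
       (simp_all add: that tensor_simps mul_assoc)
  have s2: "mul3 H (mul3 H (tens3 x y z) Y) Z = mul3 H (tens3 x y z) (mul3 H Y Z)"
    if "x \<in> V1 dH" "y \<in> V1 dH" "z \<in> V1 dH" "Y \<in> V3 dH" "Z \<in> V3 dH" for x y z Y Z
    by (rule linear_ext_eq3[of Y dH "\<lambda>Y. mul3 H (mul3 H (tens3 x y z) Y) Z" scal3
          "\<lambda>Y. mul3 H (tens3 x y z) (mul3 H Y Z)"])
       (simp_all add: that tensor_simps s1)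
  show ?thesis
    by (rule linear_ext_eq3[of X dH "\<lambda>X. mul3 H (mul3 H X Y) Z" scal3 "\<lambda>X. mul3 H X (mul3 H Y Z)"])
       (simp_all add: X Y Z tensor_simps s2)
qed

lemma mul3_one_r: "X \<in> V3 dH \<Longrightarrow> mul3 H X (one3 H) = X"
  by (rule linear_ext_eq3[of X dH "\<lambda>X. mul3 H X (one3 H)" scal3 "\<lambda>X. X"])
     (simp_all add: one3_eq tensor_simps mul_unt_r)

lemma ltens_mul:
  assumes Y: "Y \<in> V2 dH" and Z: "Z \<in> V2 dH"
  shows "mul3 H (ltens u Y) (ltens x Z) = ltens (mul H u x) (mul2 H Y Z)"
proof -
  have s1: "mul3 H (tens3 u a b) (ltens x Z) = ltens (mul H u x) (mul2 H (tens a b) Z)" if "Z \<in> V2 dH" for a b Z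
    by (rule linear_ext_eq2[of Z dH "\<lambda>Z. mul3 H (tens3 u a b) (ltens x Z)" scal3
          "\<lambda>Z. ltens (mul H u x) (mul2 H (tens a b) Z)"])
       (simp_all add: that tensor_simps)
  show ?thesis
    by (rule linear_ext_eq2[of Y dH "\<lambda>Y. mul3 H (ltens u Y) (ltens x Z)" scal3 "\<lambda>Y. ltens (mul H u x) (mul2 H Y Z)"])
       (simp_all add: Y Z tensor_simps s1)
qed

lemma rtens_mul:
  assumes Y: "Y \<in> V2 dH" and Z: "Z \<in> V2 dH"
  shows "mul3 H (rtens Y u) (rtens Z x) = rtens (mul2 H Y Z) (mul H u x)"
proof -
  have s1: "mul3 H (tens3 a b u) (rtens Z x) = rtens (mul2 H (tens a b) Z) (mul H u x)" if "Z \<in> V2 dH" for a b Z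
    by (rule linear_ext_eq2[of Z dH "\<lambda>Z. mul3 H (tens3 a b u) (rtens Z x)" scal3
          "\<lambda>Z. rtens (mul2 H (tens a b) Z) (mul H u x)"])
       (simp_all add: that tensor_simps)
  show ?thesis
    by (rule linear_ext_eq2[of Y dH "\<lambda>Y. mul3 H (rtens Y u) (rtens Z x)" scal3 "\<lambda>Y. rtens (mul2 H Y Z) (mul H u x)"])
       (simp_all add: Y Z tensor_simps s1)
qed

lemma ltens_mul_tens3: "Y \<in> V2 dH \<Longrightarrow> y \<in> V1 dH \<Longrightarrow> z \<in> V1 dH \<Longrightarrow>
   mul3 H (ltens u Y) (tens3 x y z) = ltens (mul H u x) (mul2 H Y (tens y z))"
  using ltens_mul[of Y "tens y z" u x] by (simp add: tens_V2 ltens_tens)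

lemma rtens_mul_tens3: "Y \<in> V2 dH \<Longrightarrow> x \<in> V1 dH \<Longrightarrow> y \<in> V1 dH \<Longrightarrow>
   mul3 H (rtens Y u) (tens3 x y z) = rtens (mul2 H Y (tens x y)) (mul H u z)"
  using rtens_mul[of Y "tens x y" u z] by (simp add: tens_V2 rtens_tens)

lemma lone_V3: "X \<in> V2 dH \<Longrightarrow> lone H X \<in> V3 dH" by (simp add: lone_eq ltens_V3 unt_V1)
lemma rone_V3: "X \<in> V2 dH \<Longrightarrow> rone H X \<in> V3 dH" by (simp add: rone_eq rtens_V3 unt_V1)

lemma pw_0[simp]: "pw H x 0 = unt H" by (simp add: pw_def)
lemma pw_Suc: "pw H x (Suc k) = mul H x (pw H x k)" by (simp add: pw_def)
lemma pw_V1: "pw H x k \<in> V1 dH" by (cases k) (simp_all add: pw_Suc unt_V1 mul_V1)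
lemma pw_add: "x \<in> V1 dH \<Longrightarrow> pw H x (k + l) = mul H (pw H x k) (pw H x l)"
  by (induction k) (simp_all add: pw_Suc mul_unt_l pw_V1 mul_assoc)
lemma pw_mult: "x \<in> V1 dH \<Longrightarrow> pw H x (k * l) = pw H (pw H x k) l"
  by (induction l) (simp_all add: pw_Suc pw_add)
lemma pw_unt: "pw H (unt H) k = unt H" by (induction k) (simp_all add: pw_Suc mul_unt_l unt_V1)
lemma mprod_V1: "mprod H f k \<in> V1 dH" by (cases k) (simp_all add: unt_V1 mul_V1)
lemma mprod_cong: "(\<And>i. i < k \<Longrightarrow> f i = f' i) \<Longrightarrow> mprod H f k = mprod H f' k"
  by (induction k) auto

definition commutes :: "v1 \<Rightarrow> v1 \<Rightarrow> bool" where "commutes x y \<longleftrightarrow> mul H x y = mul H y x"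

lemma commutes_mprod:
  assumes x: "x \<in> V1 dH" and f: "\<forall>i<k. f i \<in> V1 dH \<and> commutes x (f i)"
  shows "commutes x (mprod H f k)"
  using f
proof (induction k)
  case 0 then show ?case by (simp add: commutes_def mul_unt_l mul_unt_r x)
next
  case (Suc k)
  then have ih: "commutes x (mprod H f k)" and fk: "f k \<in> V1 dH" "commutes x (f k)" by auto
  have "mul H x (mul H (mprod H f k) (f k)) = mul H (mul H x (mprod H f k)) (f k)"
    by (simp add: mul_assoc x mprod_V1 fk)
  also have "\<dots> = mul H (mprod H f k) (mul H x (f k))"
    using ih by (simp add: commutes_def mul_assoc x mprod_V1 fk)
  also have "\<dots> = mul H (mul H (mprod H f k) (f k)) x"
    using fk by (simp add: commutes_def mul_assoc x mprod_V1)
  finally show ?case by (simp add: commutes_def)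
qed

lemma mul_mprod_upd:
  assumes x: "x \<in> V1 dH" and f: "\<forall>i<k. f i \<in> V1 dH \<and> commutes x (f i)" and j: "j < k"
  shows "mul H x (mprod H f k) = mprod H (f(j := mul H x (f j))) k"
  using f j
proof (induction k)
  case 0 then show ?case by simp
next
  case (Suc k)
  have fk: "f k \<in> V1 dH" "commutes x (f k)" using Suc.prems by auto
  have cmk: "commutes x (mprod H f k)" using commutes_mprod[OF x] Suc.prems by auto
  show ?case
  proof (cases "j = k")
    case True
    have m1: "mprod H (f(k := mul H x (f k))) k = mprod H f k" by (rule mprod_cong) auto
    have "mprod H (f(k := mul H x (f k))) (Suc k) = mul H (mprod H f k) (mul H x (f k))"
      using m1 by simp
    also have "\<dots> = mul H (mul H x (mprod H f k)) (f k)"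
      using cmk by (simp add: commutes_def mul_assoc x mprod_V1 fk)
    also have "\<dots> = mul H x (mprod H f (Suc k))" by (simp add: mul_assoc x mprod_V1 fk)
    finally show ?thesis unfolding True by (rule sym)
  next
    case False
    then have jk: "j < k" using Suc.prems by simp
    have ih: "mul H x (mprod H f k) = mprod H (f(j := mul H x (f j))) k"
      by (rule Suc.IH) (use Suc.prems jk in auto)
    have "mul H x (mprod H f (Suc k)) = mul H (mul H x (mprod H f k)) (f k)"
      by (simp add: mul_assoc x mprod_V1 fk)
    also have "\<dots> = mul H (mprod H (f(j := mul H x (f j))) k) (f k)"
      by (simp only: ih)
    also have "\<dots> = mprod H (f(j := mul H x (f j))) (Suc k)" using False by simp
    finally show ?thesis .
  qed
qed

lemma alg_gen_V1: assumes "S \<subseteq> V1 dH" "x \<in> alg_gen H S" shows "x \<in> V1 dH"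
  using assms(2)
proof (induction rule: alg_gen.induct)
  case unit show ?case by (rule unt_V1)
next
  case (gen x) then show ?case using assms(1) by auto
next
  case (add x y) then show ?case by (simp add: V1_def)
next
  case (smul x c) then show ?case by (simp add: V1_scal)
next
  case (mult x y) show ?case by (rule mul_V1)
qed

lemma alg_gen_plus: "x \<in> alg_gen H S \<Longrightarrow> y \<in> alg_gen H S \<Longrightarrow> x + y \<in> alg_gen H S"
proof -
  assume "x \<in> alg_gen H S" "y \<in> alg_gen H S"
  then have "(\<lambda>k. x k + y k) \<in> alg_gen H S" by (rule alg_gen.add)
  then show ?thesis by (simp add: plus_fun_def)
qed

lemma alg_gen_zero: "0 \<in> alg_gen H S"
proof -
  have "scal 0 (unt H) \<in> alg_gen H S" by (rule alg_gen.smul[OF alg_gen.unit])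
  then show ?thesis by simp
qed

lemma alg_gen_sum: "(\<And>k. k \<in> K \<Longrightarrow> f k \<in> alg_gen H S) \<Longrightarrow> sum f K \<in> alg_gen H S"
  by (induction K rule: infinite_finite_induct) (auto simp: alg_gen_zero alg_gen_plus)
lemma alg_gen_pw: "x \<in> alg_gen H S \<Longrightarrow> pw H x k \<in> alg_gen H S"
  by (induction k) (simp_all add: pw_Suc alg_gen.unit alg_gen.mult)
lemma alg_gen_mprod: "(\<And>i. i < k \<Longrightarrow> f i \<in> alg_gen H S) \<Longrightarrow> mprod H f k \<in> alg_gen H S"
  by (induction k) (simp_all add: alg_gen.unit alg_gen.mult)

lemma alg_gen_commutes_left:
  assumes S: "S \<subseteq> V1 dH" and z: "z \<in> V1 dH" and zs: "\<forall>s\<in>S. commutes z s" and y: "y \<in> alg_gen H S"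
  shows "commutes z y"
  using y
proof (induction y rule: alg_gen.induct)
  case unit then show ?case by (simp add: commutes_def mul_unt_l mul_unt_r z)
next
  case (gen x) then show ?case using zs by auto
next
  case (add x y) then show ?case
    using mul_add_l[of H x y z] mul_add_r[of H z x y] by (simp add: commutes_def plus_fun_def)
next
  case (smul x c) then show ?case by (simp add: commutes_def mul_scal_l mul_scal_r)
next
  case (mult x y)
  have xv: "x \<in> V1 dH" "y \<in> V1 dH" using alg_gen_V1[OF S] mult.hyps by auto
  have "mul H z (mul H x y) = mul H (mul H x z) y" using mult.IH by (simp add: commutes_def mul_assoc[symmetric] z xv)
  also have "\<dots> = mul H x (mul H y z)" using mult.IH by (simp add: commutes_def mul_assoc z xv)
  also have "\<dots> = mul H (mul H x y) z" by (simp add: mul_assoc z xv)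
  finally show ?case by (simp add: commutes_def)
qed

lemma alg_gen_commutes:
  assumes S: "S \<subseteq> V1 dH" and SS: "\<forall>s\<in>S. \<forall>t\<in>S. commutes s t" and x: "x \<in> alg_gen H S" and y: "y \<in> alg_gen H S"
  shows "commutes x y"
  using x y
proof (induction x arbitrary: y rule: alg_gen.induct)
  case unit then show ?case using alg_gen_V1[OF S] by (simp add: commutes_def mul_unt_l mul_unt_r)
next
  case (gen s) then show ?case using alg_gen_commutes_left[OF S, of s y] SS S by auto
next
  case (add x1 x2) then show ?case
    using mul_add_l[of H x1 x2 y] mul_add_r[of H y x1 x2] by (simp add: commutes_def plus_fun_def)
next
  case (smul x c) then show ?case by (simp add: commutes_def mul_scal_l mul_scal_r)
next
  case (mult x1 x2)
  have xv: "x1 \<in> V1 dH" "x2 \<in> V1 dH" "y \<in> V1 dH" using alg_gen_V1[OF S] mult.hyps mult.prems by auto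
  have c1: "commutes x1 y" "commutes x2 y" using mult.IH mult.prems by auto
  have "mul H (mul H x1 x2) y = mul H x1 (mul H y x2)" using c1 by (simp add: commutes_def mul_assoc xv)
  also have "\<dots> = mul H (mul H y x1) x2" using c1 by (simp add: commutes_def mul_assoc[symmetric] xv)
  also have "\<dots> = mul H y (mul H x1 x2)" by (simp add: mul_assoc xv)
  finally show ?case by (simp add: commutes_def)
qed

definition cop_diag :: "v1 \<Rightarrow> bool" where "cop_diag x \<longleftrightarrow> cop H x = tens x x"
lemma cop_diag_mul: "x \<in> V1 dH \<Longrightarrow> y \<in> V1 dH \<Longrightarrow> cop_diag x \<Longrightarrow> cop_diag y \<Longrightarrow> cop_diag (mul H x y)"
  by (simp add: cop_diag_def cop_mul mul2_tens)
lemma cop_diag_unt: "cop_diag (unt H)" by (simp add: cop_diag_def cop_unt one2_eq)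
lemma cop_diag_pw: "x \<in> V1 dH \<Longrightarrow> cop_diag x \<Longrightarrow> cop_diag (pw H x k)"
  by (induction k) (simp_all add: pw_Suc cop_diag_unt cop_diag_mul pw_V1)
lemma cop_diag_mprod: "(\<And>i. i < k \<Longrightarrow> f i \<in> V1 dH \<and> cop_diag (f i)) \<Longrightarrow> cop_diag (mprod H f k)"
  by (induction k) (simp_all add: cop_diag_unt cop_diag_mul mprod_V1)

end

section \<open>Roots of unity and the character pairing\<close>

locale root_of_unity =
  fixes n :: nat and q :: complex
  assumes n2: "n \<ge> 2" and q_root: "q ^ (n^2) = 1" and q_prim: "\<forall>k. 0 < k \<and> k < n^2 \<longrightarrow> q ^ k \<noteq> 1"
begin

definition N :: nat where "N = n^2"

definition qpow :: "int \<Rightarrow> complex" where "qpow z = q ^ nat (z mod int N)"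
lemma n_pos: "n > 0" using n2 by simp

lemma N_gt1: "N > 1"
proof -
  have "n * n \<ge> 2 * 2" using n2 by (intro mult_mono) auto
  then show ?thesis by (simp add: power2_eq_square N_def)
qed

lemma N_pos: "N > 0" using N_gt1 by simp

lemma n_lt_N: "n < N"
proof -
  have "n * 1 < n * n" using n2 by (intro mult_strict_left_mono) auto
  then show ?thesis by (simp add: power2_eq_square N_def)
qed

lemma n_dvd_N: "n dvd N" by (simp add: N_def power2_eq_square)
lemma qN: "q ^ N = 1" using q_root by (simp add: N_def)

lemma q_pow_mod: "q ^ k = q ^ (k mod N)"
proof -
  have "q ^ k = q ^ (N * (k div N) + k mod N)" by simp
  also have "\<dots> = (q ^ N) ^ (k div N) * q ^ (k mod N)" by (simp only: power_add power_mult)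
  finally show ?thesis using qN by simp
qed

lemma qpow_int: "qpow (int k) = q ^ k"
proof -
  have "nat (int k mod int N) = k mod N" by (metis nat_int zmod_int)
  then show ?thesis by (simp add: qpow_def q_pow_mod[of k])
qed

lemma qpow_cong: "z mod int N = w mod int N \<Longrightarrow> qpow z = qpow w" by (simp add: qpow_def)

lemma qpow_add: "qpow (x + y) = qpow x * qpow y"
proof -
  define u where "u = x mod int N"
  define v where "v = y mod int N"
  have u0: "u \<ge> 0" "v \<ge> 0" using N_pos by (auto simp: u_def v_def)
  have "qpow (x + y) = qpow (u + v)" by (rule qpow_cong) (simp add: u_def v_def mod_add_eq)
  also have "u + v = int (nat u + nat v)" using u0 by simp
  also have "qpow (int (nat u + nat v)) = q ^ nat u * q ^ nat v" by (simp only: qpow_int power_add)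
  also have "q ^ nat u * q ^ nat v = qpow x * qpow y" by (simp add: qpow_def u_def v_def)
  finally show ?thesis .
qed

lemma qpow_0[simp]: "qpow 0 = 1" by (simp add: qpow_def)

lemma q_nz: "q \<noteq> 0"
proof
  assume "q = 0" then have "q ^ N = 0" using N_pos by simp
  with qN show False by simp
qed

lemma qprim: "0 < k \<Longrightarrow> k < N \<Longrightarrow> q ^ k \<noteq> 1" using q_prim by (simp add: N_def)
lemma qpow_nz: "qpow z \<noteq> 0" using q_nz by (simp add: qpow_def)

lemma qpow_neg: "qpow (- z) = inverse (qpow z)"
proof -
  have "qpow (- z) * qpow z = 1" by (simp add: qpow_add[symmetric])
  then show ?thesis using qpow_nz by (simp add: field_simps)
qed

lemma qpow_N: "qpow (int N * z) = 1" by (simp add: qpow_def)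
lemma qpow_inv_pow: "inverse q ^ k = qpow (- int k)"
  by (simp add: qpow_neg qpow_int power_inverse)
lemma qpow_pow: "qpow z ^ k = qpow (int k * z)"
  by (induction k) (simp_all add: qpow_add[symmetric] algebra_simps)

lemma qpow_eq_1: "qpow z = 1 \<longleftrightarrow> int N dvd z"
proof
  assume "qpow z = 1"
  define k where "k = nat (z mod int N)"
  have "k < N" using N_pos by (simp add: k_def nat_less_iff)
  moreover have "q ^ k = 1" using \<open>qpow z = 1\<close> by (simp add: qpow_def k_def)
  ultimately have "k = 0" using qprim by (metis neq0_conv)
  moreover have "z mod int N \<ge> 0" using N_pos by simp
  ultimately have "z mod int N = 0" by (simp add: k_def)
  then show "int N dvd z" by (simp add: dvd_eq_mod_eq_0)
next
  assume "int N dvd z" then show "qpow z = 1" by (auto simp: qpow_N)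
qed

lemma qpow_n_mod: "qpow (int n * z) = qpow (int n * (z mod int n))"
proof (rule qpow_cong)
  have e: "z = z mod int n + int n * (z div int n)" by simp
  have "int n * z = int n * (z mod int n + int n * (z div int n))" by simp
  also have "\<dots> = int n * (z mod int n) + int n * int n * (z div int n)"
    by (simp only: distrib_left mult.assoc)
  finally have "int n * z = int n * (z mod int n) + int n * int n * (z div int n)" .
  then have "int n * z = int n * (z mod int n) + int N * (z div int n)"
    by (simp add: N_def power2_eq_square)
  then show "int n * z mod int N = int n * (z mod int n) mod int N" by simp
qed

lemma qpow_geometric_sum: "(\<Sum>a<N. qpow (int a * t)) = (if int N dvd t then of_nat N else 0)"
proof -
  have "(\<Sum>a<N. qpow (int a * t)) = (\<Sum>a<N. qpow t ^ a)" by (simp add: qpow_pow)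
  also have "\<dots> = (if qpow t = 1 then of_nat N else (1 - qpow t ^ N) / (1 - qpow t))" by (rule sum_gp_strict)
  also have "qpow t ^ N = 1" by (simp add: qpow_pow qpow_N)
  finally show ?thesis by (simp add: qpow_eq_1)
qed

definition nfloor :: "nat \<Rightarrow> nat" where "nfloor y = y - y mod n"
definition carry :: "nat \<Rightarrow> nat \<Rightarrow> nat" where "carry x y = (if n \<le> x mod n + y mod n then 1 else 0)"
lemma int_nfloor: "int (nfloor y) = int y - int (y mod n)" by (simp add: nfloor_def of_nat_diff)

lemma mod_n_sum: "(x + y) mod n = x mod n + y mod n - n * carry x y"
proof -
  have r: "x mod n < n" "y mod n < n" using n_pos by auto
  have "(x + y) mod n = (x mod n + y mod n) mod n" by (simp add: mod_add_eq)
  also have "\<dots> = x mod n + y mod n - n * carry x y"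
  proof (cases "n \<le> x mod n + y mod n")
    case True
    have "(x mod n + y mod n) mod n = (x mod n + y mod n - n) mod n" using True by (simp add: le_mod_geq)
    also have "\<dots> = x mod n + y mod n - n" using r by (intro mod_less) linarith
    finally show ?thesis using True by (simp add: carry_def)
  next
    case False then show ?thesis by (simp add: carry_def)
  qed
  finally show ?thesis .
qed

lemma carry_le: "n * carry x y \<le> x mod n + y mod n" by (simp add: carry_def)

lemma nfloor_carry: "(int (nfloor ((x + y) mod N)) - int (nfloor x) - int (nfloor y)) mod int N = int (n * carry x y) mod int N"
proof -
  have mm: "((x + y) mod N) mod n = (x + y) mod n" using n_dvd_N by (simp add: mod_mod_cancel)
  have "int (nfloor ((x + y) mod N)) - int (nfloor x) - int (nfloor y) =
      int ((x + y) mod N) - int ((x + y) mod n) - (int x - int (x mod n)) - (int y - int (y mod n))"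
    by (simp add: int_nfloor mm)
  also have "\<dots> = int ((x + y) mod N) - (int x + int y) + int (n * carry x y)"
    using carry_le[of x y] by (simp add: mod_n_sum of_nat_diff)
  also have "int ((x + y) mod N) = (int x + int y) - int N * ((int x + int y) div int N)"
    by (metis zmod_int of_nat_add minus_div_mult_eq_mod mult.commute)
  finally have E: "int (nfloor ((x + y) mod N)) - int (nfloor x) - int (nfloor y) = int (n * carry x y) + (- ((int x + int y) div int N)) * int N"
    by (simp add: algebra_simps)
  show ?thesis unfolding E by (rule mod_mult_self1)
qed

lemma carry_red: "carry (x mod n) (y mod n) = carry x y" by (simp add: carry_def)

end

locale char_group = root_of_unity +
  fixes m :: nat
begin

abbreviation "Gnm \<equiv> Gm n m"

definition gadd :: "(nat \<Rightarrow> nat) \<Rightarrow> (nat \<Rightarrow> nat) \<Rightarrow> nat \<Rightarrow> nat" where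
  "gadd b c = (\<lambda>i\<in>{..<m}. (b i + c i) mod N)"
definition gneg :: "(nat \<Rightarrow> nat) \<Rightarrow> nat \<Rightarrow> nat" where
  "gneg b = (\<lambda>i\<in>{..<m}. (N - b i) mod N)"
definition gzero :: "nat \<Rightarrow> nat" where "gzero = (\<lambda>i\<in>{..<m}. 0)"
definition gbasis :: "nat \<Rightarrow> nat \<Rightarrow> nat \<Rightarrow> nat" where "gbasis k j = (\<lambda>i\<in>{..<m}. if i = j then k else 0)"
definition gred :: "(nat \<Rightarrow> nat) \<Rightarrow> nat \<Rightarrow> nat" where "gred b = (\<lambda>i\<in>{..<m}. b i mod n)"

lemma Gnm_iff: "b \<in> Gnm \<longleftrightarrow> (\<forall>i<m. b i < N) \<and> (\<forall>i. m \<le> i \<longrightarrow> b i = undefined)"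
  by (auto simp: Gm_def PiE_iff extensional_def N_def)
lemma Gnm_lt: "b \<in> Gnm \<Longrightarrow> i < m \<Longrightarrow> b i < N" by (simp add: Gnm_iff)
lemma Gnm_eq: "b \<in> Gnm \<Longrightarrow> c \<in> Gnm \<Longrightarrow> b = c \<longleftrightarrow> (\<forall>i<m. b i = c i)"
  by (auto simp: Gm_def intro: PiE_ext)
lemma finite_Gnm: "finite Gnm" by (simp add: Gm_def finite_PiE)
lemma card_Gnm: "card Gnm = N ^ m" by (simp add: Gm_def card_PiE N_def)
lemma gadd_Gnm: "gadd b c \<in> Gnm" using N_pos by (simp add: Gnm_iff gadd_def)
lemma gneg_Gnm: "gneg b \<in> Gnm" using N_pos by (simp add: Gnm_iff gneg_def)
lemma gzero_Gnm: "gzero \<in> Gnm" using N_pos by (simp add: Gnm_iff gzero_def)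
lemma gbasis_Gnm: "k < N \<Longrightarrow> gbasis k j \<in> Gnm" using N_pos by (simp add: Gnm_iff gbasis_def)
lemma gbasis1_Gnm: "gbasis 1 i \<in> Gnm" "gbasis (Suc 0) i \<in> Gnm" using N_gt1 gbasis_Gnm by auto

lemma gred_Gnm: "gred b \<in> Gnm"
proof -
  have "b i mod n < N" for i using n_lt_N n_pos by (meson mod_less_divisor less_trans)
  then show ?thesis by (auto simp: Gnm_iff gred_def N_def)
qed

lemma gadd_apply: "i < m \<Longrightarrow> gadd b c i = (b i + c i) mod N" by (simp add: gadd_def)
lemma gneg_apply: "i < m \<Longrightarrow> gneg b i = (N - b i) mod N" by (simp add: gneg_def)
lemma gzero_apply: "i < m \<Longrightarrow> gzero i = 0" by (simp add: gzero_def)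
lemma gbasis_apply: "i < m \<Longrightarrow> gbasis k j i = (if i = j then k else 0)" by (simp add: gbasis_def)
lemma gred_apply: "i < m \<Longrightarrow> gred b i = b i mod n" by (simp add: gred_def)
lemma gadd_commute: "gadd b c = gadd c b" by (simp add: gadd_def add.commute)
lemma gadd_assoc: "gadd (gadd b c) d = gadd b (gadd c d)"
  by (auto simp: gadd_def fun_eq_iff mod_add_left_eq mod_add_right_eq add.assoc)
lemma gadd_gzero: "b \<in> Gnm \<Longrightarrow> gadd b gzero = b"
  by (rule Gnm_eq[THEN iffD2]) (auto simp: gadd_Gnm gadd_apply gzero_apply Gnm_lt)

lemma gadd_gneg: "b \<in> Gnm \<Longrightarrow> gadd b (gneg b) = gzero"
proof (rule Gnm_eq[THEN iffD2])
  assume b: "b \<in> Gnm"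
  show "\<forall>i<m. gadd b (gneg b) i = gzero i"
  proof (intro allI impI)
    fix i assume i: "i < m"
    have lt: "b i < N" using b i by (simp add: Gnm_lt)
    have "(b i + (N - b i) mod N) mod N = (b i + (N - b i)) mod N" by (simp add: mod_add_right_eq)
    also have "\<dots> = 0" using lt by simp
    finally show "gadd b (gneg b) i = gzero i" using i by (simp add: gadd_apply gneg_apply gzero_apply)
  qed
qed (auto simp: gadd_Gnm gzero_Gnm)

lemma gadd_gneg_cancel: "b \<in> Gnm \<Longrightarrow> c \<in> Gnm \<Longrightarrow> gadd (gadd b c) (gneg c) = b"
  by (simp add: gadd_assoc gadd_gneg gadd_gzero)
lemma gadd_gneg_cancel2: "b \<in> Gnm \<Longrightarrow> c \<in> Gnm \<Longrightarrow> gadd (gadd b (gneg c)) c = b"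
  by (simp add: gadd_assoc gadd_commute[of "gneg c" c] gadd_gneg gadd_gzero)
lemma inj_on_gadd: "c \<in> Gnm \<Longrightarrow> inj_on (\<lambda>b. gadd b c) Gnm"
  by (rule inj_onI) (metis gadd_gneg_cancel)
lemma gadd_gbasis: "k + l < N \<Longrightarrow> gadd (gbasis k i) (gbasis l i) = gbasis (k + l) i"
  by (simp add: gadd_def gbasis_def restrict_def fun_eq_iff)

lemma sum_gadd_shift: "c \<in> Gnm \<Longrightarrow> (\<Sum>b\<in>Gnm. F (gadd b c)) = (\<Sum>b\<in>Gnm. F b)"
  by (rule sum.reindex_bij_witness[where i="\<lambda>b. gadd b (gneg c)" and j="\<lambda>b. gadd b c"])
     (auto simp: gadd_Gnm gadd_gneg_cancel gadd_gneg_cancel2 gneg_Gnm)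

lemma sum_Gnm_delta: "b0 \<in> Gnm \<Longrightarrow> (\<Sum>b\<in>Gnm. if b = b0 then F b else 0) = F b0"
  by (simp add: sum.delta finite_Gnm)
lemma sum_Gnm_single: "b \<in> Gnm \<Longrightarrow> (\<And>x. x \<in> Gnm \<Longrightarrow> x \<noteq> b \<Longrightarrow> F x = 0) \<Longrightarrow> sum F Gnm = F b"
  by (metis (mono_tags, lifting) finite_Gnm sum.remove sum.neutral DiffE insertCI add.right_neutral)
lemma gred_gred: "gred (gred b) = gred b" by (simp add: gred_def restrict_def fun_eq_iff)

lemma gred_gadd_gbasis_n: assumes j: "j < m" shows "gred (gadd b (gbasis n j)) = gred b"
proof -
  have "((b i + (if i = j then n else 0)) mod N) mod n = b i mod n" for i
    using n_dvd_N by (simp add: mod_mod_cancel)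
  then show ?thesis by (simp add: gred_def gadd_def gbasis_def restrict_def fun_eq_iff)
qed

lemma gred_gbasis1: "gred (gbasis (Suc 0) i) = gbasis (Suc 0) i"
  using n2 by (simp add: gred_def gbasis_def restrict_def fun_eq_iff)
lemma gred_gbasis_n: "gred (gbasis n i) = gred (gbasis 0 i)"
  by (simp add: gred_def gbasis_def restrict_def fun_eq_iff)

definition chi :: "(nat \<Rightarrow> nat) \<Rightarrow> (nat \<Rightarrow> nat) \<Rightarrow> complex" where
  "chi b c = (\<Prod>i<m. qpow (int (b i) * int (c i)))"
lemma chi_comm: "chi b c = chi c b" by (simp add: chi_def mult.commute)
lemma chi_nz: "chi b c \<noteq> 0" by (simp add: chi_def qpow_nz)
lemma chi_zero: "chi b gzero = 1" by (simp add: chi_def gzero_apply)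

lemma chi_gadd_left: "chi (gadd b c) d = chi b d * chi c d"
proof -
  have "chi (gadd b c) d = (\<Prod>i<m. qpow (int (b i) * int (d i)) * qpow (int (c i) * int (d i)))"
    unfolding chi_def
  proof (rule prod.cong[OF refl])
    fix i assume "i \<in> {..<m}"
    then have "qpow (int (gadd b c i) * int (d i)) = qpow ((int (b i) + int (c i)) * int (d i))"
      by (intro qpow_cong) (simp add: gadd_apply zmod_int mod_mult_left_eq)
    then show "qpow (int (gadd b c i) * int (d i)) = qpow (int (b i) * int (d i)) * qpow (int (c i) * int (d i))"
      by (simp add: qpow_add[symmetric] algebra_simps)
  qed
  then show ?thesis by (simp add: chi_def prod.distrib)
qed

lemma chi_gadd_right: "chi d (gadd b c) = chi d b * chi d c"
  by (metis chi_comm chi_gadd_left)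

lemma chi_gbasis_n: "j < m \<Longrightarrow> chi (gbasis n j) al = qpow (int n * int (al j))"
proof -
  assume j: "j < m"
  have "chi (gbasis n j) al = (\<Prod>i<m. if i = j then qpow (int n * int (al j)) else 1)"
    unfolding chi_def by (rule prod.cong) (auto simp: gbasis_apply)
  also have "\<dots> = qpow (int n * int (al j))" using j by (simp add: prod.delta)
  finally show ?thesis .
qed

lemma idem_coef: "(\<Prod>i<m. inverse q ^ (b i * a i)) = inverse (chi b a)"
  by (simp add: chi_def qpow_inv_pow qpow_neg prod_inv)

lemma chi_orthogonality:
  assumes b: "b \<in> Gnm" and c: "c \<in> Gnm"
  shows "(\<Sum>a\<in>Gnm. inverse (chi b a) * chi a c) = (if b = c then of_nat N ^ m else 0)"
proof -
  have "(\<Sum>a\<in>Gnm. inverse (chi b a) * chi a c) = (\<Sum>a\<in>Gnm. \<Prod>i<m. qpow (int (a i) * (int (c i) - int (b i))))"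
  proof (rule sum.cong[OF refl])
    fix a
    have "inverse (chi b a) * chi a c = (\<Prod>i<m. inverse (qpow (int (b i) * int (a i))) * qpow (int (a i) * int (c i)))"
      by (simp add: chi_def prod_inv[symmetric] prod.distrib)
    also have "\<dots> = (\<Prod>i<m. qpow (int (a i) * (int (c i) - int (b i))))"
      by (rule prod.cong[OF refl]) (simp add: qpow_neg[symmetric] qpow_add[symmetric] algebra_simps)
    finally show "inverse (chi b a) * chi a c = (\<Prod>i<m. qpow (int (a i) * (int (c i) - int (b i))))" .
  qed
  also have "\<dots> = (\<Prod>i<m. \<Sum>x<N. qpow (int x * (int (c i) - int (b i))))"
    by (simp add: Gm_def prod_sum_PiE N_def)
  also have "\<dots> = (\<Prod>i<m. if b i = c i then of_nat N else 0)"
  proof (rule prod.cong[OF refl])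
    fix i assume "i \<in> {..<m}"
    then have lt: "b i < N" "c i < N" using b c by (auto simp: Gnm_lt)
    have "int N dvd (int (c i) - int (b i)) \<longleftrightarrow> b i = c i"
    proof
      assume "int N dvd (int (c i) - int (b i))"
      then obtain k where k: "int (c i) - int (b i) = int N * k" by (auto elim: dvdE)
      have "\<bar>int (c i) - int (b i)\<bar> < int N" using lt by auto
      then have "k = 0" using k N_pos
        by (metis abs_mult abs_of_nat mult_less_cancel_left2 nat_int of_nat_less_0_iff zero_less_abs_iff
            abs_ge_self linorder_not_less mult.right_neutral less_le_trans zero_less_one_class.zero_le_one
            int_one_le_iff_zero_less)
      then show "b i = c i" using k by simp
    qed simp
    then show "(\<Sum>x<N. qpow (int x * (int (c i) - int (b i)))) = (if b i = c i then of_nat N else 0)"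
      by (simp add: qpow_geometric_sum)
  qed
  also have "\<dots> = (if b = c then of_nat N ^ m else 0)"
    using Gnm_eq[OF b c] by (auto simp: prod.neutral)
  finally show ?thesis .
qed

lemma sum_chi_subgroup:
  assumes S: "S \<subseteq> Gnm" and closed: "\<And>c d. c \<in> S \<Longrightarrow> d \<in> S \<Longrightarrow> gadd c d \<in> S"
    and c1: "c1 \<in> S" and nontriv: "chi al c1 \<noteq> 1"
  shows "(\<Sum>c\<in>S. chi al c) = 0"
proof -
  have finS: "finite S" using finite_subset[OF S finite_Gnm] .
  have inj: "inj_on (\<lambda>b. gadd b c1) S" using inj_on_gadd c1 S by (blast intro: inj_on_subset)
  have img: "(\<lambda>b. gadd b c1) ` S = S"
    by (rule endo_inj_surj[OF finS _ inj]) (auto intro: closed c1)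
  have "(\<Sum>c\<in>S. chi al c) = (\<Sum>c\<in>(\<lambda>b. gadd b c1) ` S. chi al c)" using img by simp
  also have "\<dots> = (\<Sum>c\<in>S. chi al (gadd c c1))" by (rule sum.reindex[OF inj, unfolded o_def])
  also have "\<dots> = (\<Sum>c\<in>S. chi al c) * chi al c1" by (simp add: chi_gadd_right sum_distrib_right)
  finally have "(\<Sum>c\<in>S. chi al c) * (1 - chi al c1) = 0" by (simp add: algebra_simps)
  then show ?thesis using nontriv by simp
qed

definition periodic1 :: "((nat \<Rightarrow> nat) \<Rightarrow> complex) \<Rightarrow> bool" where
  "periodic1 h \<longleftrightarrow> (\<forall>b\<in>Gnm. h (gred b) = h b)"
definition periodic2 :: "((nat \<Rightarrow> nat) \<Rightarrow> (nat \<Rightarrow> nat) \<Rightarrow> complex) \<Rightarrow> bool" where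
  "periodic2 h \<longleftrightarrow> (\<forall>b\<in>Gnm. \<forall>c\<in>Gnm. h (gred b) (gred c) = h b c)"
definition periodic3 :: "((nat \<Rightarrow> nat) \<Rightarrow> (nat \<Rightarrow> nat) \<Rightarrow> (nat \<Rightarrow> nat) \<Rightarrow> complex) \<Rightarrow> bool" where
  "periodic3 h \<longleftrightarrow> (\<forall>b\<in>Gnm. \<forall>c\<in>Gnm. \<forall>d\<in>Gnm. h (gred b) (gred c) (gred d) = h b c d)"

lemma periodic2_gbasis_n:
  assumes per: "periodic2 f" and b: "b \<in> Gnm"
  shows "f b (gbasis n i) = f b (gbasis 0 i)" "f (gbasis n i) b = f (gbasis 0 i) b"
proof -
  have G: "gbasis n i \<in> Gnm" "gbasis 0 i \<in> Gnm" using n_lt_N by (simp_all add: gbasis_Gnm)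
  have "f b (gbasis n i) = f (gred b) (gred (gbasis n i))" using per b G by (simp add: periodic2_def)
  also have "\<dots> = f b (gbasis 0 i)" using per b G by (simp add: periodic2_def gred_gbasis_n)
  finally show "f b (gbasis n i) = f b (gbasis 0 i)" .
  have "f (gbasis n i) b = f (gred (gbasis n i)) (gred b)" using per b G by (simp add: periodic2_def)
  also have "\<dots> = f (gbasis 0 i) b" using per b G by (simp add: periodic2_def gred_gbasis_n)
  finally show "f (gbasis n i) b = f (gbasis 0 i) b" .
qed

end

section \<open>The primitive idempotents of the group algebra\<close>

locale construction = hopf_algebra H + char_group n q m for H n q m +
  fixes g e :: "nat \<Rightarrow> v1" and a :: "nat \<Rightarrow> nat \<Rightarrow> nat"
  assumes gens_in: "\<forall>i<m. g i \<in> V1 (dim H) \<and> e i \<in> V1 (dim H)"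
    and g_grouplike: "\<forall>i<m. grouplike H (g i)"
    and g_order: "\<forall>i<m. pw H (g i) (n^2) = unt H"
    and g_comm: "\<forall>i<m. \<forall>j<m. mul H (g i) (g j) = mul H (g j) (g i)"
    and g_e: "\<forall>i<m. \<forall>j<m. mul H (g i) (e j) = scal (if i = j then q else 1) (mul H (e j) (g i))"
    and e_cop: "\<forall>i<m. cop H (e i) = (\<lambda>k l. e i k * Kel H g m a i l + unt H k * e i l)"
    and group_alg: "inj_on (gmon H g m) (Gm n m)"
begin

lemma g_V1: "i < m \<Longrightarrow> g i \<in> V1 dH" using gens_in by auto
lemma e_V1: "i < m \<Longrightarrow> e i \<in> V1 dH" using gens_in by auto
lemma g_cop: "i < m \<Longrightarrow> cop H (g i) = tens (g i) (g i)" using g_grouplike by (auto simp: grouplike_def)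
lemma g_cnt: "i < m \<Longrightarrow> cnt H (g i) = 1" using g_grouplike by (auto simp: grouplike_def)
lemma g_pw_N: "i < m \<Longrightarrow> pw H (g i) N = unt H" using g_order by (simp add: N_def)

lemma g_pw_mod: "i < m \<Longrightarrow> pw H (g i) k = pw H (g i) (k mod N)"
proof -
  assume i: "i < m"
  have "pw H (g i) k = pw H (g i) (N * (k div N) + k mod N)" by simp
  also have "\<dots> = mul H (pw H (pw H (g i) N) (k div N)) (pw H (g i) (k mod N))"
    by (simp only: pw_add[OF g_V1[OF i]] pw_mult[OF g_V1[OF i]])
  also have "\<dots> = pw H (g i) (k mod N)" by (simp add: g_pw_N i pw_unt mul_unt_l pw_V1)
  finally show ?thesis .
qed

abbreviation "Cg \<equiv> alg_gen H {g i | i. i < m}"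

lemma Cg_gens_V1: "{g i | i. i < m} \<subseteq> V1 dH" using g_V1 by auto
lemma Cg_commute: "x \<in> Cg \<Longrightarrow> y \<in> Cg \<Longrightarrow> mul H x y = mul H y x"
  using alg_gen_commutes[OF Cg_gens_V1, of x y] g_comm by (auto simp: commutes_def)
lemma g_Cg: "i < m \<Longrightarrow> g i \<in> Cg" by (auto intro: alg_gen.gen)
lemma gmon_V1: "gmon H g m al \<in> V1 dH" by (simp add: gmon_def mprod_V1)

lemma cop_gmon: "cop H (gmon H g m al) = tens (gmon H g m al) (gmon H g m al)"
proof -
  have "pw H (g i) (al i) \<in> V1 dH \<and> cop_diag (pw H (g i) (al i))" if "i < m" for i
    using that cop_diag_pw[OF g_V1[OF that], of "al i"] g_cop[OF that] by (simp add: cop_diag_def pw_V1)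
  then have "cop_diag (mprod H (\<lambda>i. pw H (g i) (al i)) m)" by (rule cop_diag_mprod)
  then show ?thesis by (simp add: cop_diag_def gmon_def)
qed

lemma cnt_gmon: "cnt H (gmon H g m al) = 1"
proof -
  have "cnt H (pw H (g i) k) = 1" if "i < m" for i k
    using that by (induction k) (simp_all add: pw_Suc cnt_unt cnt_mul g_V1 pw_V1 g_cnt)
  then have "k \<le> m \<Longrightarrow> cnt H (mprod H (\<lambda>i. pw H (g i) (al i)) k) = 1" for k
    by (induction k) (simp_all add: cnt_unt cnt_mul mprod_V1 pw_V1)
  then show ?thesis by (simp add: gmon_def)
qed

lemma Kel_eq: "Kel H g m a i = gmon H g m (a i)" by (simp add: Kel_def gmon_def)

abbreviation I :: "(nat \<Rightarrow> nat) \<Rightarrow> v1" where "I b \<equiv> idem H q n m g b"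

abbreviation "cN \<equiv> (1 / of_nat N :: complex) ^ m"

lemma cN_N: "cN * of_nat N ^ m = 1" using N_pos by (simp add: power_one_over[symmetric] power_mult_distrib[symmetric])
lemma idem_eq: "I b = scal cN (\<Sum>al\<in>Gnm. scal (inverse (chi b al)) (gmon H g m al))"
  by (simp add: idem_def fun_eq_iff scal_def sum_fun_apply idem_coef N_def)
lemma idem_V1: "I b \<in> V1 dH" by (simp add: idem_eq V1_scal V1_sum gmon_V1)

lemma g_mul_gmon:
  assumes j: "j < m" and al: "al \<in> Gnm"
  shows "mul H (g j) (gmon H g m al) = gmon H g m (gadd al (gbasis 1 j))"
proof -
  let ?f = "\<lambda>i. pw H (g i) (al i)"
  have "mul H (g j) (gmon H g m al) = mprod H (?f(j := mul H (g j) (?f j))) m"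
    unfolding gmon_def
    by (rule mul_mprod_upd) (auto simp: g_V1 j pw_V1 commutes_def intro!: Cg_commute g_Cg alg_gen_pw)
  also have "\<dots> = gmon H g m (gadd al (gbasis 1 j))" unfolding gmon_def
  proof (rule mprod_cong)
    fix i assume i: "i < m"
    show "(?f(j := mul H (g j) (?f j))) i = pw H (g i) (gadd al (gbasis 1 j) i)"
    proof (cases "i = j")
      case True
      then show ?thesis using i
        by (simp add: gadd_apply gbasis_apply pw_Suc[symmetric] g_pw_mod[of j "Suc (al j)"])
    next
      case False
      then show ?thesis using i al by (simp add: gadd_apply gbasis_apply Gnm_lt)
    qed
  qed
  finally show ?thesis .
qed

lemma chi_gbasis1: "j < m \<Longrightarrow> chi (gbasis 1 j) b = q ^ b j"
proof -
  assume j: "j < m"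
  have "chi (gbasis 1 j) b = (\<Prod>i<m. if i = j then qpow (int (b j)) else 1)"
    unfolding chi_def by (rule prod.cong) (auto simp: gbasis_apply)
  also have "\<dots> = qpow (int (b j))" using j by (simp add: prod.delta)
  finally show ?thesis by (simp add: qpow_int)
qed

lemma g_mul_idem:
  assumes j: "j < m" and b: "b \<in> Gnm"
  shows "mul H (g j) (I b) = scal (q ^ b j) (I b)"
proof -
  have eps: "gbasis 1 j \<in> Gnm" using N_gt1 by (simp add: gbasis_Gnm)
  define F where "F al = scal (inverse (chi b al) * q ^ b j) (gmon H g m al)" for al
  have "mul H (g j) (I b) = scal cN (\<Sum>al\<in>Gnm. scal (inverse (chi b al)) (mul H (g j) (gmon H g m al)))"
    by (simp add: idem_eq mul_scal_r mul_sum_r)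
  also have "\<dots> = scal cN (\<Sum>al\<in>Gnm. F (gadd al (gbasis 1 j)))"
  proof -
    have "scal (inverse (chi b al)) (mul H (g j) (gmon H g m al)) = F (gadd al (gbasis 1 j))" if "al \<in> Gnm" for al
    proof -
      have "chi b (gadd al (gbasis 1 j)) = chi b al * q ^ b j"
        by (metis chi_comm chi_gadd_left chi_gbasis1[OF j])
      moreover have "inverse (q ^ b j) * q ^ b j = 1" using q_nz by simp
      ultimately show ?thesis using that chi_nz[of b al]
        by (simp add: F_def g_mul_gmon j mult.assoc)
    qed
    then show ?thesis by (simp cong: sum.cong)
  qed
  also have "\<dots> = scal cN (\<Sum>al\<in>Gnm. F al)" by (simp only: sum_gadd_shift[OF eps])
  also have "\<dots> = scal (q ^ b j) (I b)"
    by (simp add: F_def idem_eq scal_scal scal_sum mult_ac)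
  finally show ?thesis .
qed

lemma pw_mul_idem:
  assumes j: "j < m" and b: "b \<in> Gnm"
  shows "mul H (pw H (g j) t) (I b) = scal (q ^ (t * b j)) (I b)"
proof (induction t)
  case 0 then show ?case by (simp add: mul_unt_l idem_V1)
next
  case (Suc t)
  have "mul H (pw H (g j) (Suc t)) (I b) = mul H (g j) (mul H (pw H (g j) t) (I b))"
    by (simp add: pw_Suc mul_assoc g_V1 j pw_V1 idem_V1)
  also have "\<dots> = scal (q ^ (Suc t * b j)) (I b)"
    using Suc by (simp add: mul_scal_r g_mul_idem j b scal_scal power_add mult.commute)
  finally show ?case .
qed

lemma gmon_mul_idem:
  assumes b: "b \<in> Gnm"
  shows "mul H (gmon H g m al) (I b) = scal (chi al b) (I b)"
proof -
  have "k \<le> m \<Longrightarrow> mul H (mprod H (\<lambda>i. pw H (g i) (al i)) k) (I b) = scal (\<Prod>i<k. qpow (int (al i) * int (b i))) (I b)" for k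
  proof (induction k)
    case 0 then show ?case by (simp add: mul_unt_l idem_V1)
  next
    case (Suc k)
    have "mul H (mprod H (\<lambda>i. pw H (g i) (al i)) (Suc k)) (I b)
        = mul H (mprod H (\<lambda>i. pw H (g i) (al i)) k) (mul H (pw H (g k) (al k)) (I b))"
      by (simp add: mul_assoc mprod_V1 pw_V1 idem_V1)
    also have "\<dots> = scal (\<Prod>i<Suc k. qpow (int (al i) * int (b i))) (I b)"
      using Suc by (simp add: pw_mul_idem b mul_scal_r scal_scal qpow_int[symmetric] mult.commute)
    finally show ?case .
  qed
  then show ?thesis by (simp add: gmon_def chi_def)
qed

lemma idem_orth:
  assumes b: "b \<in> Gnm" and b': "b' \<in> Gnm"
  shows "mul H (I b') (I b) = (if b' = b then I b else 0)"
proof -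
  have "mul H (I b') (I b) = scal cN (\<Sum>al\<in>Gnm. scal (inverse (chi b' al) * chi al b) (I b))"
    by (simp add: idem_eq[of b'] mul_scal_l mul_sum_l gmon_mul_idem b scal_scal)
  also have "\<dots> = scal (cN * (\<Sum>al\<in>Gnm. inverse (chi b' al) * chi al b)) (I b)"
    by (simp add: sum_scal_same scal_scal)
  also have "\<dots> = (if b' = b then I b else 0)" using cN_N by (simp add: chi_orthogonality b b')
  finally show ?thesis .
qed

lemma idem_mul_other: "b \<in> Gnm \<Longrightarrow> b' \<in> Gnm \<Longrightarrow> b' \<noteq> b \<Longrightarrow> mul H (I b') (I b) = 0"
  by (simp add: idem_orth)
lemma idem_mul_self: "b \<in> Gnm \<Longrightarrow> mul H (I b) (I b) = I b"
  by (simp add: idem_orth)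

lemma gmon_gzero: "gmon H g m gzero = unt H"
proof -
  have "k \<le> m \<Longrightarrow> mprod H (\<lambda>i. pw H (g i) (gzero i)) k = unt H" for k
    by (induction k) (simp_all add: gzero_apply mul_unt_l unt_V1)
  then show ?thesis by (simp add: gmon_def)
qed

lemma idem_sum: "(\<Sum>b\<in>Gnm. I b) = unt H"
proof -
  have "(\<Sum>b\<in>Gnm. I b) = scal cN (\<Sum>b\<in>Gnm. \<Sum>al\<in>Gnm. scal (inverse (chi b al)) (gmon H g m al))"
    by (simp add: idem_eq scal_sum)
  also have "\<dots> = scal cN (\<Sum>al\<in>Gnm. scal (\<Sum>b\<in>Gnm. inverse (chi al b) * chi b gzero) (gmon H g m al))"
    by (subst sum.swap) (simp add: sum_scal_same chi_zero chi_comm)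
  also have "\<dots> = scal cN (\<Sum>al\<in>Gnm. if al = gzero then scal (of_nat N ^ m) (gmon H g m al) else 0)"
    by (intro arg_cong[where f="scal cN"] sum.cong refl) (simp add: chi_orthogonality gzero_Gnm)
  also have "\<dots> = unt H" using cN_N by (simp add: sum_Gnm_delta gzero_Gnm gmon_gzero scal_scal)
  finally show ?thesis .
qed

lemma gmon_expand: "gmon H g m al = (\<Sum>b\<in>Gnm. scal (chi al b) (I b))"
proof -
  have "gmon H g m al = mul H (gmon H g m al) (unt H)" by (simp add: mul_unt_r gmon_V1)
  also have "\<dots> = (\<Sum>b\<in>Gnm. scal (chi al b) (I b))"
    by (simp add: idem_sum[symmetric] mul_sum_r gmon_mul_idem cong: sum.cong)
  finally show ?thesis .
qed

lemma cnt_idem: "b \<in> Gnm \<Longrightarrow> cnt H (I b) = (if b = gzero then 1 else 0)"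
proof -
  assume b: "b \<in> Gnm"
  have "cnt H (I b) = cN * (\<Sum>al\<in>Gnm. inverse (chi b al) * chi al gzero)"
    by (simp add: idem_eq cnt_scal cnt_sum cnt_gmon chi_zero)
  then show ?thesis using cN_N by (simp add: chi_orthogonality b gzero_Gnm)
qed

lemma cop_idem_mul_tens:
  assumes b: "b \<in> Gnm" and c: "c \<in> Gnm" and d: "d \<in> Gnm"
  shows "mul2 H (cop H (I b)) (tens (I c) (I d)) = (if b = gadd c d then tens (I c) (I d) else 0)"
proof -
  have "mul2 H (cop H (I b)) (tens (I c) (I d)) =
     scal2 cN (\<Sum>al\<in>Gnm. scal2 (inverse (chi b al) * chi al (gadd c d)) (tens (I c) (I d)))"
    by (simp add: idem_eq[of b] cop_scal cop_sum mul2_scal2_l mul2_sum_l cop_gmon mul2_tens gmon_mul_idem c d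
        tens_scal_l tens_scal_r scal2_scal2 chi_gadd_right mult_ac)
  also have "\<dots> = scal2 (cN * (\<Sum>al\<in>Gnm. inverse (chi b al) * chi al (gadd c d))) (tens (I c) (I d))"
    by (simp add: scal2_sum[symmetric] scal2_scal2 fun_eq_iff sum_fun_apply scal2_def sum_distrib_right)
  also have "\<dots> = (if b = gadd c d then tens (I c) (I d) else 0)"
    using cN_N by (simp add: chi_orthogonality b gadd_Gnm)
  finally show ?thesis .
qed

lemma one2_idem_expansion: "one2 H = (\<Sum>c\<in>Gnm. \<Sum>d\<in>Gnm. tens (I c) (I d))"
proof -
  have "one2 H = tens (\<Sum>c\<in>Gnm. I c) (\<Sum>d\<in>Gnm. I d)" by (simp add: one2_eq idem_sum)
  also have "\<dots> = (\<Sum>c\<in>Gnm. tens (I c) (\<Sum>d\<in>Gnm. I d))" by (rule tens_sum_l)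
  also have "\<dots> = (\<Sum>c\<in>Gnm. \<Sum>d\<in>Gnm. tens (I c) (I d))" by (simp only: tens_sum_r)
  finally show ?thesis .
qed

lemma one3_idem_expansion: "one3 H = (\<Sum>b\<in>Gnm. \<Sum>c\<in>Gnm. \<Sum>d\<in>Gnm. tens3 (I b) (I c) (I d))"
proof -
  have "one3 H = tens3 (\<Sum>b\<in>Gnm. I b) (\<Sum>c\<in>Gnm. I c) (\<Sum>d\<in>Gnm. I d)" by (simp add: one3_eq idem_sum)
  also have "\<dots> = (\<Sum>b\<in>Gnm. tens3 (I b) (\<Sum>c\<in>Gnm. I c) (\<Sum>d\<in>Gnm. I d))" by (rule tens3_sum_1)
  also have "\<dots> = (\<Sum>b\<in>Gnm. \<Sum>c\<in>Gnm. tens3 (I b) (I c) (\<Sum>d\<in>Gnm. I d))" by (simp only: tens3_sum_2)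
  also have "\<dots> = (\<Sum>b\<in>Gnm. \<Sum>c\<in>Gnm. \<Sum>d\<in>Gnm. tens3 (I b) (I c) (I d))" by (simp only: tens3_sum_3)
  finally show ?thesis .
qed

lemma idem_gzero_nonzero: "I gzero \<noteq> 0"
  using cnt_idem[OF gzero_Gnm] cnt_zero by auto

lemma idem_gadd_nonzero:
  assumes c: "c \<in> Gnm" and d: "d \<in> Gnm" and nz: "I c \<noteq> 0" "I d \<noteq> 0"
  shows "I (gadd c d) \<noteq> 0"
proof
  assume "I (gadd c d) = 0"
  then have "tens (I c) (I d) = 0"
    using cop_idem_mul_tens[of "gadd c d" c d, OF gadd_Gnm c d] by simp
  with nz show False by (simp add: tens_nonzero)
qed

lemma chi_trivial_on_idem_support:
  assumes al: "al \<in> Gnm" and triv: "\<And>c. c \<in> Gnm \<Longrightarrow> I c \<noteq> 0 \<Longrightarrow> chi al c = 1"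
  shows "al = gzero"
proof -
  have "gmon H g m al = (\<Sum>b\<in>Gnm. scal (chi al b) (I b))" by (rule gmon_expand)
  also have "\<dots> = (\<Sum>b\<in>Gnm. I b)"
  proof (rule sum.cong[OF refl])
    fix b assume "b \<in> Gnm"
    then show "scal (chi al b) (I b) = I b" using triv by (cases "I b = 0") auto
  qed
  also have "\<dots> = gmon H g m gzero" by (simp add: idem_sum gmon_gzero)
  finally show ?thesis using group_alg al gzero_Gnm by (auto dest: inj_onD)
qed

text \<open>The support \<open>S\<close> of \<open>b \<mapsto> 1\<^sub>b\<close> is a subgroup on which no nonzero character is trivial;
  counting \<open>\<Sum>\<^sub>\<alpha> \<Sum>\<^sub>c\<^sub>\<in>\<^sub>S \<chi>(\<alpha>,c)\<close> in two ways gives \<open>|S| = N\<^sup>m\<close>.\<close>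

lemma idem_nonzero: assumes b: "b \<in> Gnm" shows "I b \<noteq> 0"
proof -
  define S where "S = {b \<in> Gnm. I b \<noteq> 0}"
  have SG: "S \<subseteq> Gnm" by (auto simp: S_def)
  have closed: "gadd c d \<in> S" if "c \<in> S" "d \<in> S" for c d
    using that idem_gadd_nonzero by (auto simp: S_def gadd_Gnm)
  have zS: "gzero \<in> S" by (simp add: S_def gzero_Gnm idem_gzero_nonzero)
  have "(\<Sum>al\<in>Gnm. \<Sum>c\<in>S. chi al c) = (\<Sum>c\<in>S. \<Sum>al\<in>Gnm. inverse (chi gzero al) * chi al c)"
    by (subst sum.swap) (simp add: chi_comm[of gzero] chi_zero)
  also have "\<dots> = (\<Sum>c\<in>S. if gzero = c then of_nat N ^ m else 0)"
    using SG by (intro sum.cong refl) (auto simp: chi_orthogonality gzero_Gnm)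
  also have "\<dots> = of_nat N ^ m" using zS finite_subset[OF SG finite_Gnm] by simp
  finally have by_columns: "(\<Sum>al\<in>Gnm. \<Sum>c\<in>S. chi al c) = of_nat N ^ m" .
  have row: "(\<Sum>c\<in>S. chi al c) = (if al = gzero then of_nat (card S) else 0)" if al: "al \<in> Gnm" for al
  proof (cases "\<forall>c\<in>S. chi al c = 1")
    case True
    then have "al = gzero" using chi_trivial_on_idem_support[OF al] by (auto simp: S_def)
    then show ?thesis using True by simp
  next
    case False
    then obtain c1 where c1: "c1 \<in> S" "chi al c1 \<noteq> 1" by auto
    then have "al \<noteq> gzero" by (auto simp: chi_comm[of gzero] chi_zero)
    then show ?thesis using sum_chi_subgroup[OF SG closed c1] by simp
  qed
  have "(\<Sum>al\<in>Gnm. \<Sum>c\<in>S. chi al c) = of_nat (card S)"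
    by (simp add: row sum_Gnm_delta gzero_Gnm cong: sum.cong)
  with by_columns have "card S = N ^ m" by (metis of_nat_eq_iff of_nat_power)
  then have "S = Gnm" using card_subset_eq[OF finite_Gnm SG] card_Gnm by simp
  then show ?thesis using b by (auto simp: S_def)
qed

section \<open>Tensors diagonal in the idempotent basis\<close>

definition diag1 :: "((nat \<Rightarrow> nat) \<Rightarrow> complex) \<Rightarrow> v1" where
  "diag1 h = (\<Sum>b\<in>Gnm. scal (h b) (I b))"
definition diag2 :: "((nat \<Rightarrow> nat) \<Rightarrow> (nat \<Rightarrow> nat) \<Rightarrow> complex) \<Rightarrow> v2" where
  "diag2 h = (\<Sum>b\<in>Gnm. \<Sum>c\<in>Gnm. scal2 (h b c) (tens (I b) (I c)))"
definition diag3 :: "((nat \<Rightarrow> nat) \<Rightarrow> (nat \<Rightarrow> nat) \<Rightarrow> (nat \<Rightarrow> nat) \<Rightarrow> complex) \<Rightarrow> v3" where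
  "diag3 h = (\<Sum>b\<in>Gnm. \<Sum>c\<in>Gnm. \<Sum>d\<in>Gnm. scal3 (h b c d) (tens3 (I b) (I c) (I d)))"
lemma diag1_V1: "diag1 h \<in> V1 dH" by (simp add: diag1_def V1_sum V1_scal idem_V1)
lemma diag2_V2: "diag2 h \<in> V2 dH" by (simp add: diag2_def V2_sum V2_scal2 tens_V2 idem_V1)
lemma diag3_V3: "diag3 h \<in> V3 dH" by (simp add: diag3_def V3_sum V3_scal3 tens3_V3 idem_V1)
lemma diag2_cong: "(\<And>b c. b \<in> Gnm \<Longrightarrow> c \<in> Gnm \<Longrightarrow> f b c = f' b c) \<Longrightarrow> diag2 f = diag2 f'"
  unfolding diag2_def by (intro sum.cong refl) auto

lemma diag1_mul_idem: "b \<in> Gnm \<Longrightarrow> mul H (diag1 h) (I b) = scal (h b) (I b)"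
  unfolding diag1_def mul_sum_l mul_scal_l
  by (subst sum_Gnm_single[of b]) (simp_all add: idem_mul_other idem_mul_self)

lemma diag2_mul_idem: assumes b: "b \<in> Gnm" and c: "c \<in> Gnm"
  shows "mul2 H (diag2 h) (tens (I b) (I c)) = scal2 (h b c) (tens (I b) (I c))"
proof -
  have "mul2 H (diag2 h) (tens (I b) (I c)) =
     (\<Sum>b'\<in>Gnm. \<Sum>c'\<in>Gnm. scal2 (h b' c') (tens (mul H (I b') (I b)) (mul H (I c') (I c))))"
    by (simp add: diag2_def mul2_sum_l mul2_scal2_l mul2_tens)
  also have "\<dots> = (\<Sum>c'\<in>Gnm. scal2 (h b c') (tens (mul H (I b) (I b)) (mul H (I c') (I c))))"
    by (rule sum_Gnm_single[OF b]) (simp add: idem_mul_other b)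
  also have "\<dots> = scal2 (h b c) (tens (mul H (I b) (I b)) (mul H (I c) (I c)))"
    by (rule sum_Gnm_single[OF c]) (simp add: idem_mul_other c)
  finally show ?thesis by (simp add: idem_mul_self b c)
qed

lemma diag3_mul_idem: assumes b: "b \<in> Gnm" and c: "c \<in> Gnm" and d: "d \<in> Gnm"
  shows "mul3 H (diag3 h) (tens3 (I b) (I c) (I d)) = scal3 (h b c d) (tens3 (I b) (I c) (I d))"
proof -
  have "mul3 H (diag3 h) (tens3 (I b) (I c) (I d)) =
     (\<Sum>b'\<in>Gnm. \<Sum>c'\<in>Gnm. \<Sum>d'\<in>Gnm. scal3 (h b' c' d') (tens3 (mul H (I b') (I b)) (mul H (I c') (I c)) (mul H (I d') (I d))))"
    by (simp add: diag3_def mul3_sum_l mul3_scal3_l mul3_tens3)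
  also have "\<dots> = (\<Sum>c'\<in>Gnm. \<Sum>d'\<in>Gnm. scal3 (h b c' d') (tens3 (mul H (I b) (I b)) (mul H (I c') (I c)) (mul H (I d') (I d))))"
    by (rule sum_Gnm_single[OF b]) (simp add: idem_mul_other b)
  also have "\<dots> = (\<Sum>d'\<in>Gnm. scal3 (h b c d') (tens3 (mul H (I b) (I b)) (mul H (I c) (I c)) (mul H (I d') (I d))))"
    by (rule sum_Gnm_single[OF c]) (simp add: idem_mul_other c)
  also have "\<dots> = scal3 (h b c d) (tens3 (mul H (I b) (I b)) (mul H (I c) (I c)) (mul H (I d) (I d)))"
    by (rule sum_Gnm_single[OF d]) (simp add: idem_mul_other d)
  finally show ?thesis by (simp add: idem_mul_self b c d)
qed

lemma diag1_eqI: assumes X: "X \<in> V1 dH" and ev: "\<And>b. b \<in> Gnm \<Longrightarrow> mul H X (I b) = scal (h b) (I b)"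
  shows "X = diag1 h"
proof -
  have "X = mul H X (unt H)" by (simp add: mul_unt_r X)
  also have "\<dots> = diag1 h" by (simp add: idem_sum[symmetric] mul_sum_r ev diag1_def cong: sum.cong)
  finally show ?thesis .
qed

lemma diag2_eqI: assumes X: "X \<in> V2 dH"
  and ev: "\<And>b c. b \<in> Gnm \<Longrightarrow> c \<in> Gnm \<Longrightarrow> mul2 H X (tens (I b) (I c)) = scal2 (h b c) (tens (I b) (I c))"
  shows "X = diag2 h"
proof -
  have "X = mul2 H X (one2 H)" by (simp add: mul2_one_r X)
  also have "\<dots> = diag2 h" by (simp add: one2_idem_expansion mul2_sum_r ev diag2_def cong: sum.cong)
  finally show ?thesis .
qed

lemma diag3_eqI: assumes X: "X \<in> V3 dH"
  and ev: "\<And>b c d. b \<in> Gnm \<Longrightarrow> c \<in> Gnm \<Longrightarrow> d \<in> Gnm \<Longrightarrow>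
      mul3 H X (tens3 (I b) (I c) (I d)) = scal3 (h b c d) (tens3 (I b) (I c) (I d))"
  shows "X = diag3 h"
proof -
  have "X = mul3 H X (one3 H)" by (simp add: mul3_one_r X)
  also have "\<dots> = diag3 h" by (simp add: one3_idem_expansion mul3_sum_r ev diag3_def cong: sum.cong)
  finally show ?thesis .
qed

lemma diag1_mul: "mul H (diag1 h) (diag1 k) = diag1 (\<lambda>b. h b * k b)"
  by (rule diag1_eqI) (simp_all add: mul_V1 mul_assoc diag1_V1 idem_V1 diag1_mul_idem mul_scal_r scal_scal mult.commute)
lemma diag2_mul: "mul2 H (diag2 h) (diag2 k) = diag2 (\<lambda>b c. h b c * k b c)"
  by (rule diag2_eqI) (simp_all add: mul2_V2 mul2_assoc diag2_V2 tens_V2 idem_V1 diag2_mul_idem mul2_scal2_r scal2_scal2 mult.commute)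
lemma diag3_mul: "mul3 H (diag3 h) (diag3 k) = diag3 (\<lambda>b c d. h b c d * k b c d)"
  by (rule diag3_eqI) (simp_all add: mul3_V3 mul3_assoc diag3_V3 tens3_V3 idem_V1 diag3_mul_idem mul3_scal3_r scal3_scal3 mult.commute)
lemma diag1_add: "diag1 h + diag1 k = diag1 (\<lambda>b. h b + k b)" by (simp add: diag1_def sum.distrib[symmetric] scal_add2)
lemma diag1_scal: "scal c (diag1 h) = diag1 (\<lambda>b. c * h b)" by (simp add: diag1_def scal_sum scal_scal)
lemma diag1_zero: "diag1 (\<lambda>_. 0) = 0" by (simp add: diag1_def)
lemma diag2_add: "diag2 h + diag2 k = diag2 (\<lambda>b c. h b c + k b c)"
  by (simp add: diag2_def sum.distrib[symmetric] scal2_add2)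
lemma diag2_zero: "diag2 (\<lambda>_ _. 0) = 0" by (simp add: diag2_def)
lemma unt_diag1: "unt H = diag1 (\<lambda>_. 1)" by (simp add: diag1_def idem_sum)
lemma one2_diag2: "one2 H = diag2 (\<lambda>_ _. 1)" by (simp add: diag2_def one2_idem_expansion)
lemma one3_diag3: "one3 H = diag3 (\<lambda>_ _ _. 1)" by (simp add: diag3_def one3_idem_expansion)
lemma diag2_coeff_eq: "diag2 h = diag2 k \<Longrightarrow> b \<in> Gnm \<Longrightarrow> c \<in> Gnm \<Longrightarrow> h b c = k b c"
  by (metis diag2_mul_idem scal2_cancel tens_nonzero idem_nonzero)
lemma diag3_coeff_eq: "diag3 h = diag3 k \<Longrightarrow> b \<in> Gnm \<Longrightarrow> c \<in> Gnm \<Longrightarrow> d \<in> Gnm \<Longrightarrow> h b c d = k b c d"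
  by (metis diag3_mul_idem scal3_cancel tens3_nonzero idem_nonzero)
lemma gmon_diag1: "gmon H g m al = diag1 (chi al)" by (simp add: gmon_expand diag1_def)
lemma pw_diag1: "i < m \<Longrightarrow> pw H (g i) t = diag1 (\<lambda>b. q ^ (t * b i))"
  by (rule diag1_eqI) (simp_all add: pw_V1 pw_mul_idem)

lemma tens_diag1: "tens (diag1 h) (diag1 k) = diag2 (\<lambda>b c. h b * k c)"
proof -
  have "tens (diag1 h) (diag1 k) = (\<Sum>b\<in>Gnm. tens (scal (h b) (I b)) (diag1 k))" unfolding diag1_def[of h] by (rule tens_sum_l)
  also have "\<dots> = (\<Sum>b\<in>Gnm. \<Sum>c\<in>Gnm. tens (scal (h b) (I b)) (scal (k c) (I c)))"
    unfolding diag1_def by (simp only: tens_sum_r)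
  also have "\<dots> = diag2 (\<lambda>b c. h b * k c)" by (simp add: diag2_def tens_scal_l tens_scal_r scal2_scal2 mult.commute)
  finally show ?thesis .
qed

lemma tens3_diag1: "tens3 (diag1 h) (diag1 k) (diag1 l) = diag3 (\<lambda>b c d. h b * k c * l d)"
proof -
  have "tens3 (diag1 h) (diag1 k) (diag1 l) = (\<Sum>b\<in>Gnm. tens3 (scal (h b) (I b)) (diag1 k) (diag1 l))"
    unfolding diag1_def[of h] by (rule tens3_sum_1)
  also have "\<dots> = (\<Sum>b\<in>Gnm. \<Sum>c\<in>Gnm. tens3 (scal (h b) (I b)) (scal (k c) (I c)) (diag1 l))"
    unfolding diag1_def[of k] by (simp only: tens3_sum_2)
  also have "\<dots> = (\<Sum>b\<in>Gnm. \<Sum>c\<in>Gnm. \<Sum>d\<in>Gnm. tens3 (scal (h b) (I b)) (scal (k c) (I c)) (scal (l d) (I d)))"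
    unfolding diag1_def[of l] by (simp only: tens3_sum_3)
  also have "\<dots> = diag3 (\<lambda>b c d. h b * k c * l d)"
    by (simp add: diag3_def tens3_scal_1 tens3_scal_2 tens3_scal_3 scal3_scal3 mult_ac)
  finally show ?thesis .
qed

lemma lone_diag2: "lone H (diag2 h) = diag3 (\<lambda>b c d. h c d)"
proof (rule diag3_eqI)
  show "lone H (diag2 h) \<in> V3 dH" by (simp add: lone_V3 diag2_V2)
  fix b c d assume b: "b \<in> Gnm" and c: "c \<in> Gnm" and d: "d \<in> Gnm"
  have "mul3 H (lone H (diag2 h)) (tens3 (I b) (I c) (I d)) = mul3 H (ltens (unt H) (diag2 h)) (ltens (I b) (tens (I c) (I d)))"
    by (simp add: lone_eq ltens_tens)
  also have "\<dots> = ltens (mul H (unt H) (I b)) (mul2 H (diag2 h) (tens (I c) (I d)))"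
    by (rule ltens_mul[OF diag2_V2 tens_V2[OF idem_V1 idem_V1]])
  also have "\<dots> = scal3 (h c d) (tens3 (I b) (I c) (I d))"
    by (simp add: idem_V1 mul_unt_l diag2_mul_idem c d ltens_scal2_r ltens_tens)
  finally show "mul3 H (lone H (diag2 h)) (tens3 (I b) (I c) (I d)) = scal3 (h c d) (tens3 (I b) (I c) (I d))" .
qed

lemma rone_diag2: "rone H (diag2 h) = diag3 (\<lambda>b c d. h b c)"
proof (rule diag3_eqI)
  show "rone H (diag2 h) \<in> V3 dH" by (simp add: rone_V3 diag2_V2)
  fix b c d assume b: "b \<in> Gnm" and c: "c \<in> Gnm" and d: "d \<in> Gnm"
  have "mul3 H (rone H (diag2 h)) (tens3 (I b) (I c) (I d)) = mul3 H (rtens (diag2 h) (unt H)) (rtens (tens (I b) (I c)) (I d))"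
    by (simp add: rone_eq rtens_tens)
  also have "\<dots> = rtens (mul2 H (diag2 h) (tens (I b) (I c))) (mul H (unt H) (I d))"
    by (rule rtens_mul[OF diag2_V2 tens_V2[OF idem_V1 idem_V1]])
  also have "\<dots> = scal3 (h b c) (tens3 (I b) (I c) (I d))"
    by (simp add: idem_V1 mul_unt_l diag2_mul_idem b c rtens_scal2_l rtens_tens)
  finally show "mul3 H (rone H (diag2 h)) (tens3 (I b) (I c) (I d)) = scal3 (h b c) (tens3 (I b) (I c) (I d))" .
qed

lemma cop_r_diag2: "cop_r H (diag2 h) = diag3 (\<lambda>b c d. h b (gadd c d))"
proof (rule diag3_eqI)
  show "cop_r H (diag2 h) \<in> V3 dH" by (simp add: cop_r_V3)
  fix b c d assume b: "b \<in> Gnm" and c: "c \<in> Gnm" and d: "d \<in> Gnm"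
  have cd: "gadd c d \<in> Gnm" by (rule gadd_Gnm)
  have "mul3 H (cop_r H (diag2 h)) (tens3 (I b) (I c) (I d)) =
     (\<Sum>b'\<in>Gnm. \<Sum>c'\<in>Gnm. scal3 (h b' c') (ltens (mul H (I b') (I b)) (mul2 H (cop H (I c')) (tens (I c) (I d)))))"
    by (simp add: diag2_def cop_r_sum cop_r_scal2 cop_r_tens idem_V1 mul3_sum_l mul3_scal3_l ltens_mul_tens3 cop_V2)
  also have "\<dots> = (\<Sum>c'\<in>Gnm. scal3 (h b c') (ltens (mul H (I b) (I b)) (mul2 H (cop H (I c')) (tens (I c) (I d)))))"
    by (rule sum_Gnm_single[OF b]) (simp add: idem_mul_other b)
  also have "\<dots> = scal3 (h b (gadd c d)) (ltens (mul H (I b) (I b)) (mul2 H (cop H (I (gadd c d))) (tens (I c) (I d))))"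
    by (rule sum_Gnm_single[OF cd]) (simp add: cop_idem_mul_tens c d)
  also have "\<dots> = scal3 (h b (gadd c d)) (tens3 (I b) (I c) (I d))"
    by (simp add: idem_mul_self b cop_idem_mul_tens c d cd ltens_tens)
  finally show "mul3 H (cop_r H (diag2 h)) (tens3 (I b) (I c) (I d)) = scal3 (h b (gadd c d)) (tens3 (I b) (I c) (I d))" .
qed

lemma cop_l_diag2: "cop_l H (diag2 h) = diag3 (\<lambda>b c d. h (gadd b c) d)"
proof (rule diag3_eqI)
  show "cop_l H (diag2 h) \<in> V3 dH" by (simp add: cop_l_V3)
  fix b c d assume b: "b \<in> Gnm" and c: "c \<in> Gnm" and d: "d \<in> Gnm"
  have bc: "gadd b c \<in> Gnm" by (rule gadd_Gnm)
  have "mul3 H (cop_l H (diag2 h)) (tens3 (I b) (I c) (I d)) =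
     (\<Sum>b'\<in>Gnm. \<Sum>c'\<in>Gnm. scal3 (h b' c') (rtens (mul2 H (cop H (I b')) (tens (I b) (I c))) (mul H (I c') (I d))))"
    by (simp add: diag2_def cop_l_sum cop_l_scal2 cop_l_tens idem_V1 mul3_sum_l mul3_scal3_l rtens_mul_tens3 cop_V2)
  also have "\<dots> = (\<Sum>c'\<in>Gnm. scal3 (h (gadd b c) c') (rtens (mul2 H (cop H (I (gadd b c))) (tens (I b) (I c))) (mul H (I c') (I d))))"
    by (rule sum_Gnm_single[OF bc]) (simp add: cop_idem_mul_tens b c)
  also have "\<dots> = scal3 (h (gadd b c) d) (rtens (mul2 H (cop H (I (gadd b c))) (tens (I b) (I c))) (mul H (I d) (I d)))"
    by (rule sum_Gnm_single[OF d]) (simp add: idem_mul_other d)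
  also have "\<dots> = scal3 (h (gadd b c) d) (tens3 (I b) (I c) (I d))"
    by (simp add: idem_mul_self d cop_idem_mul_tens b c bc rtens_tens)
  finally show "mul3 H (cop_l H (diag2 h)) (tens3 (I b) (I c) (I d)) = scal3 (h (gadd b c) d) (tens3 (I b) (I c) (I d))" .
qed

lemma inv2_diag2:
  assumes nz: "\<And>b c. b \<in> Gnm \<Longrightarrow> c \<in> Gnm \<Longrightarrow> h b c \<noteq> 0"
  shows "inv2 H (diag2 h) = diag2 (\<lambda>b c. inverse (h b c))"
proof -
  let ?Y = "diag2 (\<lambda>b c. inverse (h b c))"
  have p1: "mul2 H (diag2 h) ?Y = one2 H"
  proof -
    have "mul2 H (diag2 h) ?Y = diag2 (\<lambda>b c. h b c * inverse (h b c))" by (rule diag2_mul)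
    also have "\<dots> = diag2 (\<lambda>_ _. 1)" unfolding diag2_def by (intro sum.cong refl) (simp add: nz)
    finally show ?thesis by (simp add: one2_diag2)
  qed
  have v2_plus_eta: "mul2 H ?Y (diag2 h) = one2 H"
  proof -
    have "mul2 H ?Y (diag2 h) = diag2 (\<lambda>b c. inverse (h b c) * h b c)" by (rule diag2_mul)
    also have "\<dots> = diag2 (\<lambda>_ _. 1)" unfolding diag2_def by (intro sum.cong refl) (simp add: nz)
    finally show ?thesis by (simp add: one2_diag2)
  qed
  show ?thesis unfolding inv2_def
  proof (rule the_equality)
    show "(\<forall>i j. dH \<le> i \<or> dH \<le> j \<longrightarrow> ?Y i j = 0) \<and> mul2 H (diag2 h) ?Y = one2 H \<and> mul2 H ?Y (diag2 h) = one2 H"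
      using diag2_V2 p1 v2_plus_eta by (simp add: V2_def)
  next
    fix Y assume Y: "(\<forall>i j. dH \<le> i \<or> dH \<le> j \<longrightarrow> Y i j = 0) \<and> mul2 H (diag2 h) Y = one2 H \<and> mul2 H Y (diag2 h) = one2 H"
    then have YV: "Y \<in> V2 dH" by (simp add: V2_def)
    have "Y = mul2 H Y (mul2 H (diag2 h) ?Y)" using p1 by (simp add: mul2_one_r YV)
    also have "\<dots> = mul2 H (mul2 H Y (diag2 h)) ?Y" by (simp add: mul2_assoc YV diag2_V2)
    also have "\<dots> = ?Y" using Y by (simp add: mul2_one_l diag2_V2)
    finally show "Y = ?Y" .
  qed
qed

section \<open>The twist and its associator\<close>

definition J_coef :: "(nat \<Rightarrow> nat) \<Rightarrow> (nat \<Rightarrow> nat) \<Rightarrow> complex" where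
  "J_coef b c = (\<Prod>i<m. \<Prod>j<m. cpow q n (b i) (c j) (a i j))"
lemma cpow_qpow: "cpow q n z y k = qpow (- (int k * int z * int (nfloor y)))"
  by (simp add: cpow_def qpow_inv_pow nfloor_def of_nat_diff mult.assoc)
lemma J_coef_eq: "J_coef b c = (\<Prod>i<m. \<Prod>j<m. qpow (- (int (a i j) * int (b i) * int (nfloor (c j)))))"
  by (simp add: J_coef_def cpow_qpow)
lemma J_coef_nonzero: "J_coef b c \<noteq> 0" by (simp add: J_coef_eq qpow_nz)
lemma Jel_diag2: "Jel H q n m a g = diag2 J_coef"
  by (simp add: Jel_def diag2_def fun_eq_iff sum_fun_apply scal2_def tens_def J_coef_def mult.assoc)

lemma J_coef_gadd_left: "J_coef (gadd b c) d = J_coef b d * J_coef c d"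
proof -
  have "J_coef (gadd b c) d = (\<Prod>i<m. \<Prod>j<m. qpow (- (int (a i j) * int (b i) * int (nfloor (d j)))) * qpow (- (int (a i j) * int (c i) * int (nfloor (d j)))))"
    unfolding J_coef_eq
  proof (intro prod.cong refl)
    fix i j assume i: "i \<in> {..<m}"
    have "qpow (- (int (a i j) * int (gadd b c i) * int (nfloor (d j)))) = qpow (- (int (a i j) * (int (b i) + int (c i)) * int (nfloor (d j))))"
    proof (rule qpow_cong)
      have "int (gadd b c i) = (int (b i) + int (c i)) mod int N" using i by (simp add: gadd_apply zmod_int)
      then have "int (gadd b c i) mod int N = (int (b i) + int (c i)) mod int N" by simp
      from mod_mult_cong[OF refl this, of "- (int (a i j) * int (nfloor (d j)))"]
      show "- (int (a i j) * int (gadd b c i) * int (nfloor (d j))) mod int N =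
                 - (int (a i j) * (int (b i) + int (c i)) * int (nfloor (d j))) mod int N"
        by (simp add: algebra_simps)
    qed
    then show "qpow (- (int (a i j) * int (gadd b c i) * int (nfloor (d j)))) =
      qpow (- (int (a i j) * int (b i) * int (nfloor (d j)))) * qpow (- (int (a i j) * int (c i) * int (nfloor (d j))))"
      by (simp add: qpow_add[symmetric] algebra_simps)
  qed
  then show ?thesis by (simp add: J_coef_eq prod.distrib)
qed

lemma inv2_J: "inv2 H (diag2 J_coef) = diag2 (\<lambda>b c. inverse (J_coef b c))" by (simp add: inv2_diag2 J_coef_nonzero)
text \<open>The coefficient of \<open>\<Phi>\<close> at \<open>1\<^sub>b \<otimes> 1\<^sub>c \<otimes> 1\<^sub>d\<close> is
  \<open>J(c,d) J(b,c+d) / (J(b+c,d) J(b,c))\<close>, which simplifies to this by \<open>J_coef_gadd_left\<close>.\<close>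

definition Phi_coef :: "(nat \<Rightarrow> nat) \<Rightarrow> (nat \<Rightarrow> nat) \<Rightarrow> (nat \<Rightarrow> nat) \<Rightarrow> complex" where
  "Phi_coef b c d = J_coef b (gadd c d) * inverse (J_coef b c) * inverse (J_coef b d)"

lemma Phi_coef_carry:
  assumes c: "c \<in> Gnm" and d: "d \<in> Gnm"
  shows "Phi_coef b c d = (\<Prod>i<m. \<Prod>j<m. qpow (- (int (a i j) * int (b i) * int (n * carry (c j) (d j)))))"
proof -
  have "Phi_coef b c d = (\<Prod>i<m. \<Prod>j<m. qpow (- (int (a i j) * int (b i) * int (nfloor (gadd c d j))))
      * inverse (qpow (- (int (a i j) * int (b i) * int (nfloor (c j))))) * inverse (qpow (- (int (a i j) * int (b i) * int (nfloor (d j))))))"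
    by (simp add: Phi_coef_def J_coef_eq prod.distrib prod_inv)
  also have "\<dots> = (\<Prod>i<m. \<Prod>j<m. qpow (- (int (a i j) * int (b i) * int (n * carry (c j) (d j)))))"
  proof (intro prod.cong refl)
    fix i j assume j: "j \<in> {..<m}"
    let ?k = "int (a i j) * int (b i)"
    have "qpow (- (?k * int (nfloor (gadd c d j)))) * inverse (qpow (- (?k * int (nfloor (c j))))) * inverse (qpow (- (?k * int (nfloor (d j)))))
        = qpow (- (?k * (int (nfloor ((c j + d j) mod N)) - int (nfloor (c j)) - int (nfloor (d j)))))"
      using j by (simp add: qpow_neg[symmetric] qpow_add[symmetric] gadd_apply algebra_simps)
    also have "\<dots> = qpow (- (?k * int (n * carry (c j) (d j))))"
      by (rule qpow_cong) (use mod_mult_cong[OF refl nfloor_carry, of "- ?k" "c j" "d j"] in simp)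
    finally show "qpow (- (?k * int (nfloor (gadd c d j)))) * inverse (qpow (- (?k * int (nfloor (c j))))) * inverse (qpow (- (?k * int (nfloor (d j)))))
        = qpow (- (?k * int (n * carry (c j) (d j))))" .
  qed
  finally show ?thesis .
qed

lemma Phi_coef_periodic: "periodic3 Phi_coef"
  unfolding periodic3_def
proof (intro ballI)
  fix b c d assume b: "b \<in> Gnm" and c: "c \<in> Gnm" and d: "d \<in> Gnm"
  show "Phi_coef (gred b) (gred c) (gred d) = Phi_coef b c d"
    unfolding Phi_coef_carry[OF gred_Gnm gred_Gnm] Phi_coef_carry[OF c d]
  proof (intro prod.cong refl)
    fix i j assume i: "i \<in> {..<m}" and j: "j \<in> {..<m}"
    have "qpow (- (int (a i j) * int (b i mod n) * int (n * carry (c j) (d j)))) =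
          qpow (int n * (- (int (a i j) * int (carry (c j) (d j))) * int (b i mod n)))"
      by (simp add: algebra_simps)
    also have "\<dots> = qpow (int n * (- (int (a i j) * int (carry (c j) (d j))) * int (b i)))"
    proof -
      have "int (b i mod n) mod int n = int (b i) mod int n" by (simp add: zmod_int)
      from mod_mult_cong[OF refl this, of "- (int (a i j) * int (carry (c j) (d j)))"]
      have "(- (int (a i j) * int (carry (c j) (d j))) * int (b i mod n)) mod int n =
            (- (int (a i j) * int (carry (c j) (d j))) * int (b i)) mod int n" .
      then show ?thesis by (metis qpow_n_mod mult.assoc)
    qed
    finally show "qpow (- (int (a i j) * int (gred b i) * int (n * carry (gred c j) (gred d j)))) =
          qpow (- (int (a i j) * int (b i) * int (n * carry (c j) (d j))))"
      using i j by (simp add: gred_apply carry_red algebra_simps)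
  qed
qed

lemma PhiJ_diag3: "PhiJ H (diag2 J_coef) = diag3 Phi_coef"
proof -
  have "PhiJ H (diag2 J_coef) = diag3 (\<lambda>b c d. J_coef c d * J_coef b (gadd c d) * inverse (J_coef (gadd b c) d) * inverse (J_coef b c))"
    by (simp add: PhiJ_def inv2_J lone_diag2 rone_diag2 cop_r_diag2 cop_l_diag2 diag3_mul)
  also have "\<dots> = diag3 Phi_coef"
    unfolding diag3_def
    by (intro sum.cong refl) (simp add: Phi_coef_def J_coef_gadd_left J_coef_nonzero field_simps)
  finally show ?thesis .
qed

lemma Phi_coef_path:
  assumes i: "i < m" and k: "k < n"
  shows "Phi_coef (gbasis 1 i) (gbasis k i) (gbasis 1 i) = (if k = n - 1 then qpow (- (int (a i i) * int n)) else 1)"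
proof -
  have kN: "k < N" "1 < N" using k n_lt_N N_gt1 by auto
  have "Phi_coef (gbasis 1 i) (gbasis k i) (gbasis 1 i) = (\<Prod>i'<m. \<Prod>j<m. qpow (- (int (a i' j) * int (gbasis 1 i i') * int (n * carry (gbasis k i j) (gbasis 1 i j)))))"
    by (rule Phi_coef_carry) (simp_all add: gbasis_Gnm kN gbasis1_Gnm)
  also have "\<dots> = (\<Prod>j<m. qpow (- (int (a i j) * int (n * carry (gbasis k i j) (gbasis 1 i j)))))"
    by (subst prod_single[of _ i]) (simp_all add: i gbasis_apply qpow_def)
  also have "\<dots> = qpow (- (int (a i i) * int (n * carry k 1)))"
    by (subst prod_single[of _ i]) (simp_all add: i gbasis_apply carry_def qpow_def)
  also have "\<dots> = (if k = n - 1 then qpow (- (int (a i i) * int n)) else 1)"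
  proof -
    have "n \<le> k mod n + 1 mod n \<longleftrightarrow> k = n - 1" using k n2 by auto
    then show ?thesis by (simp add: carry_def)
  qed
  finally show ?thesis .
qed

lemma qpow_a_diag_ne_1: assumes "a i i mod n \<noteq> 0" shows "qpow (- (int (a i i) * int n)) \<noteq> 1"
proof
  assume "qpow (- (int (a i i) * int n)) = 1"
  then have "int N dvd (- (int (a i i) * int n))" by (simp add: qpow_eq_1)
  then have "int n * int n dvd int (a i i) * int n" by (simp add: N_def power2_eq_square)
  then have "int n dvd int (a i i)" using n_pos by (metis dvd_mult_cancel_right mult_cancel_right of_nat_0_less_iff less_irrefl)
  then show False using assms by (simp add: dvd_eq_mod_eq_0[symmetric] of_nat_dvd_iff)
qed

lemma PhiJ_nontrivial:
  assumes i: "i < m" and ai: "a i i mod n \<noteq> 0"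
  shows "PhiJ H (Jel H q n m a g) \<noteq> one3 H"
proof
  assume "PhiJ H (Jel H q n m a g) = one3 H"
  then have "diag3 Phi_coef = diag3 (\<lambda>_ _ _. 1)" by (simp add: Jel_diag2 PhiJ_diag3 one3_diag3)
  moreover have "gbasis 1 i \<in> Gnm" "gbasis (n - 1) i \<in> Gnm" using N_gt1 n_lt_N by (simp_all add: gbasis_Gnm)
  ultimately have "Phi_coef (gbasis 1 i) (gbasis (n - 1) i) (gbasis 1 i) = 1" by (metis diag3_coeff_eq)
  moreover have "n - 1 < n" using n_pos by simp
  ultimately show False using Phi_coef_path[OF i, of "n - 1"] qpow_a_diag_ne_1[OF ai] by simp
qed

definition PhiF :: "v2 \<Rightarrow> v2 \<Rightarrow> v3" where
  "PhiF F G = mul3 H (mul3 H (mul3 H (mul3 H (lone H F) (copJ_r H (Jel H q n m a g) F))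
      (PhiJ H (Jel H q n m a g))) (copJ_l H (Jel H q n m a g) G)) (rone H G)"

lemma Phi_coef_path_prod:
  assumes i: "i < m"
  shows "(\<Prod>k<n. Phi_coef (gbasis 1 i) (gbasis k i) (gbasis 1 i)) = qpow (- (int (a i i) * int n))"
proof -
  have "(\<Prod>k<n. Phi_coef (gbasis 1 i) (gbasis k i) (gbasis 1 i))
      = (\<Prod>k<n. if k = n - 1 then qpow (- (int (a i i) * int n)) else 1)"
    by (intro prod.cong refl) (use Phi_coef_path[OF i] in auto)
  also have "\<dots> = qpow (- (int (a i i) * int n))" using n_pos by simp
  finally show ?thesis .
qed

lemma PhiF_diag2:
  "PhiF (diag2 f) (diag2 f') =
     diag3 (\<lambda>b c d. f c d * f b (gadd c d) * Phi_coef b c d * f' (gadd b c) d * f' b c)"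
proof -
  have cancel: "J_coef b c * x * inverse (J_coef b c) = x" for b c x
    using J_coef_nonzero[of b c] by (simp add: divide_inverse[symmetric])
  have "PhiF (diag2 f) (diag2 f') = diag3 (\<lambda>b c d. f c d * (J_coef c d * f b (gadd c d) * inverse (J_coef c d))
      * Phi_coef b c d * (J_coef b c * f' (gadd b c) d * inverse (J_coef b c)) * f' b c)"
    by (simp add: PhiF_def Jel_diag2 PhiJ_diag3 copJ_r_def copJ_l_def inv2_J lone_diag2 rone_diag2
        cop_r_diag2 cop_l_diag2 diag3_mul)
  then show ?thesis by (simp only: cancel)
qed

lemma PhiF_trivial_cocycle:
  assumes inv: "\<And>b c. b \<in> Gnm \<Longrightarrow> c \<in> Gnm \<Longrightarrow> f b c * f' b c = 1"
    and triv: "PhiF (diag2 f) (diag2 f') = one3 H"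
    and b: "b \<in> Gnm" and c: "c \<in> Gnm" and d: "d \<in> Gnm"
  shows "f c d * f b (gadd c d) * Phi_coef b c d = f (gadd b c) d * f b c"
proof -
  have "f c d * f b (gadd c d) * Phi_coef b c d * f' (gadd b c) d * f' b c = 1"
    using diag3_coeff_eq[OF triv[unfolded PhiF_diag2 one3_diag3] b c d] by simp
  moreover have "f' (gadd b c) d = inverse (f (gadd b c) d)" "f' b c = inverse (f b c)"
    using inverse_unique[OF inv[OF gadd_Gnm[of b c] d]] inverse_unique[OF inv[OF b c]] by simp_all
  moreover have "f (gadd b c) d \<noteq> 0" "f b c \<noteq> 0"
    using inv[OF gadd_Gnm[of b c] d] inv[OF b c] by auto
  ultimately show ?thesis by (simp add: field_simps)
qed

lemma no_periodic_trivialization: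
  assumes i: "i < m" and ai: "a i i mod n \<noteq> 0" and per: "periodic2 f"
    and nz: "\<And>b c. b \<in> Gnm \<Longrightarrow> c \<in> Gnm \<Longrightarrow> f b c \<noteq> 0"
    and cocycle: "\<And>b c d. b \<in> Gnm \<Longrightarrow> c \<in> Gnm \<Longrightarrow> d \<in> Gnm \<Longrightarrow>
       f c d * f b (gadd c d) * Phi_coef b c d = f (gadd b c) d * f b c"
  shows False
proof -
  let ?e = "gbasis 1 i"
  define w where "w k = f ?e (gbasis k i) / f (gbasis k i) ?e" for k
  have G: "gbasis k i \<in> Gnm" if "k \<le> n" for k using that n_lt_N by (simp add: gbasis_Gnm)
  have e: "?e \<in> Gnm" using G[of 1] n2 by simp
  have step: "w (Suc k) * Phi_coef ?e (gbasis k i) ?e = w k" if k: "k < n" for k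
  proof -
    have Gk: "gbasis k i \<in> Gnm" "gbasis (Suc k) i \<in> Gnm" using G k by simp_all
    have "gadd (gbasis k i) ?e = gbasis (Suc k) i" "gadd ?e (gbasis k i) = gbasis (Suc k) i"
      using gadd_gbasis[of k 1 i] gadd_gbasis[of 1 k i] k n_lt_N by simp_all
    then have "f (gbasis k i) ?e * f ?e (gbasis (Suc k) i) * Phi_coef ?e (gbasis k i) ?e
        = f (gbasis (Suc k) i) ?e * f ?e (gbasis k i)"
      using cocycle[OF e Gk(1) e] by simp
    then show ?thesis using nz[OF Gk(1) e] nz[OF Gk(2) e] by (simp add: w_def field_simps)
  qed
  have "w n = w 0" using periodic2_gbasis_n[OF per e] by (simp add: w_def)
  moreover have "w 0 \<noteq> 0" using nz[OF e G[of 0]] nz[OF G[of 0] e] by (simp add: w_def)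
  moreover have "w n * qpow (- (int (a i i) * int n)) = w 0"
    using prod_telescope[of n w, OF step] Phi_coef_path_prod[OF i] by simp
  ultimately show False using qpow_a_diag_ne_1[OF ai] by simp
qed

section \<open>The subalgebra A and its tensor powers\<close>

abbreviation "Asub \<equiv> alg_gen H ({pw H (g i) n | i. i < m} \<union> {e i | i. i < m})"

lemma Asub_gens_V1: "{pw H (g i) n | i. i < m} \<union> {e i | i. i < m} \<subseteq> V1 dH"
  using pw_V1 e_V1 by auto
lemma Asub_V1: "x \<in> Asub \<Longrightarrow> x \<in> V1 dH" using alg_gen_V1[OF Asub_gens_V1] by blast
lemma unt_Asub: "unt H \<in> Asub" by (rule alg_gen.unit)
lemma e_Asub: "i < m \<Longrightarrow> e i \<in> Asub" by (auto intro: alg_gen.gen)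
lemma pw_n_Asub: "i < m \<Longrightarrow> pw H (g i) n \<in> Asub" by (auto intro: alg_gen.gen)
lemma mul_Asub: "x \<in> Asub \<Longrightarrow> y \<in> Asub \<Longrightarrow> mul H x y \<in> Asub" by (rule alg_gen.mult)

lemma span2_scal2: "X \<in> span2 Asub \<Longrightarrow> scal2 c X \<in> span2 Asub"
proof (induction rule: span2.induct)
  case zero then show ?case by (simp only: scal2_zero) (rule span2.zero)
next
  case (tens x y) then show ?case by (simp only: tens_scal_l[symmetric]) (rule span2.tens[OF alg_gen.smul])
next
  case (add X Y) then show ?case by (simp only: scal2_add) (rule span2.add)
qed

lemma span3_scal3: "X \<in> span3 Asub \<Longrightarrow> scal3 c X \<in> span3 Asub"
proof (induction rule: span3.induct)
  case zero then show ?case by (simp only: scal3_zero) (rule span3.zero)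
next
  case (tens x y z) then show ?case by (simp only: tens3_scal_1[symmetric]) (rule span3.tens[OF alg_gen.smul])
next
  case (add X Y) then show ?case by (simp only: scal3_add) (rule span3.add)
qed

lemma span2_V2: "X \<in> span2 Asub \<Longrightarrow> X \<in> V2 dH"
proof (induction rule: span2.induct)
  case zero then show ?case by (rule V2_zero)
next
  case (tens x y) then show ?case by (simp add: tens_V2 Asub_V1)
next
  case (add X Y) show ?case by (rule V2_add[OF add.IH])
qed

lemma span3_V3: "X \<in> span3 Asub \<Longrightarrow> X \<in> V3 dH"
proof (induction rule: span3.induct)
  case zero then show ?case by (rule V3_zero)
next
  case (tens x y z) then show ?case by (simp add: tens3_V3 Asub_V1)
next
  case (add X Y) show ?case by (rule V3_add[OF add.IH])
qed

lemma span2_mul: assumes X: "X \<in> span2 Asub" and Y: "Y \<in> span2 Asub" shows "mul2 H X Y \<in> span2 Asub"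
  using X
proof (induction rule: span2.induct)
  case zero then show ?case by (simp only: mul2_zero) (rule span2.zero)
next
  case (tens x y)
  have o: "x \<in> Asub" "y \<in> Asub" using tens by auto
  show ?case using Y
  proof (induction rule: span2.induct)
    case zero then show ?case by (simp only: mul2_zero) (rule span2.zero)
  next
    case (tens x' y') then show ?case using o by (simp only: mul2_tens) (rule span2.tens; rule mul_Asub)
  next
    case (add X' Y') then show ?case by (simp only: mul2_add_r) (rule span2.add)
  qed
next
  case (add X1 X2) then show ?case by (simp only: mul2_add_l) (rule span2.add)
qed

lemma span3_mul: assumes X: "X \<in> span3 Asub" and Y: "Y \<in> span3 Asub" shows "mul3 H X Y \<in> span3 Asub"
  using X
proof (induction rule: span3.induct)
  case zero then show ?case by (simp only: mul3_zero) (rule span3.zero)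
next
  case (tens x y z)
  have o: "x \<in> Asub" "y \<in> Asub" "z \<in> Asub" using tens by auto
  show ?case using Y
  proof (induction rule: span3.induct)
    case zero then show ?case by (simp only: mul3_zero) (rule span3.zero)
  next
    case (tens x' y' z') then show ?case using o by (simp only: mul3_tens3) (rule span3.tens; rule mul_Asub)
  next
    case (add X' Y') then show ?case by (simp only: mul3_add_r) (rule span3.add)
  qed
next
  case (add X1 X2) then show ?case by (simp only: mul3_add_l) (rule span3.add)
qed

lemma idem_coeff_vanish:
  assumes h: "periodic1 h" and al: "al \<in> Gnm" and j: "j < m" and nd: "\<not> n dvd al j"
  shows "(\<Sum>b\<in>Gnm. h b * inverse (chi b al)) = 0"
proof -
  let ?s = "gbasis n j"
  have s: "?s \<in> Gnm" using n_lt_N by (simp add: gbasis_Gnm)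
  have hp: "\<And>b. b \<in> Gnm \<Longrightarrow> h (gred b) = h b" using h by (simp add: periodic1_def)
  let ?c = "(\<Sum>b\<in>Gnm. h b * inverse (chi b al))"
  have "?c = (\<Sum>b\<in>Gnm. h (gadd b ?s) * inverse (chi (gadd b ?s) al))"
    by (rule sum_gadd_shift[OF s, symmetric])
  also have "\<dots> = (\<Sum>b\<in>Gnm. h b * inverse (chi b al) * inverse (chi ?s al))"
  proof (rule sum.cong[OF refl])
    fix b assume b: "b \<in> Gnm"
    have "h (gadd b ?s) = h (gred (gadd b ?s))" using hp[OF gadd_Gnm] by simp
    also have "\<dots> = h (gred b)" by (simp only: gred_gadd_gbasis_n[OF j])
    also have "\<dots> = h b" by (rule hp[OF b])
    finally show "h (gadd b ?s) * inverse (chi (gadd b ?s) al) = h b * inverse (chi b al) * inverse (chi ?s al)"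
      by (simp add: chi_gadd_left)
  qed
  also have "\<dots> = ?c * inverse (chi ?s al)" by (simp add: sum_distrib_right)
  finally have e: "?c * (1 - inverse (chi ?s al)) = 0" by (simp add: algebra_simps)
  have "chi ?s al \<noteq> 1"
  proof
    assume "chi ?s al = 1"
    then have "int N dvd int n * int (al j)" by (simp add: chi_gbasis_n j qpow_eq_1)
    then have "int n * int n dvd int n * int (al j)" by (simp add: N_def power2_eq_square)
    then have "int n dvd int (al j)" using n_pos by (subst (asm) dvd_times_left_cancel_iff) auto
    then show False using nd by (simp add: of_nat_dvd_iff)
  qed
  then have "1 - inverse (chi ?s al) \<noteq> 0" using chi_nz[of ?s al] by (simp add: field_simps)
  then show ?thesis using e by simp
qed

lemma gmon_Asub: assumes d: "\<And>j. j < m \<Longrightarrow> n dvd al j" shows "gmon H g m al \<in> Asub"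
  unfolding gmon_def
proof (rule alg_gen_mprod)
  fix i assume i: "i < m"
  then obtain t where t: "al i = n * t" using d by (auto elim: dvdE)
  show "pw H (g i) (al i) \<in> Asub" by (simp add: t pw_mult g_V1 i alg_gen_pw pw_n_Asub)
qed

lemma diag1_Asub: assumes h: "periodic1 h" shows "diag1 h \<in> Asub"
proof -
  have "diag1 h = (\<Sum>b\<in>Gnm. \<Sum>al\<in>Gnm. scal (cN * (h b * inverse (chi b al))) (gmon H g m al))"
    by (simp add: diag1_def idem_eq scal_sum scal_scal mult_ac)
  also have "\<dots> = (\<Sum>al\<in>Gnm. scal (cN * (\<Sum>b\<in>Gnm. h b * inverse (chi b al))) (gmon H g m al))"
    by (subst sum.swap) (simp add: sum_scal_same sum_distrib_left)
  finally have e: "diag1 h = \<dots>" .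
  show ?thesis unfolding e
  proof (rule alg_gen_sum)
    fix al assume al: "al \<in> Gnm"
    show "scal (cN * (\<Sum>b\<in>Gnm. h b * inverse (chi b al))) (gmon H g m al) \<in> Asub"
    proof (cases "\<forall>j<m. n dvd al j")
      case True then show ?thesis by (intro alg_gen.smul gmon_Asub) auto
    next
      case False
      then obtain j where "j < m" "\<not> n dvd al j" by auto
      then show ?thesis using idem_coeff_vanish[OF h al] by (simp add: alg_gen_zero)
    qed
  qed
qed

definition residue_ind :: "(nat \<Rightarrow> nat) \<Rightarrow> (nat \<Rightarrow> nat) \<Rightarrow> complex" where
  "residue_ind t b = (if gred b = t then 1 else 0)"
lemma periodic1_residue_ind: "periodic1 (residue_ind t)" by (simp add: periodic1_def residue_ind_def gred_gred)

lemma diag2_span2: assumes h: "periodic2 h" shows "diag2 h \<in> span2 Asub"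
proof -
  let ?X = "\<Sum>t\<in>Gnm. \<Sum>t'\<in>Gnm. scal2 (h t t') (tens (diag1 (residue_ind t)) (diag1 (residue_ind t')))"
  have X: "?X \<in> span2 Asub"
    by (intro span2_sum span2_scal2 span2.tens diag1_Asub periodic1_residue_ind)
  have "?X = diag2 h"
  proof (rule diag2_eqI)
    show "?X \<in> V2 dH" using X by (rule span2_V2)
    fix b c assume b: "b \<in> Gnm" and c: "c \<in> Gnm"
    have "mul2 H ?X (tens (I b) (I c)) = (\<Sum>t\<in>Gnm. \<Sum>t'\<in>Gnm. scal2 (h t t' * (residue_ind t b * residue_ind t' c)) (tens (I b) (I c)))"
      by (simp add: mul2_sum_l mul2_scal2_l tens_diag1 diag2_mul_idem b c scal2_scal2)
    also have "\<dots> = (\<Sum>t'\<in>Gnm. scal2 (h (gred b) t' * (residue_ind (gred b) b * residue_ind t' c)) (tens (I b) (I c)))"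
      by (rule sum_Gnm_single[OF gred_Gnm]) (simp add: residue_ind_def)
    also have "\<dots> = scal2 (h (gred b) (gred c) * (residue_ind (gred b) b * residue_ind (gred c) c)) (tens (I b) (I c))"
      by (rule sum_Gnm_single[OF gred_Gnm]) (simp add: residue_ind_def)
    also have "\<dots> = scal2 (h b c) (tens (I b) (I c))" using h b c by (simp add: residue_ind_def periodic2_def)
    finally show "mul2 H ?X (tens (I b) (I c)) = scal2 (h b c) (tens (I b) (I c))" .
  qed
  then show ?thesis using X by simp
qed

lemma diag3_span3: assumes h: "periodic3 h" shows "diag3 h \<in> span3 Asub"
proof -
  let ?X = "\<Sum>t\<in>Gnm. \<Sum>t'\<in>Gnm. \<Sum>t''\<in>Gnm. scal3 (h t t' t'') (tens3 (diag1 (residue_ind t)) (diag1 (residue_ind t')) (diag1 (residue_ind t'')))"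
  have X: "?X \<in> span3 Asub"
    by (intro span3_sum span3_scal3 span3.tens diag1_Asub periodic1_residue_ind)
  have "?X = diag3 h"
  proof (rule diag3_eqI)
    show "?X \<in> V3 dH" using X by (rule span3_V3)
    fix b c d assume b: "b \<in> Gnm" and c: "c \<in> Gnm" and d: "d \<in> Gnm"
    have "mul3 H ?X (tens3 (I b) (I c) (I d)) = (\<Sum>t\<in>Gnm. \<Sum>t'\<in>Gnm. \<Sum>t''\<in>Gnm.
        scal3 (h t t' t'' * (residue_ind t b * residue_ind t' c * residue_ind t'' d)) (tens3 (I b) (I c) (I d)))"
      by (simp add: mul3_sum_l mul3_scal3_l tens3_diag1 diag3_mul_idem b c d scal3_scal3)
    also have "\<dots> = (\<Sum>t'\<in>Gnm. \<Sum>t''\<in>Gnm.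
        scal3 (h (gred b) t' t'' * (residue_ind (gred b) b * residue_ind t' c * residue_ind t'' d)) (tens3 (I b) (I c) (I d)))"
      by (rule sum_Gnm_single[OF gred_Gnm]) (simp add: residue_ind_def)
    also have "\<dots> = (\<Sum>t''\<in>Gnm.
        scal3 (h (gred b) (gred c) t'' * (residue_ind (gred b) b * residue_ind (gred c) c * residue_ind t'' d)) (tens3 (I b) (I c) (I d)))"
      by (rule sum_Gnm_single[OF gred_Gnm]) (simp add: residue_ind_def)
    also have "\<dots> = scal3 (h (gred b) (gred c) (gred d) * (residue_ind (gred b) b * residue_ind (gred c) c * residue_ind (gred d) d)) (tens3 (I b) (I c) (I d))"
      by (rule sum_Gnm_single[OF gred_Gnm]) (simp add: residue_ind_def)
    also have "\<dots> = scal3 (h b c d) (tens3 (I b) (I c) (I d))" using h b c d by (simp add: residue_ind_def periodic3_def)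
    finally show "mul3 H ?X (tens3 (I b) (I c) (I d)) = scal3 (h b c d) (tens3 (I b) (I c) (I d))" .
  qed
  then show ?thesis using X by simp
qed

definition conjJ :: "v2 \<Rightarrow> v2" where
  "conjJ X = mul2 H (mul2 H (diag2 J_coef) X) (diag2 (\<lambda>b c. inverse (J_coef b c)))"
lemma conjJ_add: "conjJ (X + Y) = conjJ X + conjJ Y" by (simp add: conjJ_def mul2_add_r mul2_add_l)
lemma conjJ_scal2: "conjJ (scal2 c X) = scal2 c (conjJ X)" by (simp add: conjJ_def mul2_scal2_r mul2_scal2_l)

lemma conjJ_diag2: "conjJ (diag2 h) = diag2 h"
proof -
  have "conjJ (diag2 h) = diag2 (\<lambda>b c. J_coef b c * h b c * inverse (J_coef b c))" by (simp add: conjJ_def diag2_mul)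
  also have "\<dots> = diag2 h" by (rule diag2_cong) (simp add: J_coef_nonzero)
  finally show ?thesis .
qed

lemma inv_J_mul_J: "mul2 H (diag2 (\<lambda>b c. inverse (J_coef b c))) (diag2 J_coef) = one2 H"
proof -
  have "mul2 H (diag2 (\<lambda>b c. inverse (J_coef b c))) (diag2 J_coef) = diag2 (\<lambda>b c. inverse (J_coef b c) * J_coef b c)" by (rule diag2_mul)
  also have "\<dots> = diag2 (\<lambda>_ _. 1)" by (rule diag2_cong) (simp add: J_coef_nonzero)
  finally show ?thesis by (simp add: one2_diag2)
qed

lemma conjJ_mul: assumes X: "X \<in> V2 dH" and Y: "Y \<in> V2 dH" shows "conjJ (mul2 H X Y) = mul2 H (conjJ X) (conjJ Y)"
proof -
  let ?J = "diag2 J_coef" and ?J' = "diag2 (\<lambda>b c. inverse (J_coef b c))"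
  have V: "?J \<in> V2 dH" "?J' \<in> V2 dH" by (simp_all add: diag2_V2)
  have "mul2 H (conjJ X) (conjJ Y) = mul2 H ?J (mul2 H X (mul2 H (mul2 H ?J' ?J) (mul2 H Y ?J')))"
    by (simp add: conjJ_def mul2_assoc V X Y mul2_V2)
  also have "\<dots> = mul2 H ?J (mul2 H X (mul2 H Y ?J'))" by (simp add: inv_J_mul_J mul2_one_l mul2_V2)
  also have "\<dots> = conjJ (mul2 H X Y)" by (simp add: conjJ_def mul2_assoc V X Y mul2_V2)
  finally show ?thesis by simp
qed

lemma pw_mul_e:
  assumes j: "j < m" and i: "i < m"
  shows "mul H (pw H (g j) t) (e i) = scal ((if j = i then q else 1) ^ t) (mul H (e i) (pw H (g j) t))"
proof (induction t)
  case 0 then show ?case by (simp add: mul_unt_l mul_unt_r e_V1 i)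
next
  case (Suc t)
  have "mul H (pw H (g j) (Suc t)) (e i) = mul H (g j) (mul H (pw H (g j) t) (e i))"
    by (simp add: pw_Suc mul_assoc g_V1 j pw_V1 e_V1 i)
  also have "\<dots> = scal ((if j = i then q else 1) ^ t) (mul H (mul H (g j) (e i)) (pw H (g j) t))"
    using Suc by (simp add: mul_scal_r mul_assoc g_V1 j pw_V1 e_V1 i)
  also have "\<dots> = scal ((if j = i then q else 1) ^ Suc t) (mul H (e i) (pw H (g j) (Suc t)))"
    using g_e j i by (simp add: mul_scal_l scal_scal pw_Suc mul_assoc g_V1 pw_V1 e_V1 mult.commute)
  finally show ?case .
qed

lemma gmon_mul_e:
  assumes i: "i < m"
  shows "mul H (gmon H g m al) (e i) = scal (q ^ al i) (mul H (e i) (gmon H g m al))"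
proof -
  have "k \<le> m \<Longrightarrow> mul H (mprod H (\<lambda>j. pw H (g j) (al j)) k) (e i) =
     scal (\<Prod>j<k. (if j = i then q else 1) ^ al j) (mul H (e i) (mprod H (\<lambda>j. pw H (g j) (al j)) k))" for k
  proof (induction k)
    case 0 then show ?case by (simp add: mul_unt_l mul_unt_r e_V1 i)
  next
    case (Suc k)
    let ?pr = "mprod H (\<lambda>j. pw H (g j) (al j)) k"
    have "mul H (mprod H (\<lambda>j. pw H (g j) (al j)) (Suc k)) (e i) = mul H ?pr (mul H (pw H (g k) (al k)) (e i))"
      by (simp add: mul_assoc mprod_V1 pw_V1 e_V1 i)
    also have "\<dots> = scal ((if k = i then q else 1) ^ al k) (mul H (mul H ?pr (e i)) (pw H (g k) (al k)))"
      using Suc.prems by (simp add: pw_mul_e i mul_scal_r mul_assoc mprod_V1 pw_V1 e_V1)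
    also have "\<dots> = scal (\<Prod>j<Suc k. (if j = i then q else 1) ^ al j) (mul H (e i) (mprod H (\<lambda>j. pw H (g j) (al j)) (Suc k)))"
      using Suc by (simp add: mul_scal_l scal_scal mul_assoc mprod_V1 pw_V1 e_V1 i mult.commute)
    finally show ?case .
  qed
  moreover have "(\<Prod>j<m. (if j = i then q else 1) ^ al j) = q ^ al i"
    by (subst prod_single[of _ i]) (simp_all add: i)
  ultimately show ?thesis by (simp add: gmon_def)
qed

lemma idem_mul_e:
  assumes i: "i < m" and b: "b \<in> Gnm"
  shows "mul H (I b) (e i) = mul H (e i) (I (gadd b (gneg (gbasis (Suc 0) i))))"
proof -
  let ?b' = "gadd b (gneg (gbasis (Suc 0) i))"
  have ch: "inverse (chi b al) * q ^ al i = inverse (chi ?b' al)" for al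
  proof -
    have "chi b al = chi (gadd ?b' (gbasis (Suc 0) i)) al" using b gbasis1_Gnm by (simp add: gadd_gneg_cancel2)
    also have "\<dots> = chi ?b' al * q ^ al i" by (simp add: chi_gadd_left chi_comm[of "gbasis (Suc 0) i"] chi_gbasis1[OF i, simplified, symmetric])
    finally show ?thesis using q_nz by (simp add: field_simps)
  qed
  have "mul H (I b) (e i) = scal cN (\<Sum>al\<in>Gnm. scal (inverse (chi b al) * q ^ al i) (mul H (e i) (gmon H g m al)))"
    by (simp add: idem_eq[of b] mul_scal_l mul_sum_l gmon_mul_e i scal_scal)
  also have "\<dots> = mul H (e i) (I ?b')"
    by (simp add: ch idem_eq[of ?b'] mul_scal_r mul_sum_r)
  finally show ?thesis .
qed

lemma diag2_mul_e_left:
  assumes i: "i < m"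
  shows "mul2 H (diag2 h) (tens (e i) (unt H)) = mul2 H (tens (e i) (unt H)) (diag2 (\<lambda>b c. h (gadd b (gbasis (Suc 0) i)) c))"
proof -
  let ?eps = "gbasis (Suc 0) i"
  define F where "F b = (\<Sum>c\<in>Gnm. scal2 (h b c) (tens (mul H (e i) (I (gadd b (gneg ?eps)))) (I c)))" for b
  have "mul2 H (diag2 h) (tens (e i) (unt H)) = (\<Sum>b\<in>Gnm. F b)"
    unfolding diag2_def F_def mul2_sum_l
    by (intro sum.cong refl) (simp add: mul2_sum_l mul2_scal2_l mul2_tens idem_mul_e i mul_unt_r idem_V1)
  also have "\<dots> = (\<Sum>b\<in>Gnm. F (gadd b ?eps))" by (rule sum_gadd_shift[OF gbasis1_Gnm(2), symmetric])
  also have "\<dots> = mul2 H (tens (e i) (unt H)) (diag2 (\<lambda>b c. h (gadd b ?eps) c))"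
    unfolding diag2_def F_def mul2_sum_r
    by (intro sum.cong refl) (simp add: mul2_sum_r mul2_scal2_r mul2_tens gadd_gneg_cancel gbasis1_Gnm mul_unt_l idem_V1)
  finally show ?thesis .
qed

lemma diag2_mul_e_right:
  assumes i: "i < m"
  shows "mul2 H (diag2 h) (tens (unt H) (e i)) = mul2 H (tens (unt H) (e i)) (diag2 (\<lambda>b c. h b (gadd c (gbasis (Suc 0) i))))"
proof -
  let ?eps = "gbasis (Suc 0) i"
  define F where "F b c = scal2 (h b c) (tens (I b) (mul H (e i) (I (gadd c (gneg ?eps)))))" for b c
  have "mul2 H (diag2 h) (tens (unt H) (e i)) = (\<Sum>b\<in>Gnm. \<Sum>c\<in>Gnm. F b c)"
    unfolding diag2_def F_def mul2_sum_l
    by (intro sum.cong refl) (simp add: mul2_scal2_l mul2_tens idem_mul_e i mul_unt_r idem_V1)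
  also have "\<dots> = (\<Sum>b\<in>Gnm. \<Sum>c\<in>Gnm. F b (gadd c ?eps))"
    by (rule sum.cong[OF refl], rule sum_gadd_shift[OF gbasis1_Gnm(2), symmetric])
  also have "\<dots> = mul2 H (tens (unt H) (e i)) (diag2 (\<lambda>b c. h b (gadd c ?eps)))"
    unfolding diag2_def F_def mul2_sum_r
    by (intro sum.cong refl) (simp add: mul2_sum_r mul2_scal2_r mul2_tens gadd_gneg_cancel gbasis1_Gnm mul_unt_l idem_V1)
  finally show ?thesis .
qed

definition eL_coef :: "nat \<Rightarrow> (nat \<Rightarrow> nat) \<Rightarrow> (nat \<Rightarrow> nat) \<Rightarrow> complex" where
  "eL_coef i b c = J_coef (gadd b (gbasis (Suc 0) i)) c * chi (a i) c * inverse (J_coef b c)"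
definition eR_coef :: "nat \<Rightarrow> (nat \<Rightarrow> nat) \<Rightarrow> (nat \<Rightarrow> nat) \<Rightarrow> complex" where
  "eR_coef i b c = J_coef b (gadd c (gbasis (Suc 0) i)) * inverse (J_coef b c)"

lemma conjJ_cop_e:
  assumes i: "i < m"
  shows "conjJ (cop H (e i)) = mul2 H (tens (e i) (unt H)) (diag2 (eL_coef i)) + mul2 H (tens (unt H) (e i)) (diag2 (eR_coef i))"
proof -
  let ?J = "diag2 J_coef" and ?J' = "diag2 (\<lambda>b c. inverse (J_coef b c))" and ?eL = "tens (e i) (unt H)" and ?eR = "tens (unt H) (e i)"
  have V: "?J \<in> V2 dH" "?J' \<in> V2 dH" "?eL \<in> V2 dH" "?eR \<in> V2 dH"
    by (simp_all add: diag2_V2 tens_V2 e_V1 i unt_V1)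
  have c: "cop H (e i) = mul2 H ?eL (diag2 (\<lambda>b c. chi (a i) c)) + ?eR"
  proof -
    have "cop H (e i) = tens (e i) (Kel H g m a i) + tens (unt H) (e i)"
      using e_cop i by (simp add: fun_eq_iff tens_def)
    moreover have "tens (e i) (Kel H g m a i) = mul2 H ?eL (tens (unt H) (Kel H g m a i))"
      by (simp add: mul2_tens mul_unt_l mul_unt_r e_V1 i Kel_eq gmon_V1)
    moreover have "tens (unt H) (Kel H g m a i) = diag2 (\<lambda>b c. chi (a i) c)"
      by (simp add: Kel_eq gmon_diag1 unt_diag1 tens_diag1)
    ultimately show ?thesis by simp
  qed
  have t1: "conjJ (mul2 H ?eL (diag2 (\<lambda>b c. chi (a i) c))) = mul2 H ?eL (diag2 (eL_coef i))"
  proof -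
    have "conjJ (mul2 H ?eL (diag2 (\<lambda>b c. chi (a i) c))) = mul2 H (mul2 H (mul2 H ?J ?eL) (diag2 (\<lambda>b c. chi (a i) c))) ?J'"
      by (simp add: conjJ_def mul2_assoc V diag2_V2)
    also have "\<dots> = mul2 H ?eL (mul2 H (mul2 H (diag2 (\<lambda>b c. J_coef (gadd b (gbasis (Suc 0) i)) c)) (diag2 (\<lambda>b c. chi (a i) c))) ?J')"
      by (simp add: diag2_mul_e_left i mul2_assoc V diag2_V2 mul2_V2)
    also have "\<dots> = mul2 H ?eL (diag2 (eL_coef i))" by (simp add: diag2_mul eL_coef_def[abs_def])
    finally show ?thesis .
  qed
  have t2: "conjJ ?eR = mul2 H ?eR (diag2 (eR_coef i))"
  proof -
    have "conjJ ?eR = mul2 H (mul2 H ?eR (diag2 (\<lambda>b c. J_coef b (gadd c (gbasis (Suc 0) i))))) ?J'"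
      by (simp add: conjJ_def diag2_mul_e_right i)
    also have "\<dots> = mul2 H ?eR (diag2 (eR_coef i))" by (simp add: mul2_assoc V diag2_V2 diag2_mul eR_coef_def[abs_def])
    finally show ?thesis .
  qed
  show ?thesis by (simp add: c conjJ_add t1 t2)
qed

lemma J_coef_gbasis1_left: "J_coef (gbasis (Suc 0) i) c = (if i < m then (\<Prod>j<m. qpow (- (int (a i j) * int (nfloor (c j))))) else 1)"
proof (cases "i < m")
  case True
  then show ?thesis unfolding J_coef_eq
    by (subst prod_single[of _ i]) (simp_all add: gbasis_apply qpow_def)
next
  case False
  then show ?thesis unfolding J_coef_eq by (simp add: gbasis_apply qpow_def)
qed

lemma eL_coef_eq:
  assumes i: "i < m" and b: "b \<in> Gnm" and c: "c \<in> Gnm"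
  shows "eL_coef i b c = (\<Prod>j<m. qpow (int (a i j) * int (c j mod n)))"
proof -
  have "eL_coef i b c = J_coef (gbasis (Suc 0) i) c * chi (a i) c" by (simp add: eL_coef_def J_coef_gadd_left J_coef_nonzero)
  also have "\<dots> = (\<Prod>j<m. qpow (- (int (a i j) * int (nfloor (c j)))) * qpow (int (a i j) * int (c j)))"
    by (simp add: J_coef_gbasis1_left i chi_def prod.distrib)
  also have "\<dots> = (\<Prod>j<m. qpow (int (a i j) * int (c j mod n)))"
    by (intro prod.cong refl) (simp add: qpow_add[symmetric] int_nfloor algebra_simps)
  finally show ?thesis .
qed

lemma periodic2_eL_coef: "i < m \<Longrightarrow> periodic2 (eL_coef i)"
  unfolding periodic2_def by (simp add: eL_coef_eq gred_Gnm gred_apply)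
lemma J_coef_gbasis1_right: "J_coef b (gbasis (Suc 0) i) = 1"
  unfolding J_coef_eq by (rule prod.neutral, rule ballI, rule prod.neutral) (use n2 in \<open>auto simp: gbasis_def nfloor_def qpow_def\<close>)
lemma eR_coef_Phi_coef: "eR_coef i b c = Phi_coef b c (gbasis (Suc 0) i)" by (simp add: eR_coef_def Phi_coef_def J_coef_gbasis1_right)

lemma periodic2_eR_coef: "periodic2 (eR_coef i)"
  unfolding periodic2_def
proof (intro ballI)
  fix b c assume b: "b \<in> Gnm" and c: "c \<in> Gnm"
  have "Phi_coef (gred b) (gred c) (gred (gbasis (Suc 0) i)) = Phi_coef b c (gbasis (Suc 0) i)"
    using Phi_coef_periodic b c gbasis1_Gnm by (simp add: periodic3_def)
  then show "eR_coef i (gred b) (gred c) = eR_coef i b c" by (simp add: eR_coef_Phi_coef gred_gbasis1)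
qed

lemma periodic1_pw_n: "periodic1 (\<lambda>b. q ^ (n * b i))"
  unfolding periodic1_def
proof (intro ballI)
  fix b assume b: "b \<in> Gnm"
  show "q ^ (n * gred b i) = q ^ (n * b i)"
  proof (cases "i < m")
    case True
    have "qpow (int n * int (b i mod n)) = qpow (int n * (int (b i) mod int n))" by (simp add: zmod_int)
    also have "\<dots> = qpow (int n * int (b i))" by (rule qpow_n_mod[symmetric])
    finally show ?thesis using True by (simp add: gred_apply qpow_int[symmetric])
  next
    case False then show ?thesis using b by (simp add: gred_def Gnm_iff)
  qed
qed

lemma conjJ_cop_pw_n_span2:
  assumes i: "i < m"
  shows "conjJ (cop H (pw H (g i) n)) \<in> span2 Asub"
proof -
  let ?x = "pw H (g i) n"
  have cx: "cop H ?x = tens ?x ?x" using cop_diag_pw[of "g i" n] g_V1 g_cop i by (simp add: cop_diag_def)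
  have tx: "tens ?x ?x = diag2 (\<lambda>b c. q ^ (n * b i) * q ^ (n * c i))" by (simp only: pw_diag1[OF i] tens_diag1)
  have "conjJ (cop H ?x) = tens ?x ?x" by (simp only: cx tx conjJ_diag2)
  then show ?thesis by (simp only:) (rule span2.tens; rule pw_n_Asub[OF i])
qed

lemma conjJ_cop_e_span2:
  assumes i: "i < m"
  shows "conjJ (cop H (e i)) \<in> span2 Asub"
proof -
  have d1: "diag2 (eL_coef i) \<in> span2 Asub" by (rule diag2_span2[OF periodic2_eL_coef[OF i]])
  have d2: "diag2 (eR_coef i) \<in> span2 Asub" by (rule diag2_span2[OF periodic2_eR_coef])
  have t1: "tens (e i) (unt H) \<in> span2 Asub" "tens (unt H) (e i) \<in> span2 Asub"
    by (rule span2.tens[OF e_Asub[OF i] unt_Asub], rule span2.tens[OF unt_Asub e_Asub[OF i]])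
  show ?thesis unfolding conjJ_cop_e[OF i]
    by (rule span2.add[OF span2_mul[OF t1(1) d1] span2_mul[OF t1(2) d2]])
qed

lemma conjJ_cop_span2: assumes x: "x \<in> Asub" shows "conjJ (cop H x) \<in> span2 Asub"
  using x
proof (induct x rule: alg_gen.induct)
  case unit
  have "conjJ (cop H (unt H)) = conjJ (diag2 (\<lambda>_ _. 1))" by (simp only: cop_unt one2_diag2)
  also have "\<dots> = diag2 (\<lambda>_ _. 1)" by (rule conjJ_diag2)
  also have "\<dots> = tens (unt H) (unt H)" by (simp only: one2_diag2[symmetric] one2_eq)
  finally show ?case by (simp only:) (rule span2.tens[OF unt_Asub unt_Asub])
next
  case (gen x)
  then show ?case using conjJ_cop_pw_n_span2 conjJ_cop_e_span2 by auto
next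
  case (add x y)
  have e: "(\<lambda>k. x k + y k) = x + y" by (simp add: fun_eq_iff)
  have i1: "conjJ (cop H x) \<in> span2 Asub" "conjJ (cop H y) \<in> span2 Asub" using add by auto
  show ?case unfolding e cop_add conjJ_add by (rule span2.add[OF i1])
next
  case (smul x c)
  have "conjJ (cop H x) \<in> span2 Asub" using smul by auto
  then show ?case unfolding cop_scal conjJ_scal2 by (rule span2_scal2)
next
  case (mult x y)
  have v: "x \<in> V1 dH" "y \<in> V1 dH" using mult by (auto intro: Asub_V1)
  have i1: "conjJ (cop H x) \<in> span2 Asub" "conjJ (cop H y) \<in> span2 Asub" using mult by auto
  show ?case unfolding cop_mul[OF v] conjJ_mul[OF cop_V2 cop_V2] by (rule span2_mul[OF i1])
qed

lemma copJ_r_tens: "x \<in> V1 dH \<Longrightarrow> copJ_r H (diag2 J_coef) (tens x y) = ltens x (conjJ (cop H y))"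
  by (simp add: copJ_r_def inv2_J lone_eq cop_r_tens ltens_mul diag2_V2 cop_V2 mul2_V2 mul_unt_l mul_unt_r conjJ_def)
lemma copJ_l_tens: "y \<in> V1 dH \<Longrightarrow> copJ_l H (diag2 J_coef) (tens x y) = rtens (conjJ (cop H x)) y"
  by (simp add: copJ_l_def inv2_J rone_eq cop_l_tens rtens_mul diag2_V2 cop_V2 mul2_V2 mul_unt_l mul_unt_r conjJ_def)

lemma copJ_r_span3: assumes F: "F \<in> span2 Asub" shows "copJ_r H (diag2 J_coef) F \<in> span3 Asub"
  using F
proof (induction rule: span2.induct)
  case zero then show ?case by (simp only: copJ_r_zero) (rule span3.zero)
next
  case (tens x y)
  have eq: "copJ_r H (diag2 J_coef) (tens x y) = ltens x (conjJ (cop H y))" using tens by (simp add: copJ_r_tens Asub_V1)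
  show ?case unfolding eq by (rule ltens_span3[OF tens.hyps(1) conjJ_cop_span2[OF tens.hyps(2)]])
next
  case (add X Y) then show ?case by (simp only: copJ_r_add) (rule span3.add)
qed

lemma copJ_l_span3: assumes F: "F \<in> span2 Asub" shows "copJ_l H (diag2 J_coef) F \<in> span3 Asub"
  using F
proof (induction rule: span2.induct)
  case zero then show ?case by (simp only: copJ_l_zero) (rule span3.zero)
next
  case (tens x y)
  have eq: "copJ_l H (diag2 J_coef) (tens x y) = rtens (conjJ (cop H x)) y" using tens by (simp add: copJ_l_tens Asub_V1)
  show ?case unfolding eq by (rule rtens_span3[OF tens.hyps(2) conjJ_cop_span2[OF tens.hyps(1)]])
next
  case (add X Y) then show ?case by (simp only: copJ_l_add) (rule span3.add)
qed

lemma PhiF_span3: assumes F: "F \<in> span2 Asub" and G: "G \<in> span2 Asub" shows "PhiF F G \<in> span3 Asub"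
proof -
  have l: "lone H F \<in> span3 Asub" unfolding lone_eq by (rule ltens_span3[OF unt_Asub F])
  have r: "rone H G \<in> span3 Asub" unfolding rone_eq by (rule rtens_span3[OF unt_Asub G])
  have p: "PhiJ H (Jel H q n m a g) \<in> span3 Asub" unfolding Jel_diag2 PhiJ_diag3 by (rule diag3_span3[OF Phi_coef_periodic])
  show ?thesis unfolding PhiF_def Jel_diag2
    by (intro span3_mul l r copJ_r_span3 copJ_l_span3 F G p[unfolded Jel_diag2])
qed

lemma one3_span3: "one3 H \<in> span3 Asub" unfolding one3_eq by (rule span3.tens[OF unt_Asub unt_Asub unt_Asub])

lemma PhiF_one3_of_iso:
  assumes F: "F \<in> span2 Asub" and G: "G \<in> span2 Asub"
    and bij: "bij_betw (lmap dH dB f) Asub (V1 dB)" and unt: "lmap dH dB f (unt H) = unt B"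
    and triv: "lmap3 dH dB f (PhiF F G) = one3 B"
  shows "PhiF F G = one3 H"
proof (rule lmap3_inj_on_span3[OF bij _ alg_gen_plus alg_gen.smul PhiF_span3[OF F G] one3_span3])
  show "Asub \<subseteq> V1 dH" using Asub_V1 by blast
  show "lmap3 dH dB f (PhiF F G) = lmap3 dH dB f (one3 H)"
    using triv unt by (simp add: one3_eq lmap3_tens3)
qed

end

section \<open>The Hopf projection onto the group algebra\<close>

locale projection = construction H n q m g e a for H n q m g e a +
  fixes p :: "nat \<Rightarrow> nat \<Rightarrow> complex"
  assumes hom: "hopf_hom H H p"
    and pg: "\<forall>i<m. lmap (dim H) (dim H) p (g i) = g i"
    and pe: "\<forall>i<m. lmap (dim H) (dim H) p (e i) = (\<lambda>_. 0)"
begin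

abbreviation "pr \<equiv> lmap dH dH p"
abbreviation "pr2 \<equiv> lmap2 dH dH p"
abbreviation "pr3 \<equiv> lmap3 dH dH p"

lemma pr_mul: "x \<in> V1 dH \<Longrightarrow> y \<in> V1 dH \<Longrightarrow> pr (mul H x y) = mul H (pr x) (pr y)"
  using hom by (simp add: hopf_hom_def)
lemma pr_unt: "pr (unt H) = unt H" using hom by (simp add: hopf_hom_def)
lemma pr_cop: "x \<in> V1 dH \<Longrightarrow> cop H (pr x) = pr2 (cop H x)" using hom by (simp add: hopf_hom_def)
lemma pr_g: "i < m \<Longrightarrow> pr (g i) = g i" using pg by simp
lemma pr_e: "i < m \<Longrightarrow> pr (e i) = 0" using pe by (simp add: zero_fun_def)
lemma pr_pw: "i < m \<Longrightarrow> pr (pw H (g i) t) = pw H (g i) t"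
  by (induction t) (simp_all add: pr_unt pw_Suc pr_mul g_V1 pw_V1 pr_g)

lemma pr_gmon: "pr (gmon H g m al) = gmon H g m al"
proof -
  have "k \<le> m \<Longrightarrow> pr (mprod H (\<lambda>i. pw H (g i) (al i)) k) = mprod H (\<lambda>i. pw H (g i) (al i)) k" for k
    by (induction k) (simp_all add: pr_unt pr_mul mprod_V1 pw_V1 pr_pw)
  then show ?thesis by (simp add: gmon_def)
qed

lemma pr_idem: "pr (I b) = I b" by (simp add: idem_eq[of b] lmap_scal lmap_sum pr_gmon)
lemma pr_diag1: "pr (diag1 h) = diag1 h" by (simp add: diag1_def lmap_sum lmap_scal pr_idem)
lemma pr2_diag2: "pr2 (diag2 h) = diag2 h" by (simp add: diag2_def lmap2_sum lmap2_scal2 lmap2_tens pr_idem)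
lemma pr3_diag3: "pr3 (diag3 h) = diag3 h" by (simp add: diag3_def lmap3_sum lmap3_scal3 lmap3_tens3 pr_idem)

lemma pr2_mul: assumes X: "X \<in> V2 dH" and Y: "Y \<in> V2 dH" shows "pr2 (mul2 H X Y) = mul2 H (pr2 X) (pr2 Y)"
proof -
  have s1: "pr2 (mul2 H (tens x y) Y) = mul2 H (tens (pr x) (pr y)) (pr2 Y)"
    if "x \<in> V1 dH" "y \<in> V1 dH" "Y \<in> V2 dH" for x y Y
    by (rule linear_ext_eq2[of Y dH "\<lambda>Y. pr2 (mul2 H (tens x y) Y)" scal2 "\<lambda>Y. mul2 H (tens (pr x) (pr y)) (pr2 Y)"])
       (simp_all add: that mul2_add_r mul2_scal2_r lmap2_add lmap2_scal2 mul2_tens lmap2_tens pr_mul bv_V1)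
  show ?thesis
    by (rule linear_ext_eq2[of X dH "\<lambda>X. pr2 (mul2 H X Y)" scal2 "\<lambda>X. mul2 H (pr2 X) (pr2 Y)"])
       (simp_all add: X Y mul2_add_l mul2_scal2_l lmap2_add lmap2_scal2 s1 bv_V1 lmap2_tens)
qed

lemma pr3_mul: assumes X: "X \<in> V3 dH" and Y: "Y \<in> V3 dH" shows "pr3 (mul3 H X Y) = mul3 H (pr3 X) (pr3 Y)"
proof -
  have s1: "pr3 (mul3 H (tens3 x y z) Y) = mul3 H (tens3 (pr x) (pr y) (pr z)) (pr3 Y)"
    if "x \<in> V1 dH" "y \<in> V1 dH" "z \<in> V1 dH" "Y \<in> V3 dH" for x y z Y
    by (rule linear_ext_eq3[of Y dH "\<lambda>Y. pr3 (mul3 H (tens3 x y z) Y)" scal3 "\<lambda>Y. mul3 H (tens3 (pr x) (pr y) (pr z)) (pr3 Y)"])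
       (simp_all add: that mul3_add_r mul3_scal3_r lmap3_add lmap3_scal3 mul3_tens3 lmap3_tens3 pr_mul bv_V1)
  show ?thesis
    by (rule linear_ext_eq3[of X dH "\<lambda>X. pr3 (mul3 H X Y)" scal3 "\<lambda>X. mul3 H (pr3 X) (pr3 Y)"])
       (simp_all add: X Y mul3_add_l mul3_scal3_l lmap3_add lmap3_scal3 s1 bv_V1 lmap3_tens3)
qed

lemma pr3_ltens: assumes Y: "Y \<in> V2 dH" shows "pr3 (ltens x Y) = ltens (pr x) (pr2 Y)"
  by (rule linear_ext_eq2[of Y dH "\<lambda>Y. pr3 (ltens x Y)" scal3 "\<lambda>Y. ltens (pr x) (pr2 Y)"])
     (simp_all add: Y ltens_add_r ltens_scal2_r lmap3_add lmap3_scal3 lmap2_add lmap2_scal2 ltens_tens lmap3_tens3 lmap2_tens)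

lemma pr3_rtens: assumes Y: "Y \<in> V2 dH" shows "pr3 (rtens Y x) = rtens (pr2 Y) (pr x)"
  by (rule linear_ext_eq2[of Y dH "\<lambda>Y. pr3 (rtens Y x)" scal3 "\<lambda>Y. rtens (pr2 Y) (pr x)"])
     (simp_all add: Y rtens_add_l rtens_scal2_l lmap3_add lmap3_scal3 lmap2_add lmap2_scal2 rtens_tens lmap3_tens3 lmap2_tens)

lemma pr3_lone: "Y \<in> V2 dH \<Longrightarrow> pr3 (lone H Y) = lone H (pr2 Y)" by (simp add: lone_eq pr3_ltens pr_unt)
lemma pr3_rone: "Y \<in> V2 dH \<Longrightarrow> pr3 (rone H Y) = rone H (pr2 Y)" by (simp add: rone_eq pr3_rtens pr_unt)

lemma pr3_cop_r: assumes X: "X \<in> V2 dH" shows "pr3 (cop_r H X) = cop_r H (pr2 X)"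
  by (rule linear_ext_eq2[of X dH "\<lambda>X. pr3 (cop_r H X)" scal3 "\<lambda>X. cop_r H (pr2 X)"])
     (simp_all add: X cop_r_add cop_r_scal2 lmap3_add lmap3_scal3 lmap2_add lmap2_scal2 lmap2_tens cop_r_tens bv_V1
       lmap_V1 pr3_ltens cop_V2 pr_cop)

lemma pr3_cop_l: assumes X: "X \<in> V2 dH" shows "pr3 (cop_l H X) = cop_l H (pr2 X)"
  by (rule linear_ext_eq2[of X dH "\<lambda>X. pr3 (cop_l H X)" scal3 "\<lambda>X. cop_l H (pr2 X)"])
     (simp_all add: X cop_l_add cop_l_scal2 lmap3_add lmap3_scal3 lmap2_add lmap2_scal2 lmap2_tens cop_l_tens bv_V1
       lmap_V1 pr3_rtens cop_V2 pr_cop)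

lemma pr3_copJ_r: "F \<in> V2 dH \<Longrightarrow> pr3 (copJ_r H (diag2 J_coef) F) = copJ_r H (diag2 J_coef) (pr2 F)"
  by (simp add: copJ_r_def inv2_J pr3_mul mul3_V3 lone_V3 diag2_V2 cop_r_V3 pr3_lone pr3_cop_r pr2_diag2)
lemma pr3_copJ_l: "F \<in> V2 dH \<Longrightarrow> pr3 (copJ_l H (diag2 J_coef) F) = copJ_l H (diag2 J_coef) (pr2 F)"
  by (simp add: copJ_l_def inv2_J pr3_mul mul3_V3 rone_V3 diag2_V2 cop_l_V3 pr3_rone pr3_cop_l pr2_diag2)

lemma pr3_PhiF: "F \<in> V2 dH \<Longrightarrow> G \<in> V2 dH \<Longrightarrow> pr3 (PhiF F G) = PhiF (pr2 F) (pr2 G)"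
  by (simp add: PhiF_def Jel_diag2 PhiJ_diag3 pr3_mul mul3_V3 lone_V3 rone_V3 pr3_lone pr3_rone pr3_copJ_r pr3_copJ_l pr3_diag3
      copJ_r_V3 copJ_l_V3 diag3_V3)

lemma pr_Asub_diag1: assumes x: "x \<in> Asub" shows "\<exists>h. periodic1 h \<and> pr x = diag1 h"
  using x
proof (induct x rule: alg_gen.induct)
  case unit then show ?case by (intro exI[of _ "\<lambda>_. 1"]) (simp add: periodic1_def pr_diag1 unt_diag1)
next
  case (gen x)
  then consider (p) i where "i < m" "x = pw H (g i) n" | (e) i where "i < m" "x = e i" by auto
  then show ?case
  proof cases
    case p then show ?thesis by (intro exI[of _ "\<lambda>b. q ^ (n * b i)"]) (simp add: periodic1_pw_n pr_diag1 pw_diag1)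
  next
    case e then show ?thesis by (intro exI[of _ "\<lambda>_. 0"]) (simp add: periodic1_def pr_e diag1_zero)
  qed
next
  case (add x y)
  then obtain h k where h: "periodic1 h" "pr x = diag1 h" and k: "periodic1 k" "pr y = diag1 k" by auto
  have e: "(\<lambda>k. x k + y k) = x + y" by (simp add: fun_eq_iff)
  show ?case unfolding e lmap_add
    by (intro exI[of _ "\<lambda>b. h b + k b"]) (use h k in \<open>simp add: diag1_add periodic1_def\<close>)
next
  case (smul x c)
  then obtain h where h: "periodic1 h" "pr x = diag1 h" by auto
  show ?case unfolding lmap_scal
    by (intro exI[of _ "\<lambda>b. c * h b"]) (use h in \<open>simp add: diag1_scal periodic1_def\<close>)
next
  case (mult x y)
  then obtain h k where h: "periodic1 h" "pr x = diag1 h" and k: "periodic1 k" "pr y = diag1 k" by auto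
  have v: "x \<in> V1 dH" "y \<in> V1 dH" using mult by (auto intro: Asub_V1)
  show ?case unfolding pr_mul[OF v]
    by (intro exI[of _ "\<lambda>b. h b * k b"]) (use h k in \<open>simp add: diag1_mul periodic1_def\<close>)
qed

lemma pr2_span2_diag2: assumes F: "F \<in> span2 Asub" shows "\<exists>f. periodic2 f \<and> pr2 F = diag2 f"
  using F
proof (induction rule: span2.induct)
  case zero then show ?case by (intro exI[of _ "\<lambda>_ _. 0"]) (simp add: v2_zero_eta periodic2_def diag2_zero)
next
  case (tens x y)
  obtain h where h: "periodic1 h" "pr x = diag1 h" using pr_Asub_diag1 tens by blast
  obtain k where k: "periodic1 k" "pr y = diag1 k" using pr_Asub_diag1 tens by blast
  show ?case
    by (intro exI[of _ "\<lambda>b c. h b * k c"]) (use h k in \<open>simp add: lmap2_tens tens_diag1 periodic1_def periodic2_def\<close>)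
next
  case (add X Y)
  then obtain f f' where f: "periodic2 f" "pr2 X = diag2 f" and f': "periodic2 f'" "pr2 Y = diag2 f'" by auto
  show ?case unfolding v2_plus_eta lmap2_add
    by (intro exI[of _ "\<lambda>b c. f b c + f' b c"]) (use f f' in \<open>simp add: diag2_add periodic2_def\<close>)
qed

lemma pr_twist_diag:
  assumes F: "F \<in> span2 Asub" and G: "G \<in> span2 Asub" and FG: "mul2 H F G = one2 H"
    and triv: "PhiF F G = one3 H"
  obtains f f' where "periodic2 f" and "\<And>b c. b \<in> Gnm \<Longrightarrow> c \<in> Gnm \<Longrightarrow> f b c * f' b c = 1"
    and "PhiF (diag2 f) (diag2 f') = one3 H"
proof -
  have FV: "F \<in> V2 dH" "G \<in> V2 dH" using F G by (simp_all add: span2_V2)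
  obtain f where f: "periodic2 f" "pr2 F = diag2 f" using pr2_span2_diag2[OF F] by blast
  obtain f' where f': "pr2 G = diag2 f'" using pr2_span2_diag2[OF G] by blast
  have "diag2 (\<lambda>b c. f b c * f' b c) = mul2 H (pr2 F) (pr2 G)" by (simp add: f f' diag2_mul)
  also have "\<dots> = pr2 (mul2 H F G)" by (rule pr2_mul[OF FV, symmetric])
  also have "\<dots> = diag2 (\<lambda>_ _. 1)" by (simp add: FG one2_diag2 pr2_diag2)
  finally have "f b c * f' b c = 1" if "b \<in> Gnm" "c \<in> Gnm" for b c
    using diag2_coeff_eq that by force
  moreover have "PhiF (diag2 f) (diag2 f') = one3 H"
    using pr3_PhiF[OF FV] triv by (simp add: f f' one3_diag3 pr3_diag3)
  ultimately show ?thesis using that f(1) by blast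
qed

lemma not_twist_equiv_hopf:
  assumes i: "i < m" and ai: "a i i mod n \<noteq> 0"
  shows "\<not> twist_equiv_hopf H Asub (Jel H q n m a g) (PhiJ H (Jel H q n m a g))"
proof
  assume "twist_equiv_hopf H Asub (Jel H q n m a g) (PhiJ H (Jel H q n m a g))"
  then obtain F G B f where F: "F \<in> tens2 Asub" and G: "G \<in> tens2 Asub" and FG: "mul2 H F G = one2 H"
    and bij: "bij_betw (lmap dH (dim B) f) Asub (V1 (dim B))"
    and unt: "lmap dH (dim B) f (unt H) = unt B"
    and triv: "lmap3 dH (dim B) f (PhiF F G) = one3 B"
    unfolding twist_equiv_hopf_def PhiF_def by blast
  have F2: "F \<in> span2 Asub" and G2: "G \<in> span2 Asub" using F G by (simp_all add: tens2_span2)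
  obtain f f' where per: "periodic2 f" and inv: "\<And>b c. b \<in> Gnm \<Longrightarrow> c \<in> Gnm \<Longrightarrow> f b c * f' b c = 1"
    and triv': "PhiF (diag2 f) (diag2 f') = one3 H"
    using pr_twist_diag[OF F2 G2 FG PhiF_one3_of_iso[OF F2 G2 bij unt triv]] by blast
  have nz: "f b c \<noteq> 0" if "b \<in> Gnm" "c \<in> Gnm" for b c using inv[OF that] by auto
  show False
    using no_periodic_trivialization[OF i ai per nz PhiF_trivial_cocycle[OF inv triv']] by blast
qed

end

theorem mainTheorem6:
  fixes H :: hopf_data and n m :: nat and q :: complex
    and g e :: "nat \<Rightarrow> v1" and a :: "nat \<Rightarrow> nat \<Rightarrow> nat"
  assumes hopf: "is_hopf H"
    and n2: "n \<ge> 2" and m1: "m \<ge> 1"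
    and q_root: "q ^ (n^2) = 1" "\<forall>k. 0 < k \<and> k < n^2 \<longrightarrow> q ^ k \<noteq> 1"
    and gens_in: "\<forall>i<m. g i \<in> V1 (dim H) \<and> e i \<in> V1 (dim H)"
    and g_grouplike: "\<forall>i<m. grouplike H (g i)"
    and g_order: "\<forall>i<m. pw H (g i) (n^2) = unt H"
    and g_comm: "\<forall>i<m. \<forall>j<m. mul H (g i) (g j) = mul H (g j) (g i)"
    and g_e: "\<forall>i<m. \<forall>j<m. mul H (g i) (e j) = scal (if i = j then q else 1) (mul H (e j) (g i))"
    and a_range: "\<forall>i<m. \<forall>j<m. a i j < n^2"
    and e_cop: "\<forall>i<m. cop H (e i) = (\<lambda>k l. e i k * Kel H g m a i l + unt H k * e i l)"
    and generated: "alg_gen H ({g i | i. i < m} \<union> {e i | i. i < m}) = V1 (dim H)"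
    and proj: "\<exists>p. hopf_hom H H p \<and>
                 (\<forall>i<m. lmap (dim H) (dim H) p (g i) = g i \<and> lmap (dim H) (dim H) p (e i) = (\<lambda>_. 0))"
    and group_alg: "inj_on (gmon H g m) (Gm n m)"
    and a_diag: "\<exists>i<m. a i i mod n \<noteq> 0"
  shows "PhiJ H (Jel H q n m a g) \<noteq> one3 H \<and>
         \<not> twist_equiv_hopf H (alg_gen H ({pw H (g i) n | i. i < m} \<union> {e i | i. i < m}))
              (Jel H q n m a g) (PhiJ H (Jel H q n m a g))"
proof -
  \<comment> \<open>Not needed: \<open>m1\<close> (implied by \<open>a_diag\<close>), \<open>a_range\<close> (the exponents \<open>a i j\<close> only matter
    modulo \<open>n\<^sup>2\<close>) and \<open>generated\<close> (the argument takes place inside \<open>H\<close> anyway).\<close>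
  interpret construction H n q m g e a
    using hopf n2 q_root gens_in g_grouplike g_order g_comm g_e e_cop group_alg by unfold_locales auto
  obtain p where "hopf_hom H H p" "\<forall>i<m. lmap (dim H) (dim H) p (g i) = g i"
    "\<forall>i<m. lmap (dim H) (dim H) p (e i) = (\<lambda>_. 0)"
    using proj by blast
  then interpret projection H n q m g e a p by unfold_locales
  obtain i where "i < m" "a i i mod n \<noteq> 0" using a_diag by blast
  then show ?thesis using PhiJ_nontrivial not_twist_equiv_hopf by blast
qed

end
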